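(* The functors $T\circ\mathbf F_{\mathcal{WHB}}$ and $\mathbf F_{\mathcal{TBA}}$ from $\mathsf{Set}$ to $\mathsf{TBA}$ are naturally isomorphic.
   Context: A WHB-algebra is an algebra $(A,\wedge,\vee,\to,\leftarrow,0,1)$ such that $(A,\wedge,\vee,0,1)$ is a bounded distributive lattice and for all $a,b,c\in A$: $a\to a=1$; $a\to(b\wedge c)=(a\to b)\wedge(a\to c)$; $(a\vee b)\to c=(a\to c)\wedge(b\to c)$; $(a\to b)\wedge(b\to c)\le a\to c$; $a\leftarrow a=0$; $(a\vee b)\leftarrow c=(a\leftarrow c)\vee(b\leftarrow c)$; $a\leftarrow(b\wedge c)=(a\leftarrow b)\vee(a\leftarrow c)$; $a\leftarrow c\le(a\leftarrow b)\vee(b\leftarrow c)$; $a\wedge((a\to b)\leftarrow 0)\le b$; $a\le b\vee(1\to(a\leftarrow b))$. A tense algebra is $(\mathbf B,G,H)$ with $\mathbf B$ a Boolean algebra and unary $G,H$ such that, with $P(x)=\neg H(\neg x)$, $F(x)=\neg G(\neg x)$: $P(x)\le y\iff x\le G(y)$ and $F(x)\le y\iff x\le H(y)$; $\mathsf{TBA}$ is the category of tense algebras and homomorphisms, $\mathsf{WHB}$ that of WHB-algebras. For a variety $\mathcal V$, $\mathbf F_{\mathcal V}\colon\mathsf{Set}\to\mathcal V$ is the free-algebra functor: $\mathbf F_{\mathcal V}(X)$ is the $\mathcal V$-free algebra over $X$ and, for $l\colon X\to Y$, $\mathbf F_{\mathcal V}(l)$ is the unique homomorphism extending $x\mapsto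 l(x)$. For a WHB-algebra $\mathbf A$: $X(\mathbf A)$ is its set of prime filters, $\sigma_{\mathbf A}(a)=\{P\colon a\in P\}$, $\tau_{\mathbf A}$ the topology with subbase $\{\sigma_{\mathbf A}(a)\}\cup\{X(\mathbf A)\setminus\sigma_{\mathbf A}(a)\}$; $(P,Q)\in R_{\mathbf A}$ iff for all $a,b$ ($a\to b\in P$, $a\in Q$ imply $b\in Q$); $(P,Q)\in S_{\mathbf A}$ iff for all $a,b$ ($a\in Q$, $b\notin Q$ imply $a\leftarrow b\in P$). $T(\mathbf A)$ is the Boolean algebra of $\tau_{\mathbf A}$-clopen subsets of $X(\mathbf A)$ with $G_{\mathbf A}(U)=\{P\colon R_{\mathbf A}(P)\subseteq U\}$ and $H_{\mathbf A}(U)=\{P\colon S_{\mathbf A}(P)\subseteq U\}$ (where $\mathcal R(P)=\{Q\colon(P,Q)\in\mathcal R\}$); for a homomorphism $h\colon\mathbf A\to\mathbf B$, $T(h)(U)=\{Q\in X(\mathbf B)\colon h^{-1}(Q)\in U\}$. *)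

theory Defs
  imports "HOL-Analysis.Abstract_Topology"
begin

record 'a whb =
  wcar :: "'a set"
  wmeet :: "'a \<Rightarrow> 'a \<Rightarrow> 'a"
  wjoin :: "'a \<Rightarrow> 'a \<Rightarrow> 'a"
  wimp :: "'a \<Rightarrow> 'a \<Rightarrow> 'a"
  wcoimp :: "'a \<Rightarrow> 'a \<Rightarrow> 'a"
  wzero :: "'a"
  wone :: "'a"

record 'a tba =
  tcar :: "'a set"
  tmeet :: "'a \<Rightarrow> 'a \<Rightarrow> 'a"
  tjoin :: "'a \<Rightarrow> 'a \<Rightarrow> 'a"
  tneg :: "'a \<Rightarrow> 'a"
  tzero :: "'a"
  tone :: "'a"
  tG :: "'a \<Rightarrow> 'a"
  tH :: "'a \<Rightarrow> 'a"

definition bdlattice :: "'a set \<Rightarrow> ('a \<Rightarrow> 'a \<Rightarrow> 'a) \<Rightarrow> ('a \<Rightarrow> 'a \<Rightarrow> 'a) \<Rightarrow> 'a \<Rightarrow> 'a \<Rightarrow> bool" where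
  "bdlattice C m j z u \<longleftrightarrow>
     z \<in> C \<and> u \<in> C \<and>
     (\<forall>a\<in>C. \<forall>b\<in>C. m a b \<in> C \<and> j a b \<in> C) \<and>
     (\<forall>a\<in>C. \<forall>b\<in>C. m a b = m b a \<and> j a b = j b a) \<and>
     (\<forall>a\<in>C. \<forall>b\<in>C. \<forall>c\<in>C. m a (m b c) = m (m a b) c \<and> j a (j b c) = j (j a b) c) \<and>
     (\<forall>a\<in>C. \<forall>b\<in>C. m a (j a b) = a \<and> j a (m a b) = a) \<and>
     (\<forall>a\<in>C. \<forall>b\<in>C. \<forall>c\<in>C. m a (j b c) = j (m a b) (m a c)) \<and>
     (\<forall>a\<in>C. m z a = z \<and> j u a = u)"

definition wle :: "('a, 'b) whb_scheme \<Rightarrow> 'a \<Rightarrow> 'a \<Rightarrow> bool" where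
  "wle A a b \<longleftrightarrow> wmeet A a b = a"

definition tle :: "('a, 'b) tba_scheme \<Rightarrow> 'a \<Rightarrow> 'a \<Rightarrow> bool" where
  "tle A a b \<longleftrightarrow> tmeet A a b = a"

definition is_whb :: "('a, 'b) whb_scheme \<Rightarrow> bool" where
  "is_whb A \<longleftrightarrow>
     bdlattice (wcar A) (wmeet A) (wjoin A) (wzero A) (wone A) \<and>
     (\<forall>a\<in>wcar A. \<forall>b\<in>wcar A. wimp A a b \<in> wcar A \<and> wcoimp A a b \<in> wcar A) \<and>
     (\<forall>a\<in>wcar A. \<forall>b\<in>wcar A. \<forall>c\<in>wcar A.
        wimp A a a = wone A \<and>
        wimp A a (wmeet A b c) = wmeet A (wimp A a b) (wimp A a c) \<and>
        wimp A (wjoin A a b) c = wmeet A (wimp A a c) (wimp A b c) \<and>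
        wle A (wmeet A (wimp A a b) (wimp A b c)) (wimp A a c) \<and>
        wcoimp A a a = wzero A \<and>
        wcoimp A (wjoin A a b) c = wjoin A (wcoimp A a c) (wcoimp A b c) \<and>
        wcoimp A a (wmeet A b c) = wjoin A (wcoimp A a b) (wcoimp A a c) \<and>
        wle A (wcoimp A a c) (wjoin A (wcoimp A a b) (wcoimp A b c)) \<and>
        wle A (wmeet A a (wcoimp A (wimp A a b) (wzero A))) b \<and>
        wle A a (wjoin A b (wimp A (wone A) (wcoimp A a b))))"

definition tP :: "('a, 'b) tba_scheme \<Rightarrow> 'a \<Rightarrow> 'a" where
  "tP A x = tneg A (tH A (tneg A x))"

definition tF :: "('a, 'b) tba_scheme \<Rightarrow> 'a \<Rightarrow> 'a" where
  "tF A x = tneg A (tG A (tneg A x))"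

definition is_tba :: "('a, 'b) tba_scheme \<Rightarrow> bool" where
  "is_tba A \<longleftrightarrow>
     bdlattice (tcar A) (tmeet A) (tjoin A) (tzero A) (tone A) \<and>
     (\<forall>a\<in>tcar A. tneg A a \<in> tcar A \<and> tmeet A a (tneg A a) = tzero A \<and> tjoin A a (tneg A a) = tone A) \<and>
     (\<forall>a\<in>tcar A. tG A a \<in> tcar A \<and> tH A a \<in> tcar A) \<and>
     (\<forall>x\<in>tcar A. \<forall>y\<in>tcar A.
        (tle A (tP A x) y \<longleftrightarrow> tle A x (tG A y)) \<and>
        (tle A (tF A x) y \<longleftrightarrow> tle A x (tH A y)))"

definition tba_hom :: "('a, 'c) tba_scheme \<Rightarrow> ('b, 'd) tba_scheme \<Rightarrow> ('a \<Rightarrow> 'b) \<Rightarrow> bool" where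
  "tba_hom A B f \<longleftrightarrow> f \<in> tcar A \<rightarrow> tcar B \<and>
     (\<forall>x\<in>tcar A. \<forall>y\<in>tcar A. f (tmeet A x y) = tmeet B (f x) (f y) \<and> f (tjoin A x y) = tjoin B (f x) (f y)) \<and>
     (\<forall>x\<in>tcar A. f (tneg A x) = tneg B (f x) \<and> f (tG A x) = tG B (f x) \<and> f (tH A x) = tH B (f x)) \<and>
     f (tzero A) = tzero B \<and> f (tone A) = tone B"

text \<open>Isomorphism in TBA: a bijective homomorphism (its inverse is then a homomorphism).\<close>
definition tba_iso :: "('a, 'c) tba_scheme \<Rightarrow> ('b, 'd) tba_scheme \<Rightarrow> ('a \<Rightarrow> 'b) \<Rightarrow> bool" where
  "tba_iso A B f \<longleftrightarrow> tba_hom A B f \<and> bij_betw f (tcar A) (tcar B)"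

datatype 'x wterm = WVar 'x | WMeet "'x wterm" "'x wterm" | WJoin "'x wterm" "'x wterm"
  | WImp "'x wterm" "'x wterm" | WCoimp "'x wterm" "'x wterm" | WZero | WOne

datatype 'x tterm = TVar 'x | TMeet "'x tterm" "'x tterm" | TJoin "'x tterm" "'x tterm"
  | TNeg "'x tterm" | TZero | TOne | TGt "'x tterm" | THt "'x tterm"

primrec weval :: "('a, 'b) whb_scheme \<Rightarrow> ('x \<Rightarrow> 'a) \<Rightarrow> 'x wterm \<Rightarrow> 'a" where
  "weval A v (WVar x) = v x"
| "weval A v (WMeet s t) = wmeet A (weval A v s) (weval A v t)"
| "weval A v (WJoin s t) = wjoin A (weval A v s) (weval A v t)"
| "weval A v (WImp s t) = wimp A (weval A v s) (weval A v t)"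
| "weval A v (WCoimp s t) = wcoimp A (weval A v s) (weval A v t)"
| "weval A v WZero = wzero A"
| "weval A v WOne = wone A"

primrec teval :: "('a, 'b) tba_scheme \<Rightarrow> ('x \<Rightarrow> 'a) \<Rightarrow> 'x tterm \<Rightarrow> 'a" where
  "teval A v (TVar x) = v x"
| "teval A v (TMeet s t) = tmeet A (teval A v s) (teval A v t)"
| "teval A v (TJoin s t) = tjoin A (teval A v s) (teval A v t)"
| "teval A v (TNeg s) = tneg A (teval A v s)"
| "teval A v TZero = tzero A"
| "teval A v TOne = tone A"
| "teval A v (TGt s) = tG A (teval A v s)"
| "teval A v (THt s) = tH A (teval A v s)"

definition wterms :: "'x set \<Rightarrow> 'x wterm set" where
  "wterms X = {t. set_wterm t \<subseteq> X}"

definition tterms :: "'x set \<Rightarrow> 'x tterm set" where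
  "tterms X = {t. set_tterm t \<subseteq> X}"

text \<open>The congruence of identities of the variety on the term algebra over X:
  s, t are identified iff they agree under every assignment of X into every
  algebra of the variety (algebras are taken on carrier type of term classes,
  which is large enough to contain every X-generated algebra of the variety).\<close>
definition whb_rel :: "'x set \<Rightarrow> ('x wterm \<times> 'x wterm) set" where
  "whb_rel X = {(s, t). s \<in> wterms X \<and> t \<in> wterms X \<and>
     (\<forall>(A :: 'x wterm set whb) v. is_whb A \<longrightarrow> v \<in> X \<rightarrow> wcar A \<longrightarrow> weval A v s = weval A v t)}"

definition tba_rel :: "'x set \<Rightarrow> ('x tterm \<times> 'x tterm) set" where
  "tba_rel X = {(s, t). s \<in> tterms X \<and> t \<in> tterms X \<and>
     (\<forall>(A :: 'x tterm set tba) v. is_tba A \<longrightarrow> v \<in> X \<rightarrow> tcar A \<longrightarrow> teval A v s = teval A v t)}"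

definition wrep :: "'x wterm set \<Rightarrow> 'x wterm" where "wrep a = (SOME t. t \<in> a)"
definition trep :: "'x tterm set \<Rightarrow> 'x tterm" where "trep a = (SOME t. t \<in> a)"

definition free_whb :: "'x set \<Rightarrow> 'x wterm set whb" where
  "free_whb X = \<lparr>wcar = wterms X // whb_rel X,
     wmeet = (\<lambda>a b. whb_rel X `` {WMeet (wrep a) (wrep b)}),
     wjoin = (\<lambda>a b. whb_rel X `` {WJoin (wrep a) (wrep b)}),
     wimp = (\<lambda>a b. whb_rel X `` {WImp (wrep a) (wrep b)}),
     wcoimp = (\<lambda>a b. whb_rel X `` {WCoimp (wrep a) (wrep b)}),
     wzero = whb_rel X `` {WZero},
     wone = whb_rel X `` {WOne}\<rparr>"

definition free_tba :: "'x set \<Rightarrow> 'x tterm set tba" where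
  "free_tba X = \<lparr>tcar = tterms X // tba_rel X,
     tmeet = (\<lambda>a b. tba_rel X `` {TMeet (trep a) (trep b)}),
     tjoin = (\<lambda>a b. tba_rel X `` {TJoin (trep a) (trep b)}),
     tneg = (\<lambda>a. tba_rel X `` {TNeg (trep a)}),
     tzero = tba_rel X `` {TZero},
     tone = tba_rel X `` {TOne},
     tG = (\<lambda>a. tba_rel X `` {TGt (trep a)}),
     tH = (\<lambda>a. tba_rel X `` {THt (trep a)})\<rparr>"

definition free_whb_map :: "'x set \<Rightarrow> ('x \<Rightarrow> 'x) \<Rightarrow> 'x wterm set \<Rightarrow> 'x wterm set" where
  "free_whb_map Y l a = whb_rel Y `` {map_wterm l (wrep a)}"

definition free_tba_map :: "'x set \<Rightarrow> ('x \<Rightarrow> 'x) \<Rightarrow> 'x tterm set \<Rightarrow> 'x tterm set" where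
  "free_tba_map Y l a = tba_rel Y `` {map_tterm l (trep a)}"

definition prime_filters :: "('a, 'b) whb_scheme \<Rightarrow> 'a set set" where
  "prime_filters A = {P. P \<subseteq> wcar A \<and> wone A \<in> P \<and> wzero A \<notin> P \<and>
      (\<forall>a\<in>P. \<forall>b\<in>wcar A. wle A a b \<longrightarrow> b \<in> P) \<and>
      (\<forall>a\<in>P. \<forall>b\<in>P. wmeet A a b \<in> P) \<and>
      (\<forall>a\<in>wcar A. \<forall>b\<in>wcar A. wjoin A a b \<in> P \<longrightarrow> a \<in> P \<or> b \<in> P)}"

definition wsigma :: "('a, 'b) whb_scheme \<Rightarrow> 'a \<Rightarrow> 'a set set" where
  "wsigma A a = {P \<in> prime_filters A. a \<in> P}"

definition wtop :: "('a, 'b) whb_scheme \<Rightarrow> 'a set topology" where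
  "wtop A = topology_generated_by
     ({prime_filters A} \<union> (wsigma A ` wcar A) \<union> ((\<lambda>a. prime_filters A - wsigma A a) ` wcar A))"

definition wR :: "('a, 'b) whb_scheme \<Rightarrow> ('a set \<times> 'a set) set" where
  "wR A = {(P, Q). P \<in> prime_filters A \<and> Q \<in> prime_filters A \<and>
     (\<forall>a\<in>wcar A. \<forall>b\<in>wcar A. wimp A a b \<in> P \<longrightarrow> a \<in> Q \<longrightarrow> b \<in> Q)}"

definition wS :: "('a, 'b) whb_scheme \<Rightarrow> ('a set \<times> 'a set) set" where
  "wS A = {(P, Q). P \<in> prime_filters A \<and> Q \<in> prime_filters A \<and>
     (\<forall>a\<in>wcar A. \<forall>b\<in>wcar A. a \<in> Q \<longrightarrow> b \<notin> Q \<longrightarrow> wcoimp A a b \<in> P)}"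

definition T_alg :: "('a, 'b) whb_scheme \<Rightarrow> 'a set set tba" where
  "T_alg A = \<lparr>tcar = {U. openin (wtop A) U \<and> closedin (wtop A) U},
     tmeet = (\<inter>), tjoin = (\<union>),
     tneg = (\<lambda>U. prime_filters A - U),
     tzero = {}, tone = prime_filters A,
     tG = (\<lambda>U. {P \<in> prime_filters A. wR A `` {P} \<subseteq> U}),
     tH = (\<lambda>U. {P \<in> prime_filters A. wS A `` {P} \<subseteq> U})\<rparr>"

definition T_map :: "('a, 'c) whb_scheme \<Rightarrow> ('b, 'd) whb_scheme \<Rightarrow> ('a \<Rightarrow> 'b) \<Rightarrow> 'a set set \<Rightarrow> 'b set set" where
  "T_map A B h U = {Q \<in> prime_filters B. {a \<in> wcar A. h a \<in> Q} \<in> U}"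

end

theory Submission
  imports Defs
begin

(* For a WHB-algebra A, \<sigma> embeds A into the WHB-reduct W(T(A)) of the tense
   algebra of clopen sets of prime filters. Conversely, an injective WHB-homomorphism
   f : A \<rightarrow> W(B) into the reduct of a tense algebra B extends to a tense homomorphism
   T(A) \<rightarrow> B, sending a clopen U to the element lying in exactly those prime filters q of B with
   f\<^sup>-\<^sup>1(q) \<in> U. This is well defined because, by compactness, the clopens are the finite
   intersections of sets (X(A) - \<sigma>(a)) \<union> \<sigma>(b); it commutes with G and H by the successor
   lemmas for R and S (a generalised prime filter theorem); and it is injective because every
   prime filter of A is of the form f\<^sup>-\<^sup>1(q). For A = F_WHB(X) and B = F_TBA(X) with the
   canonical map, injectivity of that map holds since T(A) itself detects WHB-identities through
   \<sigma>; the extension is onto since its image is a subalgebra containing the generators; and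
   naturality is checked on the clauses (X(A) - \<sigma>(a)) \<union> \<sigma>(b). *)

section \<open>Prime filters of bounded distributive lattices\<close>

definition prime_filter_on ::
    "'a set \<Rightarrow> ('a \<Rightarrow> 'a \<Rightarrow> 'a) \<Rightarrow> ('a \<Rightarrow> 'a \<Rightarrow> 'a) \<Rightarrow> 'a \<Rightarrow> 'a \<Rightarrow> 'a set \<Rightarrow> bool" where
  "prime_filter_on C m j z u P \<longleftrightarrow> P \<subseteq> C \<and> u \<in> P \<and> z \<notin> P \<and>
      (\<forall>a\<in>P. \<forall>b\<in>C. m a b = a \<longrightarrow> b \<in> P) \<and>
      (\<forall>a\<in>P. \<forall>b\<in>P. m a b \<in> P) \<and>
      (\<forall>a\<in>C. \<forall>b\<in>C. j a b \<in> P \<longrightarrow> a \<in> P \<or> b \<in> P)"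

locale bd_lattice =
  fixes C :: "'a set" and m j :: "'a \<Rightarrow> 'a \<Rightarrow> 'a" and z u :: 'a
  assumes bdlattice: "bdlattice C m j z u"
begin

lemma zero_closed [simp]: "z \<in> C" and one_closed [simp]: "u \<in> C"
  and meet_closed [simp]: "a \<in> C \<Longrightarrow> b \<in> C \<Longrightarrow> m a b \<in> C"
  and join_closed [simp]: "a \<in> C \<Longrightarrow> b \<in> C \<Longrightarrow> j a b \<in> C"
  and meet_comm: "a \<in> C \<Longrightarrow> b \<in> C \<Longrightarrow> m a b = m b a"
  and join_comm: "a \<in> C \<Longrightarrow> b \<in> C \<Longrightarrow> j a b = j b a"
  and meet_assoc: "a \<in> C \<Longrightarrow> b \<in> C \<Longrightarrow> c \<in> C \<Longrightarrow> m a (m b c) = m (m a b) c"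
  and join_assoc: "a \<in> C \<Longrightarrow> b \<in> C \<Longrightarrow> c \<in> C \<Longrightarrow> j a (j b c) = j (j a b) c"
  and meet_join_absorb: "a \<in> C \<Longrightarrow> b \<in> C \<Longrightarrow> m a (j a b) = a"
  and join_meet_absorb: "a \<in> C \<Longrightarrow> b \<in> C \<Longrightarrow> j a (m a b) = a"
  and meet_join_distrib: "a \<in> C \<Longrightarrow> b \<in> C \<Longrightarrow> c \<in> C \<Longrightarrow> m a (j b c) = j (m a b) (m a c)"
  and meet_zero [simp]: "a \<in> C \<Longrightarrow> m z a = z"
  and join_one [simp]: "a \<in> C \<Longrightarrow> j u a = u"
  using bdlattice unfolding bdlattice_def by blast+

lemma meet_idem [simp]: "a \<in> C \<Longrightarrow> m a a = a"
  by (metis meet_join_absorb join_meet_absorb meet_closed)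

lemma join_idem [simp]: "a \<in> C \<Longrightarrow> j a a = a"
  by (metis meet_join_absorb join_meet_absorb join_closed)

lemma meet_zero_right [simp]: "a \<in> C \<Longrightarrow> m a z = z"
  using meet_comm meet_zero zero_closed by metis

lemma join_one_right [simp]: "a \<in> C \<Longrightarrow> j a u = u"
  using join_comm join_one one_closed by metis

lemma join_zero [simp]: "a \<in> C \<Longrightarrow> j z a = a"
  by (metis join_meet_absorb join_comm meet_zero_right zero_closed)

lemma join_zero_right [simp]: "a \<in> C \<Longrightarrow> j a z = a"
  using join_comm join_zero zero_closed by metis

lemma meet_one [simp]: "a \<in> C \<Longrightarrow> m u a = a"
  by (metis meet_join_absorb meet_comm join_one_right one_closed)

lemma meet_one_right [simp]: "a \<in> C \<Longrightarrow> m a u = a"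
  using meet_comm meet_one one_closed by metis

lemma join_meet_distrib: "a \<in> C \<Longrightarrow> b \<in> C \<Longrightarrow> c \<in> C \<Longrightarrow> j a (m b c) = m (j a b) (j a c)"
proof -
  assume C: "a \<in> C" "b \<in> C" "c \<in> C"
  have "m (j a b) (j a c) = j (m (j a b) a) (m (j a b) c)" using C by (simp add: meet_join_distrib)
  also have "m (j a b) a = a" using C by (metis meet_join_absorb meet_comm join_closed)
  also have "m (j a b) c = j (m c a) (m c b)" using C by (metis meet_join_distrib meet_comm join_closed)
  also have "j a (j (m c a) (m c b)) = j (j a (m a c)) (m b c)" using C by (metis join_assoc meet_closed meet_comm)
  also have "j a (m a c) = a" using C by (simp add: join_meet_absorb)
  finally show ?thesis by simp
qed

definition le :: "'a \<Rightarrow> 'a \<Rightarrow> bool" where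
  "le a b \<longleftrightarrow> m a b = a"

lemma le_refl [simp]: "a \<in> C \<Longrightarrow> le a a"
  by (simp add: le_def)

lemma le_antisym: "a \<in> C \<Longrightarrow> b \<in> C \<Longrightarrow> le a b \<Longrightarrow> le b a \<Longrightarrow> a = b"
  unfolding le_def by (metis meet_comm)

lemma le_trans: "a \<in> C \<Longrightarrow> b \<in> C \<Longrightarrow> c \<in> C \<Longrightarrow> le a b \<Longrightarrow> le b c \<Longrightarrow> le a c"
  unfolding le_def by (metis meet_assoc)

lemma le_iff_join: "a \<in> C \<Longrightarrow> b \<in> C \<Longrightarrow> le a b \<longleftrightarrow> j a b = b"
  unfolding le_def by (metis meet_join_absorb join_meet_absorb join_comm meet_comm)

lemma meet_le1 [simp]: "a \<in> C \<Longrightarrow> b \<in> C \<Longrightarrow> le (m a b) a"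
  unfolding le_def by (metis meet_assoc meet_comm meet_idem)

lemma meet_le2 [simp]: "a \<in> C \<Longrightarrow> b \<in> C \<Longrightarrow> le (m a b) b"
  unfolding le_def by (metis meet_assoc meet_idem)

lemma le_meet_iff: "a \<in> C \<Longrightarrow> b \<in> C \<Longrightarrow> c \<in> C \<Longrightarrow> le c (m a b) \<longleftrightarrow> le c a \<and> le c b"
  by (metis le_def le_trans meet_closed meet_le1 meet_le2 meet_assoc)

lemma join_ge1 [simp]: "a \<in> C \<Longrightarrow> b \<in> C \<Longrightarrow> le a (j a b)"
  by (simp add: meet_join_absorb le_def)

lemma join_ge2 [simp]: "a \<in> C \<Longrightarrow> b \<in> C \<Longrightarrow> le b (j a b)"
  by (metis join_ge1 join_comm)

lemma join_le_iff: "a \<in> C \<Longrightarrow> b \<in> C \<Longrightarrow> c \<in> C \<Longrightarrow> le (j a b) c \<longleftrightarrow> le a c \<and> le b c"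
  by (metis join_closed join_ge1 join_ge2 join_assoc le_iff_join le_trans)

lemma zero_le [simp]: "a \<in> C \<Longrightarrow> le z a"
  by (simp add: le_def)

lemma le_one [simp]: "a \<in> C \<Longrightarrow> le a u"
  by (simp add: le_def)

lemma meet_mono:
  assumes "a \<in> C" "b \<in> C" "a' \<in> C" "b' \<in> C" "le a a'" "le b b'"
  shows "le (m a b) (m a' b')"
proof -
  have "le (m a b) a'" using le_trans[of "m a b" a a'] assms by simp
  moreover have "le (m a b) b'" using le_trans[of "m a b" b b'] assms by simp
  ultimately show ?thesis using le_meet_iff assms by simp
qed

lemma join_mono:
  assumes "a \<in> C" "b \<in> C" "a' \<in> C" "b' \<in> C" "le a a'" "le b b'"
  shows "le (j a b) (j a' b')"
proof -
  have "le a (j a' b')" using le_trans[of a a' "j a' b'"] assms by simp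
  moreover have "le b (j a' b')" using le_trans[of b b' "j a' b'"] assms by simp
  ultimately show ?thesis using join_le_iff assms by simp
qed

abbreviation prime_filter :: "'a set \<Rightarrow> bool" where
  "prime_filter \<equiv> prime_filter_on C m j z u"

lemma prime_filterD:
  assumes P: "prime_filter P"
  shows "P \<subseteq> C" "u \<in> P" "z \<notin> P"
    and prime_filter_up: "\<And>a b. a \<in> P \<Longrightarrow> b \<in> C \<Longrightarrow> le a b \<Longrightarrow> b \<in> P"
    and prime_filter_meet: "\<And>a b. a \<in> C \<Longrightarrow> b \<in> C \<Longrightarrow> m a b \<in> P \<longleftrightarrow> a \<in> P \<and> b \<in> P"
    and prime_filter_join: "\<And>a b. a \<in> C \<Longrightarrow> b \<in> C \<Longrightarrow> j a b \<in> P \<longleftrightarrow> a \<in> P \<or> b \<in> P"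
proof -
  show "P \<subseteq> C" "u \<in> P" "z \<notin> P" using P unfolding prime_filter_on_def by auto
  show up: "\<And>a b. a \<in> P \<Longrightarrow> b \<in> C \<Longrightarrow> le a b \<Longrightarrow> b \<in> P"
    using P unfolding prime_filter_on_def le_def by blast
  show "m a b \<in> P \<longleftrightarrow> a \<in> P \<and> b \<in> P" if "a \<in> C" "b \<in> C" for a b
    using up[of "m a b" a] up[of "m a b" b] that P unfolding prime_filter_on_def by auto
  show "j a b \<in> P \<longleftrightarrow> a \<in> P \<or> b \<in> P" if "a \<in> C" "b \<in> C" for a b
    using up[of a "j a b"] up[of b "j a b"] that P unfolding prime_filter_on_def by auto
qed

definition is_filter :: "'a set \<Rightarrow> bool" where
  "is_filter Q \<longleftrightarrow> Q \<subseteq> C \<and> Q \<noteq> {} \<and> (\<forall>a\<in>Q. \<forall>b\<in>C. le a b \<longrightarrow> b \<in> Q) \<and> (\<forall>a\<in>Q. \<forall>b\<in>Q. m a b \<in> Q)"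

definition is_ideal :: "'a set \<Rightarrow> bool" where
  "is_ideal J \<longleftrightarrow> J \<subseteq> C \<and> J \<noteq> {} \<and> (\<forall>a\<in>J. \<forall>b\<in>C. le b a \<longrightarrow> b \<in> J) \<and> (\<forall>a\<in>J. \<forall>b\<in>J. j a b \<in> J)"

definition upset :: "'a \<Rightarrow> 'a set" where
  "upset a = {e \<in> C. le a e}"

definition downset :: "'a \<Rightarrow> 'a set" where
  "downset a = {e \<in> C. le e a}"

lemma is_filter_upset: "a \<in> C \<Longrightarrow> is_filter (upset a)"
  unfolding is_filter_def upset_def by (auto intro: le_trans simp: le_meet_iff)

lemma is_ideal_downset: "a \<in> C \<Longrightarrow> is_ideal (downset a)"
  unfolding is_ideal_def downset_def by (auto intro: le_trans simp: join_le_iff)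

definition filter_adjoin :: "'a set \<Rightarrow> 'a \<Rightarrow> 'a set" where
  "filter_adjoin Q x = {e \<in> C. \<exists>q\<in>Q. le (m q x) e}"

definition ideal_adjoin :: "'a set \<Rightarrow> 'a \<Rightarrow> 'a set" where
  "ideal_adjoin J x = {e \<in> C. \<exists>d\<in>J. le e (j d x)}"

lemma filter_adjoin:
  assumes Q: "is_filter Q" and x: "x \<in> C"
  shows "is_filter (filter_adjoin Q x)" "Q \<subseteq> filter_adjoin Q x" "x \<in> filter_adjoin Q x"
proof -
  have QC: "Q \<subseteq> C" using Q by (simp add: is_filter_def)
  show "Q \<subseteq> filter_adjoin Q x"
  proof
    fix e assume "e \<in> Q"
    then show "e \<in> filter_adjoin Q x"
      using QC x meet_le1[of e x] unfolding filter_adjoin_def by blast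
  qed
  obtain q where "q \<in> Q" using Q by (auto simp: is_filter_def)
  then show x_in: "x \<in> filter_adjoin Q x"
    using QC x meet_le2[of q x] unfolding filter_adjoin_def by blast
  show "is_filter (filter_adjoin Q x)"
    unfolding is_filter_def
  proof (intro conjI ballI impI)
    show "filter_adjoin Q x \<subseteq> C" by (auto simp: filter_adjoin_def)
    show "filter_adjoin Q x \<noteq> {}" using x_in by blast
    show "b \<in> filter_adjoin Q x" if a: "a \<in> filter_adjoin Q x" and ab: "b \<in> C" "le a b" for a b
    proof -
      obtain q where q: "q \<in> Q" "le (m q x) a" "a \<in> C"
        using a unfolding filter_adjoin_def by blast
      then have "le (m q x) b" using le_trans[of "m q x" a b] ab QC x by auto
      then show ?thesis using q ab by (auto simp: filter_adjoin_def)
    qed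
    show "m a b \<in> filter_adjoin Q x" if ab: "a \<in> filter_adjoin Q x" "b \<in> filter_adjoin Q x" for a b
    proof -
      obtain q q' where q: "q \<in> Q" "q' \<in> Q" "le (m q x) a" "le (m q' x) b" "a \<in> C" "b \<in> C"
        using ab unfolding filter_adjoin_def by blast
      have C: "q \<in> C" "q' \<in> C" using q QC by auto
      have "le (m (m q q') x) (m q x)" "le (m (m q q') x) (m q' x)"
        using C x by (simp_all add: meet_mono)
      then have "le (m (m q q') x) a" "le (m (m q q') x) b"
        using q C x le_trans[of "m (m q q') x" "m q x" a] le_trans[of "m (m q q') x" "m q' x" b] by auto
      then have "le (m (m q q') x) (m a b)" using q C x by (simp add: le_meet_iff)
      moreover have "m q q' \<in> Q" using Q q by (simp add: is_filter_def)
      ultimately show ?thesis using q by (auto simp: filter_adjoin_def)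
    qed
  qed
qed

lemma ideal_adjoin:
  assumes J: "is_ideal J" and x: "x \<in> C"
  shows "is_ideal (ideal_adjoin J x)" "J \<subseteq> ideal_adjoin J x" "x \<in> ideal_adjoin J x"
proof -
  have JC: "J \<subseteq> C" using J by (simp add: is_ideal_def)
  show "J \<subseteq> ideal_adjoin J x"
  proof
    fix e assume "e \<in> J"
    then show "e \<in> ideal_adjoin J x"
      using JC x join_ge1[of e x] unfolding ideal_adjoin_def by blast
  qed
  obtain d where "d \<in> J" using J by (auto simp: is_ideal_def)
  then show x_in: "x \<in> ideal_adjoin J x"
    using JC x join_ge2[of d x] unfolding ideal_adjoin_def by blast
  show "is_ideal (ideal_adjoin J x)"
    unfolding is_ideal_def
  proof (intro conjI ballI impI)
    show "ideal_adjoin J x \<subseteq> C" by (auto simp: ideal_adjoin_def)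
    show "ideal_adjoin J x \<noteq> {}" using x_in by blast
    show "b \<in> ideal_adjoin J x" if a: "a \<in> ideal_adjoin J x" and ab: "b \<in> C" "le b a" for a b
    proof -
      obtain d where d: "d \<in> J" "le a (j d x)" "a \<in> C"
        using a unfolding ideal_adjoin_def by blast
      then have "le b (j d x)" using le_trans[of b a "j d x"] ab JC x by auto
      then show ?thesis using d ab by (auto simp: ideal_adjoin_def)
    qed
    show "j a b \<in> ideal_adjoin J x" if ab: "a \<in> ideal_adjoin J x" "b \<in> ideal_adjoin J x" for a b
    proof -
      obtain d d' where d: "d \<in> J" "d' \<in> J" "le a (j d x)" "le b (j d' x)" "a \<in> C" "b \<in> C"
        using ab unfolding ideal_adjoin_def by blast
      have C: "d \<in> C" "d' \<in> C" using d JC by auto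
      have "le (j d x) (j (j d d') x)" "le (j d' x) (j (j d d') x)"
        using C x by (simp_all add: join_mono)
      then have "le a (j (j d d') x)" "le b (j (j d d') x)"
        using d C x le_trans[of a "j d x" "j (j d d') x"] le_trans[of b "j d' x" "j (j d d') x"] by auto
      then have "le (j a b) (j (j d d') x)" using d C x by (simp add: join_le_iff)
      moreover have "j d d' \<in> J" using J d by (simp add: is_ideal_def)
      ultimately show ?thesis using d by (auto simp: ideal_adjoin_def)
    qed
  qed
qed

lemma is_filter_Union_chain:
  assumes "F \<noteq> {}" and filters: "\<And>Q. Q \<in> F \<Longrightarrow> is_filter Q"
    and chain: "\<And>Q Q'. Q \<in> F \<Longrightarrow> Q' \<in> F \<Longrightarrow> Q \<subseteq> Q' \<or> Q' \<subseteq> Q"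
  shows "is_filter (\<Union>F)"
  unfolding is_filter_def
proof (intro conjI ballI impI)
  show "\<Union>F \<subseteq> C" "\<Union>F \<noteq> {}" using assms(1) filters unfolding is_filter_def by blast+
  show "b \<in> \<Union>F" if "a \<in> \<Union>F" "b \<in> C" "le a b" for a b
    using that filters unfolding is_filter_def by blast
  show "m a b \<in> \<Union>F" if ab: "a \<in> \<Union>F" "b \<in> \<Union>F" for a b
  proof -
    obtain Q Q' where "Q \<in> F" "Q' \<in> F" "a \<in> Q" "b \<in> Q'" using ab by blast
    with chain obtain Q'' where "Q'' \<in> F" "a \<in> Q''" "b \<in> Q''" by blast
    then show ?thesis using filters unfolding is_filter_def by blast
  qed
qed

lemma is_ideal_Union_chain:
  assumes "F \<noteq> {}" and ideals: "\<And>J. J \<in> F \<Longrightarrow> is_ideal J"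
    and chain: "\<And>J J'. J \<in> F \<Longrightarrow> J' \<in> F \<Longrightarrow> J \<subseteq> J' \<or> J' \<subseteq> J"
  shows "is_ideal (\<Union>F)"
  unfolding is_ideal_def
proof (intro conjI ballI impI)
  show "\<Union>F \<subseteq> C" "\<Union>F \<noteq> {}" using assms(1) ideals unfolding is_ideal_def by blast+
  show "b \<in> \<Union>F" if "a \<in> \<Union>F" "b \<in> C" "le b a" for a b
    using that ideals unfolding is_ideal_def by blast
  show "j a b \<in> \<Union>F" if ab: "a \<in> \<Union>F" "b \<in> \<Union>F" for a b
  proof -
    obtain J J' where "J \<in> F" "J' \<in> F" "a \<in> J" "b \<in> J'" using ab by blast
    with chain obtain J'' where "J'' \<in> F" "a \<in> J''" "b \<in> J''" by blast
    then show ?thesis using ideals unfolding is_ideal_def by blast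
  qed
qed

lemma maximal_separated_filter:
  fixes \<Phi> :: "'a \<Rightarrow> 'a \<Rightarrow> bool"
  assumes "is_filter Q0" "\<forall>c\<in>Q0. \<forall>d\<in>J. \<Phi> c d"
  obtains Q where "is_filter Q" "Q0 \<subseteq> Q" "\<forall>c\<in>Q. \<forall>d\<in>J. \<Phi> c d"
    "\<And>Q'. is_filter Q' \<Longrightarrow> Q \<subseteq> Q' \<Longrightarrow> \<forall>c\<in>Q'. \<forall>d\<in>J. \<Phi> c d \<Longrightarrow> Q' = Q"
proof -
  define \<F> where "\<F> = {Q. is_filter Q \<and> Q0 \<subseteq> Q \<and> (\<forall>c\<in>Q. \<forall>d\<in>J. \<Phi> c d)}"
  have "\<exists>Q\<in>\<F>. \<forall>Q'\<in>\<F>. Q \<subseteq> Q' \<longrightarrow> Q' = Q"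
  proof (rule Zorn_Lemma2, intro ballI)
    fix Ch assume "Ch \<in> chains \<F>"
    then have sub: "Ch \<subseteq> \<F>" and chain: "\<And>Q Q'. Q \<in> Ch \<Longrightarrow> Q' \<in> Ch \<Longrightarrow> Q \<subseteq> Q' \<or> Q' \<subseteq> Q"
      by (auto simp: chains_def chain_subset_def)
    show "\<exists>U\<in>\<F>. \<forall>Q\<in>Ch. Q \<subseteq> U"
    proof (cases "Ch = {}")
      case True
      then show ?thesis using assms by (auto simp: \<F>_def)
    next
      case False
      have "is_filter (\<Union>Ch)"
        by (rule is_filter_Union_chain[OF False _ chain]) (use sub in \<open>auto simp: \<F>_def\<close>)
      then have "\<Union>Ch \<in> \<F>" using False sub unfolding \<F>_def by blast
      then show ?thesis by blast
    qed
  qed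
  then obtain Q where Q: "Q \<in> \<F>" and max: "\<forall>Q'\<in>\<F>. Q \<subseteq> Q' \<longrightarrow> Q' = Q" by blast
  show thesis
  proof (rule that)
    show "is_filter Q" "Q0 \<subseteq> Q" "\<forall>c\<in>Q. \<forall>d\<in>J. \<Phi> c d" using Q by (simp_all add: \<F>_def)
    show "Q' = Q" if "is_filter Q'" "Q \<subseteq> Q'" "\<forall>c\<in>Q'. \<forall>d\<in>J. \<Phi> c d" for Q'
      using max that Q unfolding \<F>_def by blast
  qed
qed

lemma maximal_separated_ideal:
  fixes \<Phi> :: "'a \<Rightarrow> 'a \<Rightarrow> bool"
  assumes "is_ideal J0" "\<forall>c\<in>Q. \<forall>d\<in>J0. \<Phi> c d"
  obtains J where "is_ideal J" "J0 \<subseteq> J" "\<forall>c\<in>Q. \<forall>d\<in>J. \<Phi> c d"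
    "\<And>J'. is_ideal J' \<Longrightarrow> J \<subseteq> J' \<Longrightarrow> \<forall>c\<in>Q. \<forall>d\<in>J'. \<Phi> c d \<Longrightarrow> J' = J"
proof -
  define \<I> where "\<I> = {J. is_ideal J \<and> J0 \<subseteq> J \<and> (\<forall>c\<in>Q. \<forall>d\<in>J. \<Phi> c d)}"
  have "\<exists>J\<in>\<I>. \<forall>J'\<in>\<I>. J \<subseteq> J' \<longrightarrow> J' = J"
  proof (rule Zorn_Lemma2, intro ballI)
    fix Ch assume "Ch \<in> chains \<I>"
    then have sub: "Ch \<subseteq> \<I>" and chain: "\<And>J J'. J \<in> Ch \<Longrightarrow> J' \<in> Ch \<Longrightarrow> J \<subseteq> J' \<or> J' \<subseteq> J"
      by (auto simp: chains_def chain_subset_def)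
    show "\<exists>U\<in>\<I>. \<forall>J\<in>Ch. J \<subseteq> U"
    proof (cases "Ch = {}")
      case True
      then show ?thesis using assms by (auto simp: \<I>_def)
    next
      case False
      have "is_ideal (\<Union>Ch)"
        by (rule is_ideal_Union_chain[OF False _ chain]) (use sub in \<open>auto simp: \<I>_def\<close>)
      then have "\<Union>Ch \<in> \<I>" using False sub unfolding \<I>_def by blast
      then show ?thesis by blast
    qed
  qed
  then obtain J where J: "J \<in> \<I>" and max: "\<forall>J'\<in>\<I>. J \<subseteq> J' \<longrightarrow> J' = J" by blast
  show thesis
  proof (rule that)
    show "is_ideal J" "J0 \<subseteq> J" "\<forall>c\<in>Q. \<forall>d\<in>J. \<Phi> c d" using J by (simp_all add: \<I>_def)
    show "J' = J" if "is_ideal J'" "J \<subseteq> J'" "\<forall>c\<in>Q. \<forall>d\<in>J'. \<Phi> c d" for J'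
      using max that J unfolding \<I>_def by blast
  qed
qed

text \<open>The heart of the prime filter extension lemma: for a maximal pair of a filter \<open>Q\<close> and an
  ideal \<open>J\<close> separated by \<open>\<Phi>\<close>, an element in neither would allow to enlarge \<open>Q\<close> and \<open>J\<close>,
  and the two resulting failures of separation combine via \<open>split\<close> to a failure for \<open>Q\<close>, \<open>J\<close>.\<close>

lemma maximal_separated_pair_covers:
  fixes \<Phi> :: "'a \<Rightarrow> 'a \<Rightarrow> bool"
  assumes mono: "\<And>c d c' d'. c \<in> C \<Longrightarrow> d \<in> C \<Longrightarrow> c' \<in> C \<Longrightarrow> d' \<in> C \<Longrightarrow>
      \<Phi> c d \<Longrightarrow> le c c' \<Longrightarrow> le d' d \<Longrightarrow> \<Phi> c' d'"
    and split: "\<And>c d x. c \<in> C \<Longrightarrow> d \<in> C \<Longrightarrow> x \<in> C \<Longrightarrow> \<Phi> c d \<Longrightarrow> \<Phi> (m c x) d \<or> \<Phi> c (j d x)"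
    and Q: "is_filter Q" and J: "is_ideal J" and sep: "\<forall>c\<in>Q. \<forall>d\<in>J. \<Phi> c d"
    and maxQ: "\<And>Q'. is_filter Q' \<Longrightarrow> Q \<subseteq> Q' \<Longrightarrow> \<forall>c\<in>Q'. \<forall>d\<in>J. \<Phi> c d \<Longrightarrow> Q' = Q"
    and maxJ: "\<And>J'. is_ideal J' \<Longrightarrow> J \<subseteq> J' \<Longrightarrow> \<forall>c\<in>Q. \<forall>d\<in>J'. \<Phi> c d \<Longrightarrow> J' = J"
    and x: "x \<in> C"
  shows "x \<in> Q \<or> x \<in> J"
proof (rule ccontr)
  assume x_out: "\<not> (x \<in> Q \<or> x \<in> J)"
  have QC: "Q \<subseteq> C" and JC: "J \<subseteq> C" using Q J by (auto simp: is_filter_def is_ideal_def)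
  have "filter_adjoin Q x \<noteq> Q" using filter_adjoin(3)[OF Q x] x_out by blast
  then obtain c d where c: "c \<in> filter_adjoin Q x" and d: "d \<in> J" "\<not> \<Phi> c d"
    using maxQ[OF filter_adjoin(1,2)[OF Q x]] by blast
  then obtain q where q: "q \<in> Q" "le (m q x) c" "c \<in> C" unfolding filter_adjoin_def by blast
  have "q \<in> C" "d \<in> C" using q d QC JC by auto
  then have nq: "\<not> \<Phi> (m q x) d" using mono[of "m q x" d c d] d q x by auto
  have "ideal_adjoin J x \<noteq> J" using ideal_adjoin(3)[OF J x] x_out by blast
  then obtain c' e where c': "c' \<in> Q" "\<not> \<Phi> c' e" and e: "e \<in> ideal_adjoin J x"
    using maxJ[OF ideal_adjoin(1,2)[OF J x]] by blast
  then obtain d' where d': "d' \<in> J" "le e (j d' x)" "e \<in> C" unfolding ideal_adjoin_def by blast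
  have "c' \<in> C" "d' \<in> C" using c' d' QC JC by auto
  then have nd': "\<not> \<Phi> c' (j d' x)" using mono[of c' "j d' x" c' e] c' d' x by auto
  have C: "q \<in> C" "c' \<in> C" "d \<in> C" "d' \<in> C" using q c' d d' QC JC by auto
  have "\<Phi> (m q c') (j d d')" using sep q c' d d' Q J by (simp add: is_filter_def is_ideal_def)
  then have "\<Phi> (m (m q c') x) (j d d') \<or> \<Phi> (m q c') (j (j d d') x)" using split C x by simp
  then show False
  proof
    assume "\<Phi> (m (m q c') x) (j d d')"
    moreover have "le (m (m q c') x) (m q x)" using C x by (simp add: meet_mono)
    ultimately show False using mono[of "m (m q c') x" "j d d'" "m q x" d] nq C x by simp
  next
    assume "\<Phi> (m q c') (j (j d d') x)"
    moreover have "le (j d' x) (j (j d d') x)" using C x by (simp add: join_mono)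
    ultimately show False using mono[of "m q c'" "j (j d d') x" c' "j d' x"] nd' C x by simp
  qed
qed

lemma prime_filter_if_complement_ideal:
  assumes Q: "is_filter Q" and J: "is_ideal J" and disj: "Q \<inter> J = {}"
    and cover: "\<forall>x\<in>C. x \<in> Q \<or> x \<in> J"
  shows "prime_filter Q"
proof -
  have QC: "Q \<subseteq> C" and JC: "J \<subseteq> C" using Q J by (simp_all add: is_filter_def is_ideal_def)
  have up: "\<And>a b. a \<in> Q \<Longrightarrow> b \<in> C \<Longrightarrow> le a b \<Longrightarrow> b \<in> Q"
    and meet: "\<And>a b. a \<in> Q \<Longrightarrow> b \<in> Q \<Longrightarrow> m a b \<in> Q"
    and join: "\<And>a b. a \<in> J \<Longrightarrow> b \<in> J \<Longrightarrow> j a b \<in> J"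
    using Q J unfolding is_filter_def is_ideal_def by blast+
  obtain q where "q \<in> Q" using Q by (auto simp: is_filter_def)
  then have "u \<in> Q" using up[of q u] QC by auto
  moreover have "z \<notin> Q"
  proof
    assume "z \<in> Q"
    moreover obtain d where "d \<in> J" using J by (auto simp: is_ideal_def)
    ultimately have "d \<in> Q" using up[of z d] JC by auto
    then show False using \<open>d \<in> J\<close> disj by blast
  qed
  moreover have "a \<in> Q \<or> b \<in> Q" if "a \<in> C" "b \<in> C" "j a b \<in> Q" for a b
  proof (rule ccontr)
    assume "\<not> (a \<in> Q \<or> b \<in> Q)"
    then have "j a b \<in> J" using cover that join by auto
    then show False using that disj by blast
  qed
  ultimately show ?thesis
    using QC up meet unfolding prime_filter_on_def le_def by blast
qed

text \<open>A generalised prime filter theorem in the style of Celani and Jansana; the classical one is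
  the case \<open>\<Phi> c d = \<not> le c d\<close>.\<close>

lemma prime_filter_extension:
  fixes \<Phi> :: "'a \<Rightarrow> 'a \<Rightarrow> bool"
  assumes mono: "\<And>c d c' d'. c \<in> C \<Longrightarrow> d \<in> C \<Longrightarrow> c' \<in> C \<Longrightarrow> d' \<in> C \<Longrightarrow>
      \<Phi> c d \<Longrightarrow> le c c' \<Longrightarrow> le d' d \<Longrightarrow> \<Phi> c' d'"
    and split: "\<And>c d x. c \<in> C \<Longrightarrow> d \<in> C \<Longrightarrow> x \<in> C \<Longrightarrow> \<Phi> c d \<Longrightarrow> \<Phi> (m c x) d \<or> \<Phi> c (j d x)"
    and irrefl: "\<And>c. c \<in> C \<Longrightarrow> \<not> \<Phi> c c"
    and Q0: "is_filter Q0" and J0: "is_ideal J0" and sep0: "\<forall>c\<in>Q0. \<forall>d\<in>J0. \<Phi> c d"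
  shows "\<exists>Q. prime_filter Q \<and> Q0 \<subseteq> Q \<and> Q \<inter> J0 = {} \<and> (\<forall>c\<in>Q. \<forall>d\<in>C - Q. \<Phi> c d)"
proof -
  obtain Q where Q: "is_filter Q" "Q0 \<subseteq> Q" "\<forall>c\<in>Q. \<forall>d\<in>J0. \<Phi> c d"
    and maxQ: "\<And>Q'. is_filter Q' \<Longrightarrow> Q \<subseteq> Q' \<Longrightarrow> \<forall>c\<in>Q'. \<forall>d\<in>J0. \<Phi> c d \<Longrightarrow> Q' = Q"
    using maximal_separated_filter[OF Q0 sep0] by blast
  obtain J where J: "is_ideal J" "J0 \<subseteq> J" "\<forall>c\<in>Q. \<forall>d\<in>J. \<Phi> c d"
    and maxJ: "\<And>J'. is_ideal J' \<Longrightarrow> J \<subseteq> J' \<Longrightarrow> \<forall>c\<in>Q. \<forall>d\<in>J'. \<Phi> c d \<Longrightarrow> J' = J"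
    using maximal_separated_ideal[OF J0 Q(3)] by blast
  have maxQ': "Q' = Q" if "is_filter Q'" "Q \<subseteq> Q'" "\<forall>c\<in>Q'. \<forall>d\<in>J. \<Phi> c d" for Q'
    using maxQ[OF that(1,2)] that(3) J(2) by blast
  have cover: "\<forall>x\<in>C. x \<in> Q \<or> x \<in> J"
  proof
    fix x assume x: "x \<in> C"
    show "x \<in> Q \<or> x \<in> J"
      by (rule maximal_separated_pair_covers[where \<Phi>=\<Phi>])
        (fact mono, fact split, fact Q(1), fact J(1), fact J(3), fact maxQ', fact maxJ, fact x)
  qed
  have "Q \<subseteq> C" using Q(1) by (simp add: is_filter_def)
  then have disj: "Q \<inter> J = {}" using J(3) irrefl by blast
  have "prime_filter Q" by (rule prime_filter_if_complement_ideal[OF Q(1) J(1) disj cover])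
  moreover have "\<forall>c\<in>Q. \<forall>d\<in>C - Q. \<Phi> c d" using J(3) cover by blast
  ultimately show ?thesis using Q(2) J(2) disj by blast
qed

lemma le_cut:
  assumes C: "c \<in> C" "d \<in> C" "x \<in> C" and "le (m c x) d" and "le c (j d x)"
  shows "le c d"
proof -
  have "c = m c (j d x)" using \<open>le c (j d x)\<close> by (simp add: le_def)
  also have "\<dots> = j (m c d) (m c x)" using C by (simp add: meet_join_distrib)
  finally have c: "c = j (m c d) (m c x)" .
  have "le (j (m c d) (m c x)) d" using \<open>le (m c x) d\<close> C by (simp add: join_le_iff)
  then show ?thesis using c by simp
qed

theorem prime_filter_theorem:
  assumes Q0: "is_filter Q0" and J0: "is_ideal J0" and disj: "Q0 \<inter> J0 = {}"
  obtains P where "prime_filter P" "Q0 \<subseteq> P" "P \<inter> J0 = {}"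
proof -
  have "\<exists>P. prime_filter P \<and> Q0 \<subseteq> P \<and> P \<inter> J0 = {} \<and> (\<forall>c\<in>P. \<forall>d\<in>C - P. \<not> le c d)"
  proof (rule prime_filter_extension[where \<Phi>="\<lambda>c d. \<not> le c d"])
    show "\<not> le c' d'" if "c \<in> C" "d \<in> C" "c' \<in> C" "d' \<in> C" "\<not> le c d" "le c c'" "le d' d" for c d c' d'
      using that by (meson le_trans)
    show "\<not> le (m c x) d \<or> \<not> le c (j d x)" if "c \<in> C" "d \<in> C" "x \<in> C" "\<not> le c d" for c d x
      using that le_cut by blast
    show "\<not> \<not> le c c" if "c \<in> C" for c
      using that by simp
    show "\<forall>c\<in>Q0. \<forall>d\<in>J0. \<not> le c d"
      using Q0 J0 disj unfolding is_filter_def is_ideal_def by blast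
  qed (fact Q0, fact J0)
  then show thesis using that by blast
qed

lemma prime_filter_separation:
  assumes a: "a \<in> C" and b: "b \<in> C" and "\<not> le a b"
  obtains P where "prime_filter P" "a \<in> P" "b \<notin> P"
proof -
  have "upset a \<inter> downset b = {}"
    using a b \<open>\<not> le a b\<close> unfolding upset_def downset_def by (blast intro: le_trans)
  then obtain P where "prime_filter P" "upset a \<subseteq> P" "P \<inter> downset b = {}"
    using prime_filter_theorem is_filter_upset[OF a] is_ideal_downset[OF b] by metis
  moreover have "a \<in> upset a" "b \<in> downset b" using a b by (simp_all add: upset_def downset_def)
  ultimately show thesis using that by blast
qed

lemma le_iff_prime_filters:
  assumes a: "a \<in> C" and b: "b \<in> C"
  shows "le a b \<longleftrightarrow> (\<forall>P. prime_filter P \<longrightarrow> a \<in> P \<longrightarrow> b \<in> P)"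
proof (intro iffI allI impI)
  fix P assume "le a b" "prime_filter P" "a \<in> P"
  then show "b \<in> P" using prime_filter_up b by blast
next
  assume all: "\<forall>P. prime_filter P \<longrightarrow> a \<in> P \<longrightarrow> b \<in> P"
  show "le a b"
  proof (rule ccontr)
    assume "\<not> le a b"
    then obtain P where "prime_filter P" "a \<in> P" "b \<notin> P" by (rule prime_filter_separation[OF a b])
    then show False using all by blast
  qed
qed

lemma le_if_prime_filters:
  "a \<in> C \<Longrightarrow> b \<in> C \<Longrightarrow> (\<And>P. prime_filter P \<Longrightarrow> a \<in> P \<Longrightarrow> b \<in> P) \<Longrightarrow> le a b"
  using le_iff_prime_filters by blast

lemma eq_if_same_prime_filters:
  assumes "a \<in> C" "b \<in> C" and same: "\<And>P. prime_filter P \<Longrightarrow> a \<in> P \<longleftrightarrow> b \<in> P"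
  shows "a = b"
proof (rule le_antisym)
  show "le a b" "le b a" using assms(1,2) same by (simp_all add: le_iff_prime_filters)
qed (use assms in auto)

fun meet_list :: "'a list \<Rightarrow> 'a" where
  "meet_list [] = u"
| "meet_list (x # xs) = m x (meet_list xs)"

fun join_list :: "'a list \<Rightarrow> 'a" where
  "join_list [] = z"
| "join_list (x # xs) = j x (join_list xs)"

lemma meet_list_closed [simp]: "set xs \<subseteq> C \<Longrightarrow> meet_list xs \<in> C"
  by (induction xs) auto

lemma join_list_closed [simp]: "set xs \<subseteq> C \<Longrightarrow> join_list xs \<in> C"
  by (induction xs) auto

lemma meet_list_append: "set xs \<subseteq> C \<Longrightarrow> set ys \<subseteq> C \<Longrightarrow> meet_list (xs @ ys) = m (meet_list xs) (meet_list ys)"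
  by (induction xs) (auto simp: meet_assoc)

lemma join_list_append: "set xs \<subseteq> C \<Longrightarrow> set ys \<subseteq> C \<Longrightarrow> join_list (xs @ ys) = j (join_list xs) (join_list ys)"
  by (induction xs) (auto simp: join_assoc)

lemma prime_filter_meet_list:
  "prime_filter P \<Longrightarrow> set xs \<subseteq> C \<Longrightarrow> meet_list xs \<in> P \<longleftrightarrow> (\<forall>x\<in>set xs. x \<in> P)"
  by (induction xs) (simp_all add: prime_filterD(2) prime_filter_meet)

lemma prime_filter_join_list:
  "prime_filter P \<Longrightarrow> set xs \<subseteq> C \<Longrightarrow> join_list xs \<in> P \<longleftrightarrow> (\<exists>x\<in>set xs. x \<in> P)"
  by (induction xs) (simp_all add: prime_filterD(3) prime_filter_join)

definition generated_filter :: "'a set \<Rightarrow> 'a set" where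
  "generated_filter B = {e \<in> C. \<exists>xs. set xs \<subseteq> B \<and> le (meet_list xs) e}"

definition generated_ideal :: "'a set \<Rightarrow> 'a set" where
  "generated_ideal A = {e \<in> C. \<exists>ys. set ys \<subseteq> A \<and> le e (join_list ys)}"

lemma is_filter_generated_filter:
  assumes B: "B \<subseteq> C"
  shows "is_filter (generated_filter B)"
  unfolding is_filter_def
proof (intro conjI ballI impI)
  show "generated_filter B \<subseteq> C" by (auto simp: generated_filter_def)
  have "u \<in> generated_filter B" unfolding generated_filter_def
    by (auto intro!: exI[of _ "[]"])
  then show "generated_filter B \<noteq> {}" by blast
  show "b \<in> generated_filter B" if a: "a \<in> generated_filter B" and b: "b \<in> C" "le a b" for a b
  proof -
    obtain xs where xs: "set xs \<subseteq> B" "le (meet_list xs) a" "a \<in> C"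
      using a unfolding generated_filter_def by blast
    then have "le (meet_list xs) b" using le_trans[of "meet_list xs" a b] b B by auto
    then show ?thesis using xs b unfolding generated_filter_def by blast
  qed
  show "m a b \<in> generated_filter B" if ab: "a \<in> generated_filter B" "b \<in> generated_filter B" for a b
  proof -
    obtain xs ys where xs: "set xs \<subseteq> B" "le (meet_list xs) a" "a \<in> C"
      and ys: "set ys \<subseteq> B" "le (meet_list ys) b" "b \<in> C"
      using ab unfolding generated_filter_def by blast
    have "le (meet_list (xs @ ys)) (m a b)"
      using xs ys B by (simp add: meet_list_append meet_mono subset_trans)
    then show ?thesis using xs ys unfolding generated_filter_def by (auto intro!: exI[of _ "xs @ ys"])
  qed
qed

lemma is_ideal_generated_ideal:
  assumes A: "A \<subseteq> C"
  shows "is_ideal (generated_ideal A)"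
  unfolding is_ideal_def
proof (intro conjI ballI impI)
  show "generated_ideal A \<subseteq> C" by (auto simp: generated_ideal_def)
  have "z \<in> generated_ideal A" unfolding generated_ideal_def
    by (auto intro!: exI[of _ "[]"])
  then show "generated_ideal A \<noteq> {}" by blast
  show "b \<in> generated_ideal A" if a: "a \<in> generated_ideal A" and b: "b \<in> C" "le b a" for a b
  proof -
    obtain ys where ys: "set ys \<subseteq> A" "le a (join_list ys)" "a \<in> C"
      using a unfolding generated_ideal_def by blast
    then have "le b (join_list ys)" using le_trans[of b a "join_list ys"] b A by auto
    then show ?thesis using ys b unfolding generated_ideal_def by blast
  qed
  show "j a b \<in> generated_ideal A" if ab: "a \<in> generated_ideal A" "b \<in> generated_ideal A" for a b
  proof -
    obtain xs ys where xs: "set xs \<subseteq> A" "le a (join_list xs)" "a \<in> C"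
      and ys: "set ys \<subseteq> A" "le b (join_list ys)" "b \<in> C"
      using ab unfolding generated_ideal_def by blast
    have "le (j a b) (join_list (xs @ ys))"
      using xs ys A by (simp add: join_list_append join_mono subset_trans)
    then show ?thesis using xs ys unfolding generated_ideal_def by (auto intro!: exI[of _ "xs @ ys"])
  qed
qed

lemma prime_filter_separation_sets:
  assumes A: "A \<subseteq> C" and B: "B \<subseteq> C"
    and no_cover: "\<And>xs ys. set xs \<subseteq> B \<Longrightarrow> set ys \<subseteq> A \<Longrightarrow> \<not> le (meet_list xs) (join_list ys)"
  obtains P where "prime_filter P" "B \<subseteq> P" "P \<inter> A = {}"
proof -
  have "generated_filter B \<inter> generated_ideal A = {}"
  proof (intro equals0I)
    fix e assume "e \<in> generated_filter B \<inter> generated_ideal A"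
    then obtain xs ys where "set xs \<subseteq> B" "set ys \<subseteq> A" "e \<in> C"
      "le (meet_list xs) e" "le e (join_list ys)"
      unfolding generated_filter_def generated_ideal_def by blast
    then show False using no_cover A B le_trans[of "meet_list xs" e "join_list ys"] by auto
  qed
  then obtain P where P: "prime_filter P" "generated_filter B \<subseteq> P" "P \<inter> generated_ideal A = {}"
    using prime_filter_theorem is_filter_generated_filter[OF B] is_ideal_generated_ideal[OF A] by metis
  have "B \<subseteq> generated_filter B"
    using B unfolding generated_filter_def by (auto intro!: exI[of _ "[_]"])
  moreover have "A \<subseteq> generated_ideal A"
    using A unfolding generated_ideal_def by (auto intro!: exI[of _ "[_]"])
  ultimately show thesis using that P by blast
qed

end

lemma prime_filter_on_preimage:
  assumes Q: "prime_filter_on C2 m2 j2 z2 u2 Q"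
    and hC: "\<And>a. a \<in> C1 \<Longrightarrow> h a \<in> C2"
    and hm: "\<And>a b. a \<in> C1 \<Longrightarrow> b \<in> C1 \<Longrightarrow> h (m1 a b) = m2 (h a) (h b)"
    and hj: "\<And>a b. a \<in> C1 \<Longrightarrow> b \<in> C1 \<Longrightarrow> h (j1 a b) = j2 (h a) (h b)"
    and h0: "h z1 = z2" and h1: "h u1 = u2" and L1: "bd_lattice C1 m1 j1 z1 u1"
  shows "prime_filter_on C1 m1 j1 z1 u1 {a \<in> C1. h a \<in> Q}"
proof -
  have up: "\<And>a b. a \<in> Q \<Longrightarrow> b \<in> C2 \<Longrightarrow> m2 a b = a \<Longrightarrow> b \<in> Q"
    and meet: "\<And>a b. a \<in> Q \<Longrightarrow> b \<in> Q \<Longrightarrow> m2 a b \<in> Q"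
    and join: "\<And>a b. a \<in> C2 \<Longrightarrow> b \<in> C2 \<Longrightarrow> j2 a b \<in> Q \<Longrightarrow> a \<in> Q \<or> b \<in> Q"
    and "u2 \<in> Q" "z2 \<notin> Q"
    using Q unfolding prime_filter_on_def by blast+
  show ?thesis
    unfolding prime_filter_on_def
  proof (intro conjI ballI impI)
    show "{a \<in> C1. h a \<in> Q} \<subseteq> C1" "u1 \<in> {a \<in> C1. h a \<in> Q}" "z1 \<notin> {a \<in> C1. h a \<in> Q}"
      using \<open>u2 \<in> Q\<close> \<open>z2 \<notin> Q\<close> h0 h1 bd_lattice.zero_closed[OF L1] bd_lattice.one_closed[OF L1] by auto
    show "b \<in> {a \<in> C1. h a \<in> Q}" if "a \<in> {a \<in> C1. h a \<in> Q}" "b \<in> C1" "m1 a b = a" for a b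
      using that up[of "h a" "h b"] hm[of a b] hC by auto
    show "m1 a b \<in> {a \<in> C1. h a \<in> Q}" if "a \<in> {a \<in> C1. h a \<in> Q}" "b \<in> {a \<in> C1. h a \<in> Q}" for a b
      using that meet[of "h a" "h b"] hm[of a b] bd_lattice.meet_closed[OF L1] by auto
    show "a \<in> {a \<in> C1. h a \<in> Q} \<or> b \<in> {a \<in> C1. h a \<in> Q}"
      if "a \<in> C1" "b \<in> C1" "j1 a b \<in> {a \<in> C1. h a \<in> Q}" for a b
      using that join[of "h a" "h b"] hj[of a b] hC by auto
  qed
qed

section \<open>WHB-algebras and their prime filter frames\<close>

locale whb_alg =
  fixes A :: "('a, 'b) whb_scheme"
  assumes is_whb: "is_whb A"
begin

sublocale bd_lattice "wcar A" "wmeet A" "wjoin A" "wzero A" "wone A"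
  using is_whb by unfold_locales (simp add: is_whb_def)

abbreviation imp :: "'a \<Rightarrow> 'a \<Rightarrow> 'a" where "imp \<equiv> wimp A"
abbreviation coimp :: "'a \<Rightarrow> 'a \<Rightarrow> 'a" where "coimp \<equiv> wcoimp A"

lemma wle_iff_le: "wle A a b \<longleftrightarrow> le a b"
  by (simp add: wle_def le_def)

lemma prime_filters_eq: "prime_filters A = Collect prime_filter"
  unfolding prime_filters_def prime_filter_on_def wle_def by simp

lemma imp_closed [simp]: "a \<in> wcar A \<Longrightarrow> b \<in> wcar A \<Longrightarrow> imp a b \<in> wcar A"
  and coimp_closed [simp]: "a \<in> wcar A \<Longrightarrow> b \<in> wcar A \<Longrightarrow> coimp a b \<in> wcar A"
  using is_whb unfolding is_whb_def by blast+

context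
  fixes a b c assumes abc: "a \<in> wcar A" "b \<in> wcar A" "c \<in> wcar A"
begin

lemma imp_self [simp]: "imp a a = wone A"
  and imp_meet: "imp a (wmeet A b c) = wmeet A (imp a b) (imp a c)"
  and join_imp: "imp (wjoin A a b) c = wmeet A (imp a c) (imp b c)"
  and imp_trans: "le (wmeet A (imp a b) (imp b c)) (imp a c)"
  and coimp_self [simp]: "coimp a a = wzero A"
  and join_coimp: "coimp (wjoin A a b) c = wjoin A (coimp a c) (coimp b c)"
  and coimp_meet: "coimp a (wmeet A b c) = wjoin A (coimp a b) (coimp a c)"
  and coimp_trans: "le (coimp a c) (wjoin A (coimp a b) (coimp b c))"
  and meet_coimp_imp_zero: "le (wmeet A a (coimp (imp a b) (wzero A))) b"
  and le_join_imp_one_coimp: "le a (wjoin A b (imp (wone A) (coimp a b)))"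
  using is_whb abc unfolding is_whb_def wle_iff_le by blast+

end

lemma imp_eq_one_if_le:
  assumes "a \<in> wcar A" "b \<in> wcar A" "le a b"
  shows "imp a b = wone A"
proof -
  have "wjoin A a b = b" using assms le_iff_join by blast
  then have "imp b b = wmeet A (imp a b) (imp b b)" using join_imp[of a b b] assms by simp
  then show ?thesis using assms by simp
qed

lemma coimp_eq_zero_if_le:
  assumes "a \<in> wcar A" "b \<in> wcar A" "le a b"
  shows "coimp a b = wzero A"
proof -
  have "wjoin A a b = b" using assms le_iff_join by blast
  then have "coimp b b = wjoin A (coimp a b) (coimp b b)" using join_coimp[of a b b] assms by simp
  then show ?thesis using assms by simp
qed

lemma imp_mono:
  assumes "a \<in> wcar A" "b \<in> wcar A" "b' \<in> wcar A" "le b b'"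
  shows "le (imp a b) (imp a b')"
proof -
  have "wmeet A b b' = b" using assms by (simp add: le_def)
  then have "imp a b = wmeet A (imp a b) (imp a b')" using imp_meet[of a b b'] assms by simp
  then show ?thesis by (simp add: le_def)
qed

lemma imp_antimono:
  assumes "a \<in> wcar A" "a' \<in> wcar A" "b \<in> wcar A" "le a a'"
  shows "le (imp a' b) (imp a b)"
proof -
  have "wjoin A a a' = a'" using assms le_iff_join by blast
  then have "imp a' b = wmeet A (imp a b) (imp a' b)" using join_imp[of a a' b] assms by simp
  then show ?thesis using assms by (metis le_def meet_comm imp_closed)
qed

lemma coimp_mono:
  assumes "a \<in> wcar A" "a' \<in> wcar A" "b \<in> wcar A" "le a a'"
  shows "le (coimp a b) (coimp a' b)"
proof -
  have "wjoin A a a' = a'" using assms le_iff_join by blast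
  then have "coimp a' b = wjoin A (coimp a b) (coimp a' b)" using join_coimp[of a a' b] assms by simp
  then show ?thesis using assms le_iff_join by simp
qed

lemma coimp_antimono:
  assumes "a \<in> wcar A" "b \<in> wcar A" "b' \<in> wcar A" "le b b'"
  shows "le (coimp a b') (coimp a b)"
proof -
  have "wmeet A b b' = b" using assms by (simp add: le_def)
  then have "coimp a b = wjoin A (coimp a b) (coimp a b')" using coimp_meet[of a b b'] assms by simp
  then show ?thesis using assms le_iff_join by (metis join_comm coimp_closed)
qed

lemma imp_le_imp:
  assumes "c \<in> wcar A" "d \<in> wcar A" "c' \<in> wcar A" "d' \<in> wcar A" "le c c'" "le d' d"
  shows "le (imp c' d') (imp c d)"
  using le_trans[of "imp c' d'" "imp c d'" "imp c d"] imp_antimono[of c c' d'] imp_mono[of c d' d] assms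
  by simp

lemma coimp_le_coimp:
  assumes "c \<in> wcar A" "d \<in> wcar A" "c' \<in> wcar A" "d' \<in> wcar A" "le c c'" "le d' d"
  shows "le (coimp c d) (coimp c' d')"
  using le_trans[of "coimp c d" "coimp c d'" "coimp c' d'"] coimp_antimono[of c d' d] coimp_mono[of c c' d'] assms
  by simp

lemma imp_coimp_through_meet_join:
  assumes C: "c \<in> wcar A" "d \<in> wcar A" "x \<in> wcar A"
  defines "y \<equiv> wmeet A c (wjoin A d x)"
  shows "imp c y = imp c (wjoin A d x)" "imp y d = imp (wmeet A c x) d"
    "coimp c y = coimp c (wjoin A d x)" "coimp y d = coimp (wmeet A c x) d"
  using C imp_meet[of c c "wjoin A d x"] coimp_meet[of c c "wjoin A d x"]
    join_imp[of "wmeet A c d" "wmeet A c x" d] imp_eq_one_if_le[of "wmeet A c d" d]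
    join_coimp[of "wmeet A c d" "wmeet A c x" d] coimp_eq_zero_if_le[of "wmeet A c d" d]
  by (simp_all add: y_def meet_join_distrib)

text \<open>The successor lemmas apply \<open>prime_filter_extension\<close> to the relations
  \<open>imp c d \<notin> P\<close> and \<open>coimp c d \<in> P\<close>; its splitting hypothesis follows from the transitivity
  axioms \<open>imp_trans\<close> and \<open>coimp_trans\<close> through the element \<open>y\<close> of
  \<open>imp_coimp_through_meet_join\<close>.\<close>

lemma wR_successor:
  assumes P: "prime_filter P" and ab: "a \<in> wcar A" "b \<in> wcar A" and "imp a b \<notin> P"
  obtains Q where "prime_filter Q" "(P, Q) \<in> wR A" "a \<in> Q" "b \<notin> Q"
proof -
  have "\<exists>Q. prime_filter Q \<and> upset a \<subseteq> Q \<and> Q \<inter> downset b = {} \<and>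
      (\<forall>c\<in>Q. \<forall>d\<in>wcar A - Q. imp c d \<notin> P)"
  proof (rule prime_filter_extension[where \<Phi>="\<lambda>c d. imp c d \<notin> P"])
    show mono: "imp c' d' \<notin> P"
      if "c \<in> wcar A" "d \<in> wcar A" "c' \<in> wcar A" "d' \<in> wcar A"
        and "imp c d \<notin> P" "le c c'" "le d' d" for c d c' d'
      using that imp_le_imp[of c d c' d'] prime_filter_up[OF P] by auto
    show "imp (wmeet A c x) d \<notin> P \<or> imp c (wjoin A d x) \<notin> P"
      if C: "c \<in> wcar A" "d \<in> wcar A" "x \<in> wcar A" and "imp c d \<notin> P" for c d x
    proof -
      define y where "y = wmeet A c (wjoin A d x)"
      have y: "y \<in> wcar A" using C by (simp add: y_def)
      have "\<not> (imp c y \<in> P \<and> imp y d \<in> P)"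
      proof
        assume "imp c y \<in> P \<and> imp y d \<in> P"
        then have "wmeet A (imp c y) (imp y d) \<in> P" using prime_filter_meet[OF P] C y by simp
        then show False using prime_filter_up[OF P] imp_trans[of c y d] C y that by simp
      qed
      then show ?thesis using imp_coimp_through_meet_join[OF C] by (auto simp: y_def)
    qed
    show "\<not> imp c c \<notin> P" if "c \<in> wcar A" for c
      using that prime_filterD(2)[OF P] by simp
    show "\<forall>c\<in>upset a. \<forall>d\<in>downset b. imp c d \<notin> P"
      using mono[of a b] ab \<open>imp a b \<notin> P\<close> by (auto simp: upset_def downset_def)
    show "is_filter (upset a)" "is_ideal (downset b)"
      using ab by (simp_all add: is_filter_upset is_ideal_downset)
  qed
  then obtain Q where Q: "prime_filter Q" "upset a \<subseteq> Q" "Q \<inter> downset b = {}"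
    and sep: "\<forall>c\<in>Q. \<forall>d\<in>wcar A - Q. imp c d \<notin> P" by blast
  have "a \<in> Q" "b \<notin> Q" using Q(2,3) ab by (auto simp: upset_def downset_def)
  moreover have "(P, Q) \<in> wR A"
    using P Q(1) sep unfolding wR_def prime_filters_eq by blast
  ultimately show thesis using that Q(1) by blast
qed

lemma wS_successor:
  assumes P: "prime_filter P" and ab: "a \<in> wcar A" "b \<in> wcar A" and "coimp a b \<in> P"
  obtains Q where "prime_filter Q" "(P, Q) \<in> wS A" "a \<in> Q" "b \<notin> Q"
proof -
  have "\<exists>Q. prime_filter Q \<and> upset a \<subseteq> Q \<and> Q \<inter> downset b = {} \<and>
      (\<forall>c\<in>Q. \<forall>d\<in>wcar A - Q. coimp c d \<in> P)"
  proof (rule prime_filter_extension[where \<Phi>="\<lambda>c d. coimp c d \<in> P"])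
    show mono: "coimp c' d' \<in> P"
      if "c \<in> wcar A" "d \<in> wcar A" "c' \<in> wcar A" "d' \<in> wcar A"
        and "coimp c d \<in> P" "le c c'" "le d' d" for c d c' d'
      using that coimp_le_coimp[of c d c' d'] prime_filter_up[OF P] by auto
    show "coimp (wmeet A c x) d \<in> P \<or> coimp c (wjoin A d x) \<in> P"
      if C: "c \<in> wcar A" "d \<in> wcar A" "x \<in> wcar A" and "coimp c d \<in> P" for c d x
    proof -
      define y where "y = wmeet A c (wjoin A d x)"
      have y: "y \<in> wcar A" using C by (simp add: y_def)
      have "wjoin A (coimp c y) (coimp y d) \<in> P"
        using prime_filter_up[OF P] coimp_trans[of c y d] C y that by simp
      then have "coimp c y \<in> P \<or> coimp y d \<in> P" using prime_filter_join[OF P] C y by simp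
      then show ?thesis using imp_coimp_through_meet_join[OF C] by (auto simp: y_def)
    qed
    show "coimp c c \<notin> P" if "c \<in> wcar A" for c
      using that prime_filterD(3)[OF P] by simp
    show "\<forall>c\<in>upset a. \<forall>d\<in>downset b. coimp c d \<in> P"
      using mono[of a b] ab \<open>coimp a b \<in> P\<close> by (auto simp: upset_def downset_def)
    show "is_filter (upset a)" "is_ideal (downset b)"
      using ab by (simp_all add: is_filter_upset is_ideal_downset)
  qed
  then obtain Q where Q: "prime_filter Q" "upset a \<subseteq> Q" "Q \<inter> downset b = {}"
    and sep: "\<forall>c\<in>Q. \<forall>d\<in>wcar A - Q. coimp c d \<in> P" by blast
  have "a \<in> Q" "b \<notin> Q" using Q(2,3) ab by (auto simp: upset_def downset_def)
  moreover have "(P, Q) \<in> wS A"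
    using P Q(1) sep unfolding wS_def prime_filters_eq by blast
  ultimately show thesis using that Q(1) by blast
qed

lemma wS_iff_converse_wR: "(P, Q) \<in> wS A \<longleftrightarrow> (Q, P) \<in> wR A"
proof
  assume S: "(P, Q) \<in> wS A"
  then have PQ: "prime_filter P" "prime_filter Q" by (auto simp: wS_def prime_filters_eq)
  show "(Q, P) \<in> wR A" unfolding wR_def prime_filters_eq
  proof (clarsimp simp: PQ)
    fix c d assume cd: "c \<in> wcar A" "d \<in> wcar A" "imp c d \<in> Q" "c \<in> P"
    have "coimp (imp c d) (wzero A) \<in> P" using S cd prime_filterD(3)[OF PQ(2)] unfolding wS_def by auto
    then have "wmeet A c (coimp (imp c d) (wzero A)) \<in> P" using cd prime_filter_meet[OF PQ(1)] by simp
    then show "d \<in> P"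
      using meet_coimp_imp_zero[of c d] cd prime_filter_up[OF PQ(1)] by simp
  qed
next
  assume R: "(Q, P) \<in> wR A"
  then have PQ: "prime_filter P" "prime_filter Q" by (auto simp: wR_def prime_filters_eq)
  show "(P, Q) \<in> wS A" unfolding wS_def prime_filters_eq
  proof (clarsimp simp: PQ)
    fix c d assume cd: "c \<in> wcar A" "d \<in> wcar A" "c \<in> Q" "d \<notin> Q"
    have "wjoin A d (imp (wone A) (coimp c d)) \<in> Q"
      using le_join_imp_one_coimp[of c d] cd prime_filter_up[OF PQ(2)] by simp
    then have "imp (wone A) (coimp c d) \<in> Q" using cd prime_filter_join[OF PQ(2)] by simp
    then show "coimp c d \<in> P"
      using R cd prime_filterD(2)[OF PQ(1)] one_closed coimp_closed unfolding wR_def by blast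
  qed
qed

end

section \<open>The clopen algebra of a WHB-algebra\<close>

text \<open>\<open>cnf A [(a\<^sub>1, b\<^sub>1), \<dots>, (a\<^sub>n, b\<^sub>n)]\<close> is the intersection of the sets
  \<open>(X(A) - \<sigma>(a\<^sub>i)) \<union> \<sigma>(b\<^sub>i)\<close>; these turn out to be exactly the clopen sets.\<close>

definition cnf :: "('a, 'b) whb_scheme \<Rightarrow> ('a \<times> 'a) list \<Rightarrow> 'a set set" where
  "cnf A ps = {P \<in> prime_filters A. \<forall>a b. (a, b) \<in> set ps \<longrightarrow> a \<in> P \<longrightarrow> b \<in> P}"

definition box :: "('a, 'b) whb_scheme \<Rightarrow> 'a \<Rightarrow> 'a \<Rightarrow> 'a set set" where
  "box A a b = {P \<in> prime_filters A. a \<in> P \<and> b \<notin> P}"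

context whb_alg
begin

definition subbasis :: "'a set set set" where
  "subbasis = {prime_filters A} \<union> wsigma A ` wcar A \<union> (\<lambda>a. prime_filters A - wsigma A a) ` wcar A"

lemma wtop_eq: "wtop A = topology_generated_by subbasis"
  by (simp add: wtop_def subbasis_def)

lemma topspace_wtop [simp]: "topspace (wtop A) = prime_filters A"
  unfolding wtop_eq by (auto simp: subbasis_def wsigma_def)

lemma openin_subbasis: "s \<in> subbasis \<Longrightarrow> openin (wtop A) s"
  unfolding wtop_eq by (rule topology_generated_by_Basis)

lemma wsigma_subset: "wsigma A a \<subseteq> prime_filters A"
  by (auto simp: wsigma_def)

lemma clopen_wsigma:
  assumes "a \<in> wcar A"
  shows "openin (wtop A) (wsigma A a)" "closedin (wtop A) (wsigma A a)"
    "openin (wtop A) (prime_filters A - wsigma A a)" "closedin (wtop A) (prime_filters A - wsigma A a)"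
proof -
  show o1: "openin (wtop A) (wsigma A a)" and o2: "openin (wtop A) (prime_filters A - wsigma A a)"
    using assms by (auto intro: openin_subbasis simp: subbasis_def)
  have "prime_filters A - (prime_filters A - wsigma A a) = wsigma A a" using wsigma_subset by blast
  then show "closedin (wtop A) (wsigma A a)" "closedin (wtop A) (prime_filters A - wsigma A a)"
    using o1 o2 wsigma_subset unfolding closedin_def by auto
qed

lemma cnf_Nil: "cnf A [] = prime_filters A"
  by (simp add: cnf_def)

lemma cnf_Cons: "cnf A ((a, b) # ps) = ((prime_filters A - wsigma A a) \<union> wsigma A b) \<inter> cnf A ps"
  by (auto simp: cnf_def wsigma_def)

lemma clopen_cnf:
  "set ps \<subseteq> wcar A \<times> wcar A \<Longrightarrow> openin (wtop A) (cnf A ps) \<and> closedin (wtop A) (cnf A ps)"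
proof (induction ps)
  case Nil
  show ?case
    using openin_topspace[of "wtop A"] closedin_topspace[of "wtop A"] by (simp add: cnf_Nil)
next
  case (Cons p ps)
  obtain a b where p: "p = (a, b)" by fastforce
  then have "a \<in> wcar A" "b \<in> wcar A" using Cons.prems by auto
  then show ?case
    using Cons clopen_wsigma[of a] clopen_wsigma[of b] unfolding p cnf_Cons by auto
qed

lemma openin_box_neighbourhood:
  assumes "openin (wtop A) W" "P \<in> W"
  obtains a b where "a \<in> wcar A" "b \<in> wcar A" "P \<in> box A a b" "box A a b \<subseteq> W"
proof -
  have "generate_topology_on subbasis W" using assms(1) unfolding wtop_eq by (rule openin_topology_generated_by)
  then have "\<exists>a\<in>wcar A. \<exists>b\<in>wcar A. P \<in> box A a b \<and> box A a b \<subseteq> W"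
    using assms(2)
  proof (induction arbitrary: P rule: generate_topology_on.induct)
    case Empty
    then show ?case by simp
  next
    case (Int s t)
    obtain a b where ab: "a \<in> wcar A" "b \<in> wcar A" "P \<in> box A a b" "box A a b \<subseteq> s"
      using Int.IH(1) Int.prems by blast
    obtain a' b' where ab': "a' \<in> wcar A" "b' \<in> wcar A" "P \<in> box A a' b'" "box A a' b' \<subseteq> t"
      using Int.IH(2) Int.prems by blast
    have "box A (wmeet A a a') (wjoin A b b') = box A a b \<inter> box A a' b'"
      using ab ab' by (auto simp: box_def prime_filters_eq prime_filter_meet prime_filter_join)
    then have "P \<in> box A (wmeet A a a') (wjoin A b b')" "box A (wmeet A a a') (wjoin A b b') \<subseteq> s \<inter> t"
      using ab ab' by auto
    then show ?case using ab ab' meet_closed join_closed by blast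
  next
    case (UN K)
    then show ?case by blast
  next
    case (Basis s)
    then consider "s = prime_filters A" | c where "c \<in> wcar A" "s = wsigma A c"
      | c where "c \<in> wcar A" "s = prime_filters A - wsigma A c"
      unfolding subbasis_def by blast
    then show ?case
    proof cases
      case 1
      then have "P \<in> box A (wone A) (wzero A)" "box A (wone A) (wzero A) \<subseteq> s"
        using Basis.prems by (auto simp: box_def prime_filters_eq prime_filterD)
      then show ?thesis using one_closed zero_closed by blast
    next
      case (2 c)
      then have "P \<in> box A c (wzero A)" "box A c (wzero A) \<subseteq> s"
        using Basis.prems by (auto simp: box_def prime_filters_eq prime_filterD wsigma_def)
      then show ?thesis using 2 zero_closed by blast
    next
      case (3 c)
      then have "P \<in> box A (wone A) c" "box A (wone A) c \<subseteq> s"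
        using Basis.prems by (auto simp: box_def prime_filters_eq prime_filterD wsigma_def)
      then show ?thesis using 3 one_closed by blast
    qed
  qed
  then show thesis using that by blast
qed

subsection \<open>Compactness\<close>

text \<open>A set \<open>K\<close> of pairs stands for the family of boxes \<open>box A a b\<close>, \<open>(a, b) \<in> K\<close>.\<close>

definition covers :: "('a \<times> 'a) set \<Rightarrow> bool" where
  "covers K \<longleftrightarrow> (\<forall>P. prime_filter P \<longrightarrow> (\<exists>a b. (a, b) \<in> K \<and> a \<in> P \<and> b \<notin> P))"

definition has_finite_subcover :: "('a \<times> 'a) set \<Rightarrow> bool" where
  "has_finite_subcover K \<longleftrightarrow> (\<exists>K0. finite K0 \<and> K0 \<subseteq> K \<and> covers K0)"

lemma has_finite_subcover_mono: "has_finite_subcover K \<Longrightarrow> K \<subseteq> M \<Longrightarrow> has_finite_subcover M"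
  unfolding has_finite_subcover_def by (meson order_trans)

text \<open>Alexander's subbase argument: the box of \<open>(a, b)\<close> is the intersection of the subbasic
  boxes of \<open>(a, 0)\<close> and \<open>(1, b)\<close>.\<close>

lemma has_finite_subcover_insert_box:
  assumes "has_finite_subcover (insert (a, wzero A) M)" "has_finite_subcover (insert (wone A, b) M)"
  shows "has_finite_subcover (insert (a, b) M)"
proof -
  obtain M1 where M1: "finite M1" "M1 \<subseteq> insert (a, wzero A) M" "covers M1"
    using assms(1) by (auto simp: has_finite_subcover_def)
  obtain M2 where M2: "finite M2" "M2 \<subseteq> insert (wone A, b) M" "covers M2"
    using assms(2) by (auto simp: has_finite_subcover_def)
  define M0 where "M0 = (M1 - {(a, wzero A)}) \<union> (M2 - {(wone A, b)}) \<union> {(a, b)}"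
  have "covers M0"
    unfolding covers_def
  proof (intro allI impI)
    fix P assume P: "prime_filter P"
    obtain c d where cd: "(c, d) \<in> M1" "c \<in> P" "d \<notin> P" using M1(3) P unfolding covers_def by blast
    obtain c' d' where cd': "(c', d') \<in> M2" "c' \<in> P" "d' \<notin> P" using M2(3) P unfolding covers_def by blast
    show "\<exists>c d. (c, d) \<in> M0 \<and> c \<in> P \<and> d \<notin> P"
      using cd cd' unfolding M0_def by (cases "(c, d) = (a, wzero A)"; cases "(c', d') = (wone A, b)") auto
  qed
  moreover have "finite M0" "M0 \<subseteq> insert (a, b) M" using M1 M2 by (auto simp: M0_def)
  ultimately show ?thesis by (auto simp: has_finite_subcover_def)
qed

lemma has_finite_subcover_subbasic:
  assumes As: "As \<subseteq> wcar A" and Bs: "Bs \<subseteq> wcar A"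
    and cov: "covers ((\<lambda>b. (wone A, b)) ` Bs \<union> (\<lambda>a. (a, wzero A)) ` As)"
  shows "has_finite_subcover ((\<lambda>b. (wone A, b)) ` Bs \<union> (\<lambda>a. (a, wzero A)) ` As)"
proof -
  have "\<exists>xs ys. set xs \<subseteq> Bs \<and> set ys \<subseteq> As \<and> le (meet_list xs) (join_list ys)"
  proof (rule ccontr)
    assume "\<nexists>xs ys. set xs \<subseteq> Bs \<and> set ys \<subseteq> As \<and> le (meet_list xs) (join_list ys)"
    then obtain P where P: "prime_filter P" "Bs \<subseteq> P" "P \<inter> As = {}"
      using prime_filter_separation_sets[OF As Bs] by blast
    then show False using cov prime_filterD(2,3)[OF P(1)] unfolding covers_def by blast
  qed
  then obtain xs ys where xy: "set xs \<subseteq> Bs" "set ys \<subseteq> As" "le (meet_list xs) (join_list ys)"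
    by blast
  define M0 where "M0 = (\<lambda>b. (wone A, b)) ` set xs \<union> (\<lambda>a. (a, wzero A)) ` set ys"
  have xyC: "set xs \<subseteq> wcar A" "set ys \<subseteq> wcar A" using xy As Bs by auto
  have "covers M0"
    unfolding covers_def
  proof (intro allI impI)
    fix P assume P: "prime_filter P"
    show "\<exists>c d. (c, d) \<in> M0 \<and> c \<in> P \<and> d \<notin> P"
    proof (cases "\<forall>x\<in>set xs. x \<in> P")
      case True
      then have "join_list ys \<in> P"
        using prime_filter_meet_list[OF P xyC(1)] prime_filter_up[OF P _ _ xy(3)] xyC by simp
      then obtain y where "y \<in> set ys" "y \<in> P" using prime_filter_join_list[OF P xyC(2)] by blast
      then show ?thesis using prime_filterD(3)[OF P] by (auto simp: M0_def)
    next
      case False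
      then show ?thesis using prime_filterD(2)[OF P] by (auto simp: M0_def)
    qed
  qed
  then show ?thesis using xy unfolding has_finite_subcover_def M0_def
    by (intro exI[of _ M0]) (auto simp: M0_def)
qed

lemma maximal_without_finite_subcover:
  assumes K: "K \<subseteq> wcar A \<times> wcar A" and "\<not> has_finite_subcover K"
  obtains M where "K \<subseteq> M" "M \<subseteq> wcar A \<times> wcar A" "\<not> has_finite_subcover M"
    "\<forall>p \<in> wcar A \<times> wcar A. \<not> has_finite_subcover (insert p M) \<longrightarrow> p \<in> M"
proof -
  define \<M> where "\<M> = {M. K \<subseteq> M \<and> M \<subseteq> wcar A \<times> wcar A \<and> \<not> has_finite_subcover M}"
  have "\<exists>M\<in>\<M>. \<forall>M'\<in>\<M>. M \<subseteq> M' \<longrightarrow> M' = M"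
  proof (rule Zorn_Lemma2, intro ballI)
    fix Ch assume Ch: "Ch \<in> chains \<M>"
    show "\<exists>U\<in>\<M>. \<forall>M\<in>Ch. M \<subseteq> U"
    proof (cases "Ch = {}")
      case True
      then show ?thesis using assms by (intro bexI[of _ K]) (auto simp: \<M>_def)
    next
      case False
      have sub: "Ch \<subseteq> \<M>" using Ch by (auto simp: chains_def)
      have chain: "subset.chain \<M> Ch" using Ch by (simp add: chains_alt_def)
      have "\<Union>Ch \<in> \<M>"
        unfolding \<M>_def
      proof (intro CollectI conjI notI)
        obtain M1 where "M1 \<in> Ch" using False by blast
        then show "K \<subseteq> \<Union>Ch" using sub by (auto simp: \<M>_def)
        show "\<Union>Ch \<subseteq> wcar A \<times> wcar A" using sub by (auto simp: \<M>_def)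
        assume "has_finite_subcover (\<Union>Ch)"
        then obtain M0 where M0: "finite M0" "M0 \<subseteq> \<Union>Ch" "covers M0"
          by (auto simp: has_finite_subcover_def)
        obtain M where M: "M \<in> Ch" "M0 \<subseteq> M"
          by (rule finite_subset_Union_chain[OF M0(1,2) False chain])
        then have "has_finite_subcover M" using M0 unfolding has_finite_subcover_def by blast
        moreover have "\<not> has_finite_subcover M" using sub M(1) by (auto simp: \<M>_def)
        ultimately show False by contradiction
      qed
      then show ?thesis by blast
    qed
  qed
  then obtain M where M: "M \<in> \<M>" and max: "\<And>M'. M' \<in> \<M> \<Longrightarrow> M \<subseteq> M' \<Longrightarrow> M' = M" by blast
  show thesis
  proof (rule that)
    show "K \<subseteq> M" "M \<subseteq> wcar A \<times> wcar A" "\<not> has_finite_subcover M" using M by (auto simp: \<M>_def)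
    show "\<forall>p \<in> wcar A \<times> wcar A. \<not> has_finite_subcover (insert p M) \<longrightarrow> p \<in> M"
    proof (intro ballI impI)
      fix p assume "p \<in> wcar A \<times> wcar A" "\<not> has_finite_subcover (insert p M)"
      then have "insert p M \<in> \<M>" using M by (auto simp: \<M>_def)
      then show "p \<in> M" using max[of "insert p M"] by blast
    qed
  qed
qed

theorem compactness:
  assumes K: "K \<subseteq> wcar A \<times> wcar A" and "covers K"
  shows "has_finite_subcover K"
proof (rule ccontr)
  assume "\<not> has_finite_subcover K"
  then obtain M where KM: "K \<subseteq> M" and MC: "M \<subseteq> wcar A \<times> wcar A" and M_nf: "\<not> has_finite_subcover M"
    and grow: "\<forall>p \<in> wcar A \<times> wcar A. \<not> has_finite_subcover (insert p M) \<longrightarrow> p \<in> M"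
    by (rule maximal_without_finite_subcover[OF K])
  have split: "(a, wzero A) \<in> M \<or> (wone A, b) \<in> M" if ab: "(a, b) \<in> M" for a b
  proof (rule ccontr)
    assume out: "\<not> ((a, wzero A) \<in> M \<or> (wone A, b) \<in> M)"
    have "(a, wzero A) \<in> wcar A \<times> wcar A" "(wone A, b) \<in> wcar A \<times> wcar A" using ab MC by auto
    then have "has_finite_subcover (insert (a, wzero A) M)" "has_finite_subcover (insert (wone A, b) M)"
      using grow out by blast+
    then have "has_finite_subcover (insert (a, b) M)" by (rule has_finite_subcover_insert_box)
    then show False using M_nf insert_absorb[OF ab] by simp
  qed
  define As where "As = {a. (a, wzero A) \<in> M}"
  define Bs where "Bs = {b. (wone A, b) \<in> M}"
  have sub: "(\<lambda>b. (wone A, b)) ` Bs \<union> (\<lambda>a. (a, wzero A)) ` As \<subseteq> M"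
    by (auto simp: As_def Bs_def)
  have cov: "covers ((\<lambda>b. (wone A, b)) ` Bs \<union> (\<lambda>a. (a, wzero A)) ` As)"
    unfolding covers_def
  proof (intro allI impI)
    fix P assume P: "prime_filter P"
    then obtain a b where ab: "(a, b) \<in> M" "a \<in> P" "b \<notin> P"
      using \<open>covers K\<close> KM unfolding covers_def by blast
    from split[OF ab(1)]
    show "\<exists>c d. (c, d) \<in> (\<lambda>b. (wone A, b)) ` Bs \<union> (\<lambda>a. (a, wzero A)) ` As \<and> c \<in> P \<and> d \<notin> P"
    proof
      assume "(a, wzero A) \<in> M"
      then have "(a, wzero A) \<in> (\<lambda>b. (wone A, b)) ` Bs \<union> (\<lambda>a. (a, wzero A)) ` As"
        by (simp add: As_def)
      then show ?thesis using ab(2) prime_filterD(3)[OF P] by blast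
    next
      assume "(wone A, b) \<in> M"
      then have "(wone A, b) \<in> (\<lambda>b. (wone A, b)) ` Bs \<union> (\<lambda>a. (a, wzero A)) ` As"
        by (simp add: Bs_def)
      then show ?thesis using ab(3) prime_filterD(2)[OF P] by blast
    qed
  qed
  have "has_finite_subcover ((\<lambda>b. (wone A, b)) ` Bs \<union> (\<lambda>a. (a, wzero A)) ` As)"
    by (rule has_finite_subcover_subbasic[OF _ _ cov]) (use MC in \<open>auto simp: As_def Bs_def\<close>)
  then show False using has_finite_subcover_mono[OF _ sub] M_nf by blast
qed

lemma covers_clopen_boxes:
  assumes o: "openin (wtop A) U" and c: "closedin (wtop A) U"
  shows "covers {(a, b). a \<in> wcar A \<and> b \<in> wcar A \<and> (box A a b \<subseteq> U \<or> box A a b \<inter> U = {})}"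
  unfolding covers_def
proof (intro allI impI)
  fix P assume P: "prime_filter P"
  have oc: "openin (wtop A) (prime_filters A - U)" using c unfolding closedin_def by simp
  obtain a b where ab: "a \<in> wcar A" "b \<in> wcar A" "P \<in> box A a b"
    and "box A a b \<subseteq> U \<or> box A a b \<subseteq> prime_filters A - U"
  proof (cases "P \<in> U")
    case True
    then show thesis using that openin_box_neighbourhood[OF o True] by blast
  next
    case False
    then have "P \<in> prime_filters A - U" using P by (simp add: prime_filters_eq)
    then show thesis using that openin_box_neighbourhood[OF oc] by blast
  qed
  moreover have "a \<in> P" "b \<notin> P" using ab(3) by (simp_all add: box_def)
  ultimately show "\<exists>a b. (a, b) \<in> {(a, b). a \<in> wcar A \<and> b \<in> wcar A \<and> (box A a b \<subseteq> U \<or> box A a b \<inter> U = {})} \<and>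
      a \<in> P \<and> b \<notin> P"
    by blast
qed

lemma clopen_eq_cnf:
  assumes o: "openin (wtop A) U" and c: "closedin (wtop A) U"
  obtains ps where "set ps \<subseteq> wcar A \<times> wcar A" "U = cnf A ps"
proof -
  have U: "U \<subseteq> prime_filters A" using o openin_subset by fastforce
  define K where "K = {(a, b). a \<in> wcar A \<and> b \<in> wcar A \<and> (box A a b \<subseteq> U \<or> box A a b \<inter> U = {})}"
  have "covers K" unfolding K_def by (rule covers_clopen_boxes[OF o c])
  then obtain K0 where K0: "finite K0" "K0 \<subseteq> K" "covers K0"
    using compactness[of K] by (auto simp: K_def has_finite_subcover_def)
  have "finite {(a, b) \<in> K0. box A a b \<inter> U = {}}" using K0(1) by (rule rev_finite_subset) auto
  from finite_list[OF this] obtain ps where ps: "set ps = {(a, b) \<in> K0. box A a b \<inter> U = {}}" ..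
  have "set ps \<subseteq> wcar A \<times> wcar A" using ps K0(2) by (auto simp: K_def)
  moreover have "U = cnf A ps"
  proof
    show "U \<subseteq> cnf A ps"
    proof
      fix P assume "P \<in> U"
      have "\<forall>a b. (a, b) \<in> set ps \<longrightarrow> a \<in> P \<longrightarrow> b \<in> P"
      proof (intro allI impI)
        fix a b assume ab: "(a, b) \<in> set ps" "a \<in> P"
        show "b \<in> P"
        proof (rule ccontr)
          assume "b \<notin> P"
          then have "P \<in> box A a b" using ab(2) \<open>P \<in> U\<close> U by (auto simp: box_def)
          moreover have "box A a b \<inter> U = {}" using ab(1) ps by auto
          ultimately show False using \<open>P \<in> U\<close> by blast
        qed
      qed
      then show "P \<in> cnf A ps" using \<open>P \<in> U\<close> U unfolding cnf_def by blast
    qed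
    show "cnf A ps \<subseteq> U"
    proof
      fix P assume P: "P \<in> cnf A ps"
      then have "prime_filter P" by (simp add: cnf_def prime_filters_eq)
      then obtain a b where ab: "(a, b) \<in> K0" "a \<in> P" "b \<notin> P" using K0(3) unfolding covers_def by blast
      have "(a, b) \<notin> set ps" using P ab by (auto simp: cnf_def)
      then have "box A a b \<inter> U \<noteq> {}" using ab(1) ps by auto
      moreover have "(a, b) \<in> K" using ab(1) K0(2) by blast
      ultimately have "box A a b \<subseteq> U" by (simp add: K_def)
      moreover have "P \<in> box A a b" using P ab by (simp add: box_def cnf_def)
      ultimately show "P \<in> U" by blast
    qed
  qed
  ultimately show thesis by (rule that)
qed

lemma T_alg_carrier: "tcar (T_alg A) = {cnf A ps | ps. set ps \<subseteq> wcar A \<times> wcar A}"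
proof
  show "tcar (T_alg A) \<subseteq> {cnf A ps | ps. set ps \<subseteq> wcar A \<times> wcar A}"
  proof
    fix U assume "U \<in> tcar (T_alg A)"
    then have "openin (wtop A) U" "closedin (wtop A) U" by (simp_all add: T_alg_def)
    then obtain ps where "set ps \<subseteq> wcar A \<times> wcar A" "U = cnf A ps" by (rule clopen_eq_cnf)
    then show "U \<in> {cnf A ps | ps. set ps \<subseteq> wcar A \<times> wcar A}" by blast
  qed
  show "{cnf A ps | ps. set ps \<subseteq> wcar A \<times> wcar A} \<subseteq> tcar (T_alg A)"
    using clopen_cnf by (auto simp: T_alg_def)
qed

lemma cnf_in_T: "set ps \<subseteq> wcar A \<times> wcar A \<Longrightarrow> cnf A ps \<in> tcar (T_alg A)"
  unfolding T_alg_carrier by blast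

lemma wsigma_cnf: "wsigma A a = cnf A [(wone A, a)]"
  by (auto simp: wsigma_def cnf_def prime_filters_eq prime_filterD)

lemma G_cnf:
  assumes ps: "set ps \<subseteq> wcar A \<times> wcar A"
  shows "tG (T_alg A) (cnf A ps) = cnf A (map (\<lambda>(a, b). (wone A, imp a b)) ps)"
proof -
  have "{P \<in> prime_filters A. wR A `` {P} \<subseteq> cnf A ps} = cnf A (map (\<lambda>(a, b). (wone A, imp a b)) ps)"
  proof (intro set_eqI iffI)
    fix P assume P: "P \<in> {P \<in> prime_filters A. wR A `` {P} \<subseteq> cnf A ps}"
    then have "prime_filter P" by (simp add: prime_filters_eq)
    have "imp a b \<in> P" if ab: "(a, b) \<in> set ps" for a b
    proof (rule ccontr)
      assume n: "imp a b \<notin> P"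
      have abC: "a \<in> wcar A" "b \<in> wcar A" using ab ps by auto
      obtain Q where Q: "prime_filter Q" "(P, Q) \<in> wR A" "a \<in> Q" "b \<notin> Q"
        by (rule wR_successor[OF \<open>prime_filter P\<close> abC n])
      then have "Q \<in> cnf A ps" using P by blast
      then show False using Q ab unfolding cnf_def by blast
    qed
    then show "P \<in> cnf A (map (\<lambda>(a, b). (wone A, imp a b)) ps)" using P by (auto simp: cnf_def)
  next
    fix P assume P: "P \<in> cnf A (map (\<lambda>(a, b). (wone A, imp a b)) ps)"
    then have "prime_filter P" by (simp add: cnf_def prime_filters_eq)
    then have imps: "imp a b \<in> P" if "(a, b) \<in> set ps" for a b
      using P that prime_filterD(2) unfolding cnf_def by fastforce
    have "wR A `` {P} \<subseteq> cnf A ps"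
    proof
      fix Q assume "Q \<in> wR A `` {P}"
      then have Q: "(P, Q) \<in> wR A" by blast
      then have "Q \<in> prime_filters A" by (simp add: wR_def)
      moreover have "b \<in> Q" if "(a, b) \<in> set ps" "a \<in> Q" for a b
        using Q imps[OF that(1)] that ps unfolding wR_def by blast
      ultimately show "Q \<in> cnf A ps" unfolding cnf_def by blast
    qed
    then show "P \<in> {P \<in> prime_filters A. wR A `` {P} \<subseteq> cnf A ps}" using P by (simp add: cnf_def)
  qed
  then show ?thesis by (simp add: T_alg_def)
qed

lemma H_cnf:
  assumes ps: "set ps \<subseteq> wcar A \<times> wcar A"
  shows "tH (T_alg A) (cnf A ps) = cnf A (map (\<lambda>(a, b). (coimp a b, wzero A)) ps)"
proof -
  have "{P \<in> prime_filters A. wS A `` {P} \<subseteq> cnf A ps} = cnf A (map (\<lambda>(a, b). (coimp a b, wzero A)) ps)"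
  proof (intro set_eqI iffI)
    fix P assume P: "P \<in> {P \<in> prime_filters A. wS A `` {P} \<subseteq> cnf A ps}"
    then have "prime_filter P" by (simp add: prime_filters_eq)
    have "coimp a b \<notin> P" if ab: "(a, b) \<in> set ps" for a b
    proof
      assume n: "coimp a b \<in> P"
      have abC: "a \<in> wcar A" "b \<in> wcar A" using ab ps by auto
      obtain Q where Q: "prime_filter Q" "(P, Q) \<in> wS A" "a \<in> Q" "b \<notin> Q"
        by (rule wS_successor[OF \<open>prime_filter P\<close> abC n])
      then have "Q \<in> cnf A ps" using P by blast
      then show False using Q ab unfolding cnf_def by blast
    qed
    then show "P \<in> cnf A (map (\<lambda>(a, b). (coimp a b, wzero A)) ps)" using P by (auto simp: cnf_def)
  next
    fix P assume P: "P \<in> cnf A (map (\<lambda>(a, b). (coimp a b, wzero A)) ps)"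
    then have "prime_filter P" by (simp add: cnf_def prime_filters_eq)
    then have coimps: "coimp a b \<notin> P" if "(a, b) \<in> set ps" for a b
      using P that prime_filterD(3) unfolding cnf_def by fastforce
    have "wS A `` {P} \<subseteq> cnf A ps"
    proof
      fix Q assume "Q \<in> wS A `` {P}"
      then have Q: "(P, Q) \<in> wS A" by blast
      then have "Q \<in> prime_filters A" by (simp add: wS_def)
      moreover have "b \<in> Q" if "(a, b) \<in> set ps" "a \<in> Q" for a b
        using Q coimps[OF that(1)] that ps unfolding wS_def by blast
      ultimately show "Q \<in> cnf A ps" unfolding cnf_def by blast
    qed
    then show "P \<in> {P \<in> prime_filters A. wS A `` {P} \<subseteq> cnf A ps}" using P by (simp add: cnf_def)
  qed
  then show ?thesis by (simp add: T_alg_def)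
qed

lemma mem_cnf_imp_iff:
  assumes "prime_filter P"
  shows "P \<in> cnf A (map (\<lambda>(a, b). (wone A, imp a b)) ps) \<longleftrightarrow> (\<forall>a b. (a, b) \<in> set ps \<longrightarrow> imp a b \<in> P)"
  using assms prime_filterD(2)[OF assms] by (force simp: cnf_def prime_filters_eq)

lemma mem_cnf_coimp_iff:
  assumes "prime_filter P"
  shows "P \<in> cnf A (map (\<lambda>(a, b). (coimp a b, wzero A)) ps) \<longleftrightarrow> (\<forall>a b. (a, b) \<in> set ps \<longrightarrow> coimp a b \<notin> P)"
  using assms prime_filterD(3)[OF assms] by (force simp: cnf_def prime_filters_eq)

lemma T_alg_simps:
  "tmeet (T_alg A) = (\<inter>)" "tjoin (T_alg A) = (\<union>)" "tneg (T_alg A) = (\<lambda>U. prime_filters A - U)"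
  "tzero (T_alg A) = {}" "tone (T_alg A) = prime_filters A"
  "tG (T_alg A) = (\<lambda>U. {P \<in> prime_filters A. wR A `` {P} \<subseteq> U})"
  "tH (T_alg A) = (\<lambda>U. {P \<in> prime_filters A. wS A `` {P} \<subseteq> U})"
  by (simp_all add: T_alg_def)

lemma T_carrier_iff: "U \<in> tcar (T_alg A) \<longleftrightarrow> openin (wtop A) U \<and> closedin (wtop A) U"
  by (simp add: T_alg_def)

lemma T_carrier_subset: "U \<in> tcar (T_alg A) \<Longrightarrow> U \<subseteq> prime_filters A"
  unfolding T_carrier_iff using closedin_subset by fastforce

lemma T_carrier_closed:
  assumes "U \<in> tcar (T_alg A)" "V \<in> tcar (T_alg A)"
  shows "U \<inter> V \<in> tcar (T_alg A)" "U \<union> V \<in> tcar (T_alg A)" "prime_filters A - U \<in> tcar (T_alg A)"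
    "tG (T_alg A) U \<in> tcar (T_alg A)" "tH (T_alg A) U \<in> tcar (T_alg A)"
proof -
  show "U \<inter> V \<in> tcar (T_alg A)" "U \<union> V \<in> tcar (T_alg A)"
    using assms unfolding T_carrier_iff by blast+
  have "prime_filters A - (prime_filters A - U) = U" using T_carrier_subset[OF assms(1)] by blast
  then show "prime_filters A - U \<in> tcar (T_alg A)"
    using assms(1) unfolding T_carrier_iff closedin_def by auto
  obtain ps where ps: "set ps \<subseteq> wcar A \<times> wcar A" "U = cnf A ps"
    using assms(1) unfolding T_alg_carrier by auto
  have "set (map (\<lambda>(a, b). (wone A, imp a b)) ps) \<subseteq> wcar A \<times> wcar A"
    "set (map (\<lambda>(a, b). (coimp a b, wzero A)) ps) \<subseteq> wcar A \<times> wcar A"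
    using ps(1) by auto
  then show "tG (T_alg A) U \<in> tcar (T_alg A)" "tH (T_alg A) U \<in> tcar (T_alg A)"
    unfolding ps(2) G_cnf[OF ps(1)] H_cnf[OF ps(1)] by (simp_all add: cnf_in_T)
qed

lemma T_carrier_empty: "{} \<in> tcar (T_alg A)"
  and T_carrier_top: "prime_filters A \<in> tcar (T_alg A)"
  using openin_topspace[of "wtop A"] closedin_topspace[of "wtop A"] by (simp_all add: T_carrier_iff)

theorem T_alg_is_tba: "is_tba (T_alg A)"
proof -
  have bd: "bdlattice (tcar (T_alg A)) (\<inter>) (\<union>) {} (prime_filters A)"
    using T_carrier_empty T_carrier_top T_carrier_closed(1,2)
    by (auto simp: bdlattice_def dest: T_carrier_subset)
  have fields: "(P, Q) \<in> wR A \<Longrightarrow> P \<in> prime_filters A \<and> Q \<in> prime_filters A" for P Q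
    by (simp add: wR_def)
  have adjoint_P: "(prime_filters A - {P \<in> prime_filters A. wS A `` {P} \<subseteq> prime_filters A - U} \<subseteq> V) \<longleftrightarrow>
      (U \<subseteq> {P \<in> prime_filters A. wR A `` {P} \<subseteq> V})"
    and adjoint_F: "(prime_filters A - {P \<in> prime_filters A. wR A `` {P} \<subseteq> prime_filters A - U} \<subseteq> V) \<longleftrightarrow>
      (U \<subseteq> {P \<in> prime_filters A. wS A `` {P} \<subseteq> V})"
    if "U \<subseteq> prime_filters A" "V \<subseteq> prime_filters A" for U V
    using that wS_iff_converse_wR fields by blast+
  show ?thesis
    unfolding is_tba_def tle_def tP_def tF_def T_alg_simps
    apply (intro conjI ballI)
    subgoal by (rule bd)
    subgoal for U using T_carrier_closed(3)[of U U] by blast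
    subgoal by blast
    subgoal for U using T_carrier_subset[of U] by blast
    subgoal for U using T_carrier_closed(4)[of U U] by (simp add: T_alg_simps)
    subgoal for U using T_carrier_closed(5)[of U U] by (simp add: T_alg_simps)
    subgoal for U V using T_carrier_subset[of U] T_carrier_subset[of V] adjoint_P[of U V]
      by (simp only: flip: inf.absorb_iff1)
    subgoal for U V using T_carrier_subset[of U] T_carrier_subset[of V] adjoint_F[of U V]
      by (simp only: flip: inf.absorb_iff1)
    done
qed

lemma wsigma_in_T: "a \<in> wcar A \<Longrightarrow> wsigma A a \<in> tcar (T_alg A)"
  unfolding wsigma_cnf by (simp add: cnf_in_T)

lemma wsigma_meet: "a \<in> wcar A \<Longrightarrow> b \<in> wcar A \<Longrightarrow> wsigma A (wmeet A a b) = wsigma A a \<inter> wsigma A b"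
  by (auto simp: wsigma_def prime_filters_eq prime_filter_meet)

lemma wsigma_join: "a \<in> wcar A \<Longrightarrow> b \<in> wcar A \<Longrightarrow> wsigma A (wjoin A a b) = wsigma A a \<union> wsigma A b"
  by (auto simp: wsigma_def prime_filters_eq prime_filter_join)

lemma wsigma_zero: "wsigma A (wzero A) = {}"
  by (auto simp: wsigma_def prime_filters_eq prime_filterD(3))

lemma wsigma_one: "wsigma A (wone A) = prime_filters A"
  by (auto simp: wsigma_def prime_filters_eq prime_filterD(2))

lemma wsigma_imp:
  assumes "a \<in> wcar A" "b \<in> wcar A"
  shows "wsigma A (imp a b) = tG (T_alg A) (tjoin (T_alg A) (tneg (T_alg A) (wsigma A a)) (wsigma A b))"
proof -
  have "tjoin (T_alg A) (tneg (T_alg A) (wsigma A a)) (wsigma A b) = cnf A [(a, b)]"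
    by (auto simp: T_alg_simps cnf_def wsigma_def)
  then show ?thesis using G_cnf[of "[(a, b)]"] assms wsigma_cnf by simp
qed

lemma wsigma_coimp:
  assumes "a \<in> wcar A" "b \<in> wcar A"
  shows "wsigma A (coimp a b) = tP (T_alg A) (tmeet (T_alg A) (wsigma A a) (tneg (T_alg A) (wsigma A b)))"
proof -
  have "tneg (T_alg A) (tmeet (T_alg A) (wsigma A a) (tneg (T_alg A) (wsigma A b))) = cnf A [(a, b)]"
    by (auto simp: T_alg_simps cnf_def wsigma_def)
  moreover have "tH (T_alg A) (cnf A [(a, b)]) = cnf A [(coimp a b, wzero A)]"
    using H_cnf[of "[(a, b)]"] assms by simp
  moreover have "cnf A [(coimp a b, wzero A)] = prime_filters A - wsigma A (coimp a b)"
    by (auto simp: cnf_def wsigma_def prime_filters_eq prime_filterD(3))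
  ultimately show ?thesis unfolding tP_def T_alg_simps by (auto simp: wsigma_def)
qed

lemma wsigma_inj: "a \<in> wcar A \<Longrightarrow> b \<in> wcar A \<Longrightarrow> wsigma A a = wsigma A b \<Longrightarrow> a = b"
  by (rule eq_if_same_prime_filters) (auto simp: wsigma_def prime_filters_eq)

end

section \<open>The WHB-reduct of a tense algebra\<close>

definition whb_of_tba :: "('a, 'b) tba_scheme \<Rightarrow> 'a whb" where
  "whb_of_tba B = \<lparr>wcar = tcar B, wmeet = tmeet B, wjoin = tjoin B,
     wimp = (\<lambda>a b. tG B (tjoin B (tneg B a) b)),
     wcoimp = (\<lambda>a b. tP B (tmeet B a (tneg B b))),
     wzero = tzero B, wone = tone B\<rparr>"

locale tba_alg =
  fixes B :: "('a, 'b) tba_scheme"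
  assumes is_tba: "is_tba B"
begin

sublocale bd_lattice "tcar B" "tmeet B" "tjoin B" "tzero B" "tone B"
  using is_tba by unfold_locales (simp add: is_tba_def)

lemma tle_iff_le: "tle B a b \<longleftrightarrow> le a b"
  by (simp add: tle_def le_def)

lemma neg_closed [simp]: "a \<in> tcar B \<Longrightarrow> tneg B a \<in> tcar B"
  and meet_neg: "a \<in> tcar B \<Longrightarrow> tmeet B a (tneg B a) = tzero B"
  and join_neg: "a \<in> tcar B \<Longrightarrow> tjoin B a (tneg B a) = tone B"
  and G_closed [simp]: "a \<in> tcar B \<Longrightarrow> tG B a \<in> tcar B"
  and H_closed [simp]: "a \<in> tcar B \<Longrightarrow> tH B a \<in> tcar B"
  using is_tba unfolding is_tba_def by blast+

lemma P_closed [simp]: "a \<in> tcar B \<Longrightarrow> tP B a \<in> tcar B"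
  by (simp add: tP_def)

lemma F_closed [simp]: "a \<in> tcar B \<Longrightarrow> tF B a \<in> tcar B"
  by (simp add: tF_def)

lemma P_adjoint: "x \<in> tcar B \<Longrightarrow> y \<in> tcar B \<Longrightarrow> le (tP B x) y \<longleftrightarrow> le x (tG B y)"
  and F_adjoint: "x \<in> tcar B \<Longrightarrow> y \<in> tcar B \<Longrightarrow> le (tF B x) y \<longleftrightarrow> le x (tH B y)"
  using is_tba unfolding is_tba_def tle_iff_le by blast+

lemma prime_filter_neg: "prime_filter P \<Longrightarrow> a \<in> tcar B \<Longrightarrow> tneg B a \<in> P \<longleftrightarrow> a \<notin> P"
proof -
  assume P: "prime_filter P" and a: "a \<in> tcar B"
  have "tmeet B a (tneg B a) \<notin> P" using meet_neg[OF a] prime_filterD(3)[OF P] by simp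
  moreover have "tjoin B a (tneg B a) \<in> P" using join_neg[OF a] prime_filterD(2)[OF P] by simp
  ultimately show ?thesis using prime_filter_meet[OF P] prime_filter_join[OF P] a by auto
qed

lemmas prime_filter_simps = prime_filterD(2,3) prime_filter_meet prime_filter_join prime_filter_neg

lemma G_mono: "x \<in> tcar B \<Longrightarrow> y \<in> tcar B \<Longrightarrow> le x y \<Longrightarrow> le (tG B x) (tG B y)"
  by (meson G_closed P_closed P_adjoint le_refl le_trans)

lemma H_mono: "x \<in> tcar B \<Longrightarrow> y \<in> tcar B \<Longrightarrow> le x y \<Longrightarrow> le (tH B x) (tH B y)"
  by (meson H_closed F_closed F_adjoint le_refl le_trans)

lemma P_mono: "x \<in> tcar B \<Longrightarrow> y \<in> tcar B \<Longrightarrow> le x y \<Longrightarrow> le (tP B x) (tP B y)"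
  by (meson G_closed P_closed P_adjoint le_refl le_trans)

lemma G_meet:
  assumes "x \<in> tcar B" "y \<in> tcar B"
  shows "tG B (tmeet B x y) = tmeet B (tG B x) (tG B y)"
proof (rule le_antisym)
  show "le (tG B (tmeet B x y)) (tmeet B (tG B x) (tG B y))"
    using assms G_mono le_meet_iff by simp
  define w where "w = tmeet B (tG B x) (tG B y)"
  have w: "w \<in> tcar B" using assms by (simp add: w_def)
  have "le w (tG B x)" "le w (tG B y)" using assms by (simp_all add: w_def)
  then have "le (tP B w) x" "le (tP B w) y" using P_adjoint[OF w assms(1)] P_adjoint[OF w assms(2)] by simp_all
  then have "le (tP B w) (tmeet B x y)" using le_meet_iff assms w by simp
  then show "le (tmeet B (tG B x) (tG B y)) (tG B (tmeet B x y))"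
    using P_adjoint[of w "tmeet B x y"] assms w by (simp add: w_def)
qed (use assms in simp_all)

lemma H_meet:
  assumes "x \<in> tcar B" "y \<in> tcar B"
  shows "tH B (tmeet B x y) = tmeet B (tH B x) (tH B y)"
proof (rule le_antisym)
  show "le (tH B (tmeet B x y)) (tmeet B (tH B x) (tH B y))"
    using assms H_mono le_meet_iff by simp
  define w where "w = tmeet B (tH B x) (tH B y)"
  have w: "w \<in> tcar B" using assms by (simp add: w_def)
  have "le w (tH B x)" "le w (tH B y)" using assms by (simp_all add: w_def)
  then have "le (tF B w) x" "le (tF B w) y" using F_adjoint[OF w assms(1)] F_adjoint[OF w assms(2)] by simp_all
  then have "le (tF B w) (tmeet B x y)" using le_meet_iff assms w by simp
  then show "le (tmeet B (tH B x) (tH B y)) (tH B (tmeet B x y))"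
    using F_adjoint[of w "tmeet B x y"] assms w by (simp add: w_def)
qed (use assms in simp_all)

lemma G_one: "tG B (tone B) = tone B"
  using P_adjoint[of "tone B" "tone B"] by (simp add: le_antisym)

lemma H_one: "tH B (tone B) = tone B"
  using F_adjoint[of "tone B" "tone B"] by (simp add: le_antisym)

lemma P_join:
  assumes "x \<in> tcar B" "y \<in> tcar B"
  shows "tP B (tjoin B x y) = tjoin B (tP B x) (tP B y)"
proof (rule le_antisym)
  show "le (tjoin B (tP B x) (tP B y)) (tP B (tjoin B x y))"
    using assms P_mono join_le_iff by simp
  define w where "w = tjoin B (tP B x) (tP B y)"
  have w: "w \<in> tcar B" using assms by (simp add: w_def)
  have "le (tP B x) w" "le (tP B y) w" using assms by (simp_all add: w_def)
  then have "le x (tG B w)" "le y (tG B w)" using P_adjoint[OF assms(1) w] P_adjoint[OF assms(2) w] by simp_all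
  then have "le (tjoin B x y) (tG B w)" using join_le_iff assms w by simp
  then show "le (tP B (tjoin B x y)) (tjoin B (tP B x) (tP B y))"
    using P_adjoint[of "tjoin B x y" w] assms w by (simp add: w_def)
qed (use assms in simp_all)

lemma P_zero: "tP B (tzero B) = tzero B"
  using P_adjoint[of "tzero B" "tzero B"] by (simp add: le_antisym)

lemma P_G_le: "y \<in> tcar B \<Longrightarrow> le (tP B (tG B y)) y"
  using P_adjoint[of "tG B y" y] by simp

lemma le_G_P: "x \<in> tcar B \<Longrightarrow> le x (tG B (tP B x))"
  using P_adjoint[of x "tP B x"] by simp

lemma G_meet_list: "set xs \<subseteq> tcar B \<Longrightarrow> tG B (meet_list xs) = meet_list (map (tG B) xs)"
  by (induction xs) (simp_all add: G_one G_meet)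

lemma H_meet_list: "set xs \<subseteq> tcar B \<Longrightarrow> tH B (meet_list xs) = meet_list (map (tH B) xs)"
  by (induction xs) (simp_all add: H_one H_meet)

text \<open>Boolean identities are checked pointwise in prime filters, where \<open>tneg B\<close> is complementation.\<close>

lemma meet_P_G_le:
  assumes a: "a \<in> tcar B" and b: "b \<in> tcar B"
  shows "le (tmeet B a (tP B (tmeet B (tG B (tjoin B (tneg B a) b)) (tneg B (tzero B))))) b"
proof -
  define y where "y = tjoin B (tneg B a) b"
  have y: "y \<in> tcar B" using a b by (simp add: y_def)
  have neg_zero: "tneg B (tzero B) = tone B"
    by (intro eq_if_same_prime_filters) (auto simp: prime_filter_simps)
  have "le (tmeet B a (tP B (tG B y))) (tmeet B a y)"
    using a y P_G_le[OF y] by (intro meet_mono) auto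
  moreover have "le (tmeet B a y) b"
    using a b unfolding y_def by (intro le_if_prime_filters) (auto simp: prime_filter_simps)
  ultimately show ?thesis
    using a b y neg_zero le_trans[of "tmeet B a (tP B (tG B y))" "tmeet B a y" b] by (simp add: y_def)
qed

lemma le_join_G_P:
  assumes a: "a \<in> tcar B" and b: "b \<in> tcar B"
  shows "le a (tjoin B b (tG B (tjoin B (tneg B (tone B)) (tP B (tmeet B a (tneg B b))))))"
proof -
  define x where "x = tmeet B a (tneg B b)"
  have x: "x \<in> tcar B" using a b by (simp add: x_def)
  have neg_one: "tjoin B (tneg B (tone B)) (tP B x) = tP B x"
    using x by (intro eq_if_same_prime_filters) (auto simp: prime_filter_simps)
  have "le a (tjoin B b x)"
    using a b unfolding x_def by (intro le_if_prime_filters) (auto simp: prime_filter_simps)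
  moreover have "le (tjoin B b x) (tjoin B b (tG B (tP B x)))"
    using b x le_G_P[OF x] by (intro join_mono) auto
  ultimately show ?thesis
    using a b x neg_one le_trans[of a "tjoin B b x" "tjoin B b (tG B (tP B x))"] by (simp add: x_def)
qed

theorem whb_of_tba_is_whb: "is_whb (whb_of_tba B)"
  unfolding is_whb_def wle_def
proof (simp add: whb_of_tba_def bdlattice, intro conjI ballI)
  fix a b c assume C: "a \<in> tcar B" "b \<in> tcar B" "c \<in> tcar B"
  show "tG B (tjoin B (tneg B a) a) = tone B"
    using join_neg[OF C(1)] C by (simp add: join_comm G_one)
  show "tG B (tjoin B (tneg B a) (tmeet B b c)) = tmeet B (tG B (tjoin B (tneg B a) b)) (tG B (tjoin B (tneg B a) c))"
    using C by (simp add: join_meet_distrib G_meet)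
  have "tjoin B (tneg B (tjoin B a b)) c = tmeet B (tjoin B (tneg B a) c) (tjoin B (tneg B b) c)"
    using C by (intro eq_if_same_prime_filters) (auto simp: prime_filter_simps)
  then show "tG B (tjoin B (tneg B (tjoin B a b)) c) = tmeet B (tG B (tjoin B (tneg B a) c)) (tG B (tjoin B (tneg B b) c))"
    using C by (simp add: G_meet)
  have "le (tmeet B (tjoin B (tneg B a) b) (tjoin B (tneg B b) c)) (tjoin B (tneg B a) c)"
    using C by (intro le_if_prime_filters) (auto simp: prime_filter_simps)
  then have "le (tG B (tmeet B (tjoin B (tneg B a) b) (tjoin B (tneg B b) c))) (tG B (tjoin B (tneg B a) c))"
    using C by (intro G_mono) auto
  then show "tmeet B (tmeet B (tG B (tjoin B (tneg B a) b)) (tG B (tjoin B (tneg B b) c))) (tG B (tjoin B (tneg B a) c)) =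
      tmeet B (tG B (tjoin B (tneg B a) b)) (tG B (tjoin B (tneg B b) c))"
    using C by (simp add: G_meet le_def)
  show "tP B (tmeet B a (tneg B a)) = tzero B"
    using meet_neg[OF C(1)] P_zero by simp
  have "tmeet B (tjoin B a b) (tneg B c) = tjoin B (tmeet B a (tneg B c)) (tmeet B b (tneg B c))"
    using C by (intro eq_if_same_prime_filters) (auto simp: prime_filter_simps)
  then show "tP B (tmeet B (tjoin B a b) (tneg B c)) = tjoin B (tP B (tmeet B a (tneg B c))) (tP B (tmeet B b (tneg B c)))"
    using C by (simp add: P_join)
  have "tmeet B a (tneg B (tmeet B b c)) = tjoin B (tmeet B a (tneg B b)) (tmeet B a (tneg B c))"
    using C by (intro eq_if_same_prime_filters) (auto simp: prime_filter_simps)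
  then show "tP B (tmeet B a (tneg B (tmeet B b c))) = tjoin B (tP B (tmeet B a (tneg B b))) (tP B (tmeet B a (tneg B c)))"
    using C by (simp add: P_join)
  have "le (tmeet B a (tneg B c)) (tjoin B (tmeet B a (tneg B b)) (tmeet B b (tneg B c)))"
    using C by (intro le_if_prime_filters) (auto simp: prime_filter_simps)
  then have "le (tP B (tmeet B a (tneg B c))) (tP B (tjoin B (tmeet B a (tneg B b)) (tmeet B b (tneg B c))))"
    using C by (intro P_mono) auto
  then show "tmeet B (tP B (tmeet B a (tneg B c))) (tjoin B (tP B (tmeet B a (tneg B b))) (tP B (tmeet B b (tneg B c)))) =
      tP B (tmeet B a (tneg B c))"
    using C by (simp add: P_join le_def)
next
  fix a b assume "a \<in> tcar B" "b \<in> tcar B"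
  then show "tmeet B (tmeet B a (tP B (tmeet B (tG B (tjoin B (tneg B a) b)) (tneg B (tzero B))))) b =
      tmeet B a (tP B (tmeet B (tG B (tjoin B (tneg B a) b)) (tneg B (tzero B))))"
    "tmeet B a (tjoin B b (tG B (tjoin B (tneg B (tone B)) (tP B (tmeet B a (tneg B b)))))) = a"
    using meet_P_G_le le_join_G_P by (simp_all add: le_def)
qed

end

section \<open>Terms, evaluation and transport of algebras\<close>

lemma wterms_simps [simp]:
  "WVar x \<in> wterms X \<longleftrightarrow> x \<in> X"
  "WMeet s t \<in> wterms X \<longleftrightarrow> s \<in> wterms X \<and> t \<in> wterms X"
  "WJoin s t \<in> wterms X \<longleftrightarrow> s \<in> wterms X \<and> t \<in> wterms X"
  "WImp s t \<in> wterms X \<longleftrightarrow> s \<in> wterms X \<and> t \<in> wterms X"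
  "WCoimp s t \<in> wterms X \<longleftrightarrow> s \<in> wterms X \<and> t \<in> wterms X"
  "WZero \<in> wterms X" "WOne \<in> wterms X"
  by (auto simp: wterms_def)

lemma tterms_simps [simp]:
  "TVar x \<in> tterms X \<longleftrightarrow> x \<in> X"
  "TMeet s t \<in> tterms X \<longleftrightarrow> s \<in> tterms X \<and> t \<in> tterms X"
  "TJoin s t \<in> tterms X \<longleftrightarrow> s \<in> tterms X \<and> t \<in> tterms X"
  "TNeg s \<in> tterms X \<longleftrightarrow> s \<in> tterms X"
  "TGt s \<in> tterms X \<longleftrightarrow> s \<in> tterms X"
  "THt s \<in> tterms X \<longleftrightarrow> s \<in> tterms X"
  "TZero \<in> tterms X" "TOne \<in> tterms X"
  by (auto simp: tterms_def)

lemma map_wterm_in_wterms: "l \<in> X \<rightarrow> Y \<Longrightarrow> s \<in> wterms X \<Longrightarrow> map_wterm l s \<in> wterms Y"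
  by (auto simp: wterms_def wterm.set_map)

lemma map_tterm_in_tterms: "l \<in> X \<rightarrow> Y \<Longrightarrow> s \<in> tterms X \<Longrightarrow> map_tterm l s \<in> tterms Y"
  by (auto simp: tterms_def tterm.set_map)

lemma weval_map_wterm: "weval A v (map_wterm l s) = weval A (v \<circ> l) s"
  by (induction s) auto

lemma teval_map_tterm: "teval A v (map_tterm l s) = teval A (v \<circ> l) s"
  by (induction s) auto

definition whb_identities :: "('a, 'b) whb_scheme \<Rightarrow> 'a \<Rightarrow> 'a \<Rightarrow> 'a \<Rightarrow> bool" where
  "whb_identities B a b c \<longleftrightarrow>
     wmeet B a b = wmeet B b a \<and> wjoin B a b = wjoin B b a \<and>
     wmeet B a (wmeet B b c) = wmeet B (wmeet B a b) c \<and> wjoin B a (wjoin B b c) = wjoin B (wjoin B a b) c \<and>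
     wmeet B a (wjoin B a b) = a \<and> wjoin B a (wmeet B a b) = a \<and>
     wmeet B a (wjoin B b c) = wjoin B (wmeet B a b) (wmeet B a c) \<and>
     wmeet B (wzero B) a = wzero B \<and> wjoin B (wone B) a = wone B \<and>
     wimp B a a = wone B \<and>
     wimp B a (wmeet B b c) = wmeet B (wimp B a b) (wimp B a c) \<and>
     wimp B (wjoin B a b) c = wmeet B (wimp B a c) (wimp B b c) \<and>
     wmeet B (wmeet B (wimp B a b) (wimp B b c)) (wimp B a c) = wmeet B (wimp B a b) (wimp B b c) \<and>
     wcoimp B a a = wzero B \<and>
     wcoimp B (wjoin B a b) c = wjoin B (wcoimp B a c) (wcoimp B b c) \<and>
     wcoimp B a (wmeet B b c) = wjoin B (wcoimp B a b) (wcoimp B a c) \<and>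
     wmeet B (wcoimp B a c) (wjoin B (wcoimp B a b) (wcoimp B b c)) = wcoimp B a c \<and>
     wmeet B (wmeet B a (wcoimp B (wimp B a b) (wzero B))) b = wmeet B a (wcoimp B (wimp B a b) (wzero B)) \<and>
     wmeet B a (wjoin B b (wimp B (wone B) (wcoimp B a b))) = a"

definition tba_identities :: "('a, 'b) tba_scheme \<Rightarrow> 'a \<Rightarrow> 'a \<Rightarrow> 'a \<Rightarrow> bool" where
  "tba_identities B a b c \<longleftrightarrow>
     tmeet B a b = tmeet B b a \<and> tjoin B a b = tjoin B b a \<and>
     tmeet B a (tmeet B b c) = tmeet B (tmeet B a b) c \<and> tjoin B a (tjoin B b c) = tjoin B (tjoin B a b) c \<and>
     tmeet B a (tjoin B a b) = a \<and> tjoin B a (tmeet B a b) = a \<and>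
     tmeet B a (tjoin B b c) = tjoin B (tmeet B a b) (tmeet B a c) \<and>
     tmeet B (tzero B) a = tzero B \<and> tjoin B (tone B) a = tone B \<and>
     tmeet B a (tneg B a) = tzero B \<and> tjoin B a (tneg B a) = tone B \<and>
     (tmeet B (tneg B (tH B (tneg B a))) b = tneg B (tH B (tneg B a)) \<longleftrightarrow> tmeet B a (tG B b) = a) \<and>
     (tmeet B (tneg B (tG B (tneg B a))) b = tneg B (tG B (tneg B a)) \<longleftrightarrow> tmeet B a (tH B b) = a)"

lemma whb_identitiesI:
  "is_whb B \<Longrightarrow> a \<in> wcar B \<Longrightarrow> b \<in> wcar B \<Longrightarrow> c \<in> wcar B \<Longrightarrow> whb_identities B a b c"
  unfolding is_whb_def bdlattice_def wle_def whb_identities_def by blast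

lemma tba_identitiesI:
  "is_tba B \<Longrightarrow> a \<in> tcar B \<Longrightarrow> b \<in> tcar B \<Longrightarrow> c \<in> tcar B \<Longrightarrow> tba_identities B a b c"
  unfolding is_tba_def bdlattice_def tle_def tP_def tF_def tba_identities_def by blast

lemma is_whbI:
  assumes "wzero B \<in> wcar B" "wone B \<in> wcar B"
    and "\<And>a b. a \<in> wcar B \<Longrightarrow> b \<in> wcar B \<Longrightarrow>
      wmeet B a b \<in> wcar B \<and> wjoin B a b \<in> wcar B \<and> wimp B a b \<in> wcar B \<and> wcoimp B a b \<in> wcar B"
    and "\<And>a b c. a \<in> wcar B \<Longrightarrow> b \<in> wcar B \<Longrightarrow> c \<in> wcar B \<Longrightarrow> whb_identities B a b c"
  shows "is_whb B"
  using assms unfolding is_whb_def bdlattice_def wle_def whb_identities_def by blast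

lemma is_tbaI:
  assumes "tzero B \<in> tcar B" "tone B \<in> tcar B"
    and "\<And>a. a \<in> tcar B \<Longrightarrow> tneg B a \<in> tcar B \<and> tG B a \<in> tcar B \<and> tH B a \<in> tcar B"
    and "\<And>a b. a \<in> tcar B \<Longrightarrow> b \<in> tcar B \<Longrightarrow> tmeet B a b \<in> tcar B \<and> tjoin B a b \<in> tcar B"
    and "\<And>a b c. a \<in> tcar B \<Longrightarrow> b \<in> tcar B \<Longrightarrow> c \<in> tcar B \<Longrightarrow> tba_identities B a b c"
  shows "is_tba B"
  using assms unfolding is_tba_def bdlattice_def tle_def tP_def tF_def tba_identities_def by blast

definition whb_subuniverse :: "('a, 'b) whb_scheme \<Rightarrow> 'a set \<Rightarrow> bool" where
  "whb_subuniverse B S \<longleftrightarrow> S \<subseteq> wcar B \<and> wzero B \<in> S \<and> wone B \<in> S \<and>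
     (\<forall>a\<in>S. \<forall>b\<in>S. wmeet B a b \<in> S \<and> wjoin B a b \<in> S \<and> wimp B a b \<in> S \<and> wcoimp B a b \<in> S)"

definition tba_subuniverse :: "('a, 'b) tba_scheme \<Rightarrow> 'a set \<Rightarrow> bool" where
  "tba_subuniverse B S \<longleftrightarrow> S \<subseteq> tcar B \<and> tzero B \<in> S \<and> tone B \<in> S \<and>
     (\<forall>a\<in>S. tneg B a \<in> S \<and> tG B a \<in> S \<and> tH B a \<in> S) \<and>
     (\<forall>a\<in>S. \<forall>b\<in>S. tmeet B a b \<in> S \<and> tjoin B a b \<in> S)"

lemma whb_subuniverse_carrier: "is_whb B \<Longrightarrow> whb_subuniverse B (wcar B)"
  unfolding whb_subuniverse_def is_whb_def bdlattice_def by blast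

lemma tba_subuniverse_carrier: "is_tba B \<Longrightarrow> tba_subuniverse B (tcar B)"
  unfolding tba_subuniverse_def is_tba_def bdlattice_def by blast

lemma weval_in_subuniverse:
  "whb_subuniverse B S \<Longrightarrow> v \<in> X \<rightarrow> S \<Longrightarrow> t \<in> wterms X \<Longrightarrow> weval B v t \<in> S"
  by (induction t) (auto simp: whb_subuniverse_def)

lemma teval_in_subuniverse:
  "tba_subuniverse B S \<Longrightarrow> v \<in> X \<rightarrow> S \<Longrightarrow> t \<in> tterms X \<Longrightarrow> teval B v t \<in> S"
  by (induction t) (auto simp: tba_subuniverse_def)

lemma whb_subuniverse_weval_image:
  assumes "is_whb B" "v \<in> X \<rightarrow> wcar B"
  shows "whb_subuniverse B (weval B v ` wterms X)"
  unfolding whb_subuniverse_def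
proof (intro conjI ballI)
  show "weval B v ` wterms X \<subseteq> wcar B"
    using weval_in_subuniverse[OF whb_subuniverse_carrier] assms by blast
  show "wzero B \<in> weval B v ` wterms X" by (force intro: image_eqI[where x = WZero])
  show "wone B \<in> weval B v ` wterms X" by (force intro: image_eqI[where x = WOne])
  fix a b assume "a \<in> weval B v ` wterms X" "b \<in> weval B v ` wterms X"
  then obtain s t where st: "s \<in> wterms X" "t \<in> wterms X" "a = weval B v s" "b = weval B v t" by blast
  show "wmeet B a b \<in> weval B v ` wterms X" using st by (force intro: image_eqI[where x = "WMeet s t"])
  show "wjoin B a b \<in> weval B v ` wterms X" using st by (force intro: image_eqI[where x = "WJoin s t"])
  show "wimp B a b \<in> weval B v ` wterms X" using st by (force intro: image_eqI[where x = "WImp s t"])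
  show "wcoimp B a b \<in> weval B v ` wterms X" using st by (force intro: image_eqI[where x = "WCoimp s t"])
qed

lemma tba_subuniverse_teval_image:
  assumes "is_tba B" "v \<in> X \<rightarrow> tcar B"
  shows "tba_subuniverse B (teval B v ` tterms X)"
  unfolding tba_subuniverse_def
proof (intro conjI ballI)
  show "teval B v ` tterms X \<subseteq> tcar B"
    using teval_in_subuniverse[OF tba_subuniverse_carrier] assms by blast
  show "tzero B \<in> teval B v ` tterms X" by (force intro: image_eqI[where x = TZero])
  show "tone B \<in> teval B v ` tterms X" by (force intro: image_eqI[where x = TOne])
  fix a assume "a \<in> teval B v ` tterms X"
  then obtain s where s: "s \<in> tterms X" "a = teval B v s" by blast
  show "tneg B a \<in> teval B v ` tterms X" using s by (force intro: image_eqI[where x = "TNeg s"])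
  show "tG B a \<in> teval B v ` tterms X" using s by (force intro: image_eqI[where x = "TGt s"])
  show "tH B a \<in> teval B v ` tterms X" using s by (force intro: image_eqI[where x = "THt s"])
next
  fix a b assume "a \<in> teval B v ` tterms X" "b \<in> teval B v ` tterms X"
  then obtain s t where st: "s \<in> tterms X" "t \<in> tterms X" "a = teval B v s" "b = teval B v t" by blast
  show "tmeet B a b \<in> teval B v ` tterms X" using st by (force intro: image_eqI[where x = "TMeet s t"])
  show "tjoin B a b \<in> teval B v ` tterms X" using st by (force intro: image_eqI[where x = "TJoin s t"])
qed

definition whb_copy :: "('b, 'c) whb_scheme \<Rightarrow> 'b set \<Rightarrow> ('b \<Rightarrow> 'd) \<Rightarrow> 'd whb" where
  "whb_copy B S g = (let h = inv_into S g in
    \<lparr>wcar = g ` S, wmeet = (\<lambda>p q. g (wmeet B (h p) (h q))), wjoin = (\<lambda>p q. g (wjoin B (h p) (h q))),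
     wimp = (\<lambda>p q. g (wimp B (h p) (h q))), wcoimp = (\<lambda>p q. g (wcoimp B (h p) (h q))),
     wzero = g (wzero B), wone = g (wone B)\<rparr>)"

definition tba_copy :: "('b, 'c) tba_scheme \<Rightarrow> 'b set \<Rightarrow> ('b \<Rightarrow> 'd) \<Rightarrow> 'd tba" where
  "tba_copy B S g = (let h = inv_into S g in
    \<lparr>tcar = g ` S, tmeet = (\<lambda>p q. g (tmeet B (h p) (h q))), tjoin = (\<lambda>p q. g (tjoin B (h p) (h q))),
     tneg = (\<lambda>p. g (tneg B (h p))), tzero = g (tzero B), tone = g (tone B),
     tG = (\<lambda>p. g (tG B (h p))), tH = (\<lambda>p. g (tH B (h p)))\<rparr>)"

lemma whb_copy_simps:
  "wcar (whb_copy B S g) = g ` S" "wzero (whb_copy B S g) = g (wzero B)" "wone (whb_copy B S g) = g (wone B)"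
  "inj_on g S \<Longrightarrow> a \<in> S \<Longrightarrow> b \<in> S \<Longrightarrow> wmeet (whb_copy B S g) (g a) (g b) = g (wmeet B a b)"
  "inj_on g S \<Longrightarrow> a \<in> S \<Longrightarrow> b \<in> S \<Longrightarrow> wjoin (whb_copy B S g) (g a) (g b) = g (wjoin B a b)"
  "inj_on g S \<Longrightarrow> a \<in> S \<Longrightarrow> b \<in> S \<Longrightarrow> wimp (whb_copy B S g) (g a) (g b) = g (wimp B a b)"
  "inj_on g S \<Longrightarrow> a \<in> S \<Longrightarrow> b \<in> S \<Longrightarrow> wcoimp (whb_copy B S g) (g a) (g b) = g (wcoimp B a b)"
  by (simp_all add: whb_copy_def Let_def)

lemma tba_copy_simps:
  "tcar (tba_copy B S g) = g ` S" "tzero (tba_copy B S g) = g (tzero B)" "tone (tba_copy B S g) = g (tone B)"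
  "inj_on g S \<Longrightarrow> a \<in> S \<Longrightarrow> tneg (tba_copy B S g) (g a) = g (tneg B a)"
  "inj_on g S \<Longrightarrow> a \<in> S \<Longrightarrow> tG (tba_copy B S g) (g a) = g (tG B a)"
  "inj_on g S \<Longrightarrow> a \<in> S \<Longrightarrow> tH (tba_copy B S g) (g a) = g (tH B a)"
  "inj_on g S \<Longrightarrow> a \<in> S \<Longrightarrow> b \<in> S \<Longrightarrow> tmeet (tba_copy B S g) (g a) (g b) = g (tmeet B a b)"
  "inj_on g S \<Longrightarrow> a \<in> S \<Longrightarrow> b \<in> S \<Longrightarrow> tjoin (tba_copy B S g) (g a) (g b) = g (tjoin B a b)"
  by (simp_all add: tba_copy_def Let_def)

lemma whb_copy_is_whb:
  assumes B: "is_whb B" and S: "whb_subuniverse B S" and inj: "inj_on g S"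
  shows "is_whb (whb_copy B S g)"
proof -
  have SC: "S \<subseteq> wcar B" and cl: "wzero B \<in> S" "wone B \<in> S"
    "\<And>a b. a \<in> S \<Longrightarrow> b \<in> S \<Longrightarrow> wmeet B a b \<in> S" "\<And>a b. a \<in> S \<Longrightarrow> b \<in> S \<Longrightarrow> wjoin B a b \<in> S"
    "\<And>a b. a \<in> S \<Longrightarrow> b \<in> S \<Longrightarrow> wimp B a b \<in> S" "\<And>a b. a \<in> S \<Longrightarrow> b \<in> S \<Longrightarrow> wcoimp B a b \<in> S"
    using S unfolding whb_subuniverse_def by blast+
  show ?thesis
  proof (rule is_whbI)
    fix p q r assume "p \<in> wcar (whb_copy B S g)" "q \<in> wcar (whb_copy B S g)" "r \<in> wcar (whb_copy B S g)"
    then obtain a b c where abc: "a \<in> S" "b \<in> S" "c \<in> S" "p = g a" "q = g b" "r = g c"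
      by (auto simp: whb_copy_simps)
    then have "whb_identities B a b c" using whb_identitiesI[OF B] SC by blast
    then show "whb_identities (whb_copy B S g) p q r"
      unfolding whb_identities_def abc(4-6)
      by (simp (no_asm) add: abc(1-3) whb_copy_simps inj inj_on_eq_iff[OF inj] cl)
  qed (auto simp: whb_copy_simps inj cl)
qed

lemma tba_copy_is_tba:
  assumes B: "is_tba B" and S: "tba_subuniverse B S" and inj: "inj_on g S"
  shows "is_tba (tba_copy B S g)"
proof -
  have SC: "S \<subseteq> tcar B" and cl: "tzero B \<in> S" "tone B \<in> S"
    "\<And>a. a \<in> S \<Longrightarrow> tneg B a \<in> S" "\<And>a. a \<in> S \<Longrightarrow> tG B a \<in> S" "\<And>a. a \<in> S \<Longrightarrow> tH B a \<in> S"
    "\<And>a b. a \<in> S \<Longrightarrow> b \<in> S \<Longrightarrow> tmeet B a b \<in> S" "\<And>a b. a \<in> S \<Longrightarrow> b \<in> S \<Longrightarrow> tjoin B a b \<in> S"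
    using S unfolding tba_subuniverse_def by blast+
  show ?thesis
  proof (rule is_tbaI)
    fix p q r assume "p \<in> tcar (tba_copy B S g)" "q \<in> tcar (tba_copy B S g)" "r \<in> tcar (tba_copy B S g)"
    then obtain a b c where abc: "a \<in> S" "b \<in> S" "c \<in> S" "p = g a" "q = g b" "r = g c"
      by (auto simp: tba_copy_simps)
    then have "tba_identities B a b c" using tba_identitiesI[OF B] SC by blast
    then show "tba_identities (tba_copy B S g) p q r"
      unfolding tba_identities_def abc(4-6)
      by (simp (no_asm) add: abc(1-3) tba_copy_simps inj inj_on_eq_iff[OF inj] cl)
  qed (auto simp: tba_copy_simps inj cl)
qed

lemma weval_whb_copy:
  assumes S: "whb_subuniverse B S" and inj: "inj_on g S" and v: "v \<in> X \<rightarrow> S" and t: "t \<in> wterms X"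
  shows "weval (whb_copy B S g) (g \<circ> v) t = g (weval B v t)"
  using t
proof (induction t)
  case (WVar x)
  then show ?case by simp
qed (use weval_in_subuniverse[OF S v] S in \<open>simp_all add: whb_copy_simps inj whb_subuniverse_def\<close>)

lemma teval_tba_copy:
  assumes S: "tba_subuniverse B S" and inj: "inj_on g S" and v: "v \<in> X \<rightarrow> S" and t: "t \<in> tterms X"
  shows "teval (tba_copy B S g) (g \<circ> v) t = g (teval B v t)"
  using t
proof (induction t)
  case (TVar x)
  then show ?case by simp
qed (use teval_in_subuniverse[OF S v] S in \<open>simp_all add: tba_copy_simps inj tba_subuniverse_def\<close>)

text \<open>\<open>whb_rel X\<close> only quantifies over algebras carried by \<open>'x wterm set\<close>. Soundness in an
  arbitrary algebra follows because the subalgebra generated by the assignment is an image of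
  \<open>wterms X\<close> and hence embeds into that type, via the fibres of the evaluation map.\<close>

theorem whb_rel_sound:
  fixes B :: "('b, 'c) whb_scheme" and s t :: "'x wterm"
  assumes st: "(s, t) \<in> whb_rel X" and B: "is_whb B" and v: "v \<in> X \<rightarrow> wcar B"
  shows "weval B v s = weval B v t"
proof -
  define S where "S = weval B v ` wterms X"
  define g :: "'b \<Rightarrow> 'x wterm set" where "g b = {r \<in> wterms X. weval B v r = b}" for b
  have S_sub: "whb_subuniverse B S" unfolding S_def by (rule whb_subuniverse_weval_image[OF B v])
  have inj: "inj_on g S" by (rule inj_onI) (auto simp: S_def g_def)
  have vS: "v \<in> X \<rightarrow> S" unfolding S_def by (force intro: image_eqI[where x = "WVar _"])
  have sX: "s \<in> wterms X" "t \<in> wterms X" using st by (auto simp: whb_rel_def)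
  have "is_whb (whb_copy B S g)" by (rule whb_copy_is_whb[OF B S_sub inj])
  moreover have "g \<circ> v \<in> X \<rightarrow> wcar (whb_copy B S g)" using vS by (auto simp: whb_copy_simps)
  ultimately have "weval (whb_copy B S g) (g \<circ> v) s = weval (whb_copy B S g) (g \<circ> v) t"
    using st unfolding whb_rel_def by blast
  then have "g (weval B v s) = g (weval B v t)" using weval_whb_copy[OF S_sub inj vS] sX by simp
  moreover have "weval B v s \<in> S" "weval B v t \<in> S" using sX by (simp_all add: S_def)
  ultimately show ?thesis using inj by (simp add: inj_on_eq_iff)
qed

theorem tba_rel_sound:
  fixes B :: "('b, 'c) tba_scheme" and s t :: "'x tterm"
  assumes st: "(s, t) \<in> tba_rel X" and B: "is_tba B" and v: "v \<in> X \<rightarrow> tcar B"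
  shows "teval B v s = teval B v t"
proof -
  define S where "S = teval B v ` tterms X"
  define g :: "'b \<Rightarrow> 'x tterm set" where "g b = {r \<in> tterms X. teval B v r = b}" for b
  have S_sub: "tba_subuniverse B S" unfolding S_def by (rule tba_subuniverse_teval_image[OF B v])
  have inj: "inj_on g S" by (rule inj_onI) (auto simp: S_def g_def)
  have vS: "v \<in> X \<rightarrow> S" unfolding S_def by (force intro: image_eqI[where x = "TVar _"])
  have sX: "s \<in> tterms X" "t \<in> tterms X" using st by (auto simp: tba_rel_def)
  have "is_tba (tba_copy B S g)" by (rule tba_copy_is_tba[OF B S_sub inj])
  moreover have "g \<circ> v \<in> X \<rightarrow> tcar (tba_copy B S g)" using vS by (auto simp: tba_copy_simps)
  ultimately have "teval (tba_copy B S g) (g \<circ> v) s = teval (tba_copy B S g) (g \<circ> v) t"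
    using st unfolding tba_rel_def by blast
  then have "g (teval B v s) = g (teval B v t)" using teval_tba_copy[OF S_sub inj vS] sX by simp
  moreover have "teval B v s \<in> S" "teval B v t \<in> S" using sX by (simp_all add: S_def)
  ultimately show ?thesis using inj by (simp add: inj_on_eq_iff)
qed

section \<open>Free algebras\<close>

definition wclass :: "'x set \<Rightarrow> 'x wterm \<Rightarrow> 'x wterm set" where
  "wclass X t = whb_rel X `` {t}"

definition tclass :: "'x set \<Rightarrow> 'x tterm \<Rightarrow> 'x tterm set" where
  "tclass X t = tba_rel X `` {t}"

lemma whb_relI:
  fixes X :: "'x set"
  assumes "s \<in> wterms X" "t \<in> wterms X"
    and "\<And>(A :: 'x wterm set whb) v. is_whb A \<Longrightarrow> v \<in> X \<rightarrow> wcar A \<Longrightarrow> weval A v s = weval A v t"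
  shows "(s, t) \<in> whb_rel X"
  using assms unfolding whb_rel_def by blast

lemma tba_relI:
  fixes X :: "'x set"
  assumes "s \<in> tterms X" "t \<in> tterms X"
    and "\<And>(A :: 'x tterm set tba) v. is_tba A \<Longrightarrow> v \<in> X \<rightarrow> tcar A \<Longrightarrow> teval A v s = teval A v t"
  shows "(s, t) \<in> tba_rel X"
  using assms unfolding tba_rel_def by blast

lemma whb_rel_equiv: "equiv (wterms X) (whb_rel X)"
  unfolding equiv_def refl_on_def sym_def trans_def whb_rel_def by auto

lemma tba_rel_equiv: "equiv (tterms X) (tba_rel X)"
  unfolding equiv_def refl_on_def sym_def trans_def tba_rel_def by auto

lemma whb_rel_terms: "(s, t) \<in> whb_rel X \<Longrightarrow> s \<in> wterms X \<and> t \<in> wterms X"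
  by (simp add: whb_rel_def)

lemma tba_rel_terms: "(s, t) \<in> tba_rel X \<Longrightarrow> s \<in> tterms X \<and> t \<in> tterms X"
  by (simp add: tba_rel_def)

lemma wclass_eq_iff: "s \<in> wterms X \<Longrightarrow> t \<in> wterms X \<Longrightarrow> wclass X s = wclass X t \<longleftrightarrow> (s, t) \<in> whb_rel X"
  unfolding wclass_def using eq_equiv_class_iff[OF whb_rel_equiv] by blast

lemma tclass_eq_iff: "s \<in> tterms X \<Longrightarrow> t \<in> tterms X \<Longrightarrow> tclass X s = tclass X t \<longleftrightarrow> (s, t) \<in> tba_rel X"
  unfolding tclass_def using eq_equiv_class_iff[OF tba_rel_equiv] by blast

lemma free_whb_carrier: "wcar (free_whb X) = wclass X ` wterms X"
  by (auto simp: free_whb_def wclass_def quotient_def)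

lemma free_tba_carrier: "tcar (free_tba X) = tclass X ` tterms X"
  by (auto simp: free_tba_def tclass_def quotient_def)

lemma wrep_wclass:
  assumes "t \<in> wterms X"
  shows "(t, wrep (wclass X t)) \<in> whb_rel X"
proof -
  have "t \<in> wclass X t" using assms unfolding wclass_def by (rule equiv_class_self[OF whb_rel_equiv])
  then have "wrep (wclass X t) \<in> wclass X t" unfolding wrep_def by (rule someI)
  then show ?thesis by (simp add: wclass_def)
qed

lemma trep_tclass:
  assumes "t \<in> tterms X"
  shows "(t, trep (tclass X t)) \<in> tba_rel X"
proof -
  have "t \<in> tclass X t" using assms unfolding tclass_def by (rule equiv_class_self[OF tba_rel_equiv])
  then have "trep (tclass X t) \<in> tclass X t" unfolding trep_def by (rule someI)
  then show ?thesis by (simp add: tclass_def)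
qed

lemma free_whb_ops:
  fixes X :: "'x set"
  assumes st: "s \<in> wterms X" "t \<in> wterms X"
  shows "wmeet (free_whb X) (wclass X s) (wclass X t) = wclass X (WMeet s t)"
    "wjoin (free_whb X) (wclass X s) (wclass X t) = wclass X (WJoin s t)"
    "wimp (free_whb X) (wclass X s) (wclass X t) = wclass X (WImp s t)"
    "wcoimp (free_whb X) (wclass X s) (wclass X t) = wclass X (WCoimp s t)"
proof -
  have r: "wrep (wclass X s) \<in> wterms X" "wrep (wclass X t) \<in> wterms X"
    using st wrep_wclass whb_rel_terms by blast+
  have e: "weval A v (wrep (wclass X s)) = weval A v s" "weval A v (wrep (wclass X t)) = weval A v t"
    if "is_whb A" "v \<in> X \<rightarrow> wcar A" for A :: "'x wterm set whb" and v
    using whb_rel_sound[OF wrep_wclass that] st by auto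
  show "wmeet (free_whb X) (wclass X s) (wclass X t) = wclass X (WMeet s t)"
    "wjoin (free_whb X) (wclass X s) (wclass X t) = wclass X (WJoin s t)"
    "wimp (free_whb X) (wclass X s) (wclass X t) = wclass X (WImp s t)"
    "wcoimp (free_whb X) (wclass X s) (wclass X t) = wclass X (WCoimp s t)"
    unfolding free_whb_def wclass_def[symmetric] using r st
    by (simp_all add: wclass_eq_iff) (rule whb_relI; simp add: e)+
qed

lemma free_whb_consts: "wzero (free_whb X) = wclass X WZero" "wone (free_whb X) = wclass X WOne"
  by (simp_all add: free_whb_def wclass_def)

lemma free_tba_ops:
  fixes X :: "'x set"
  assumes s: "s \<in> tterms X"
  shows "tneg (free_tba X) (tclass X s) = tclass X (TNeg s)"
    "tG (free_tba X) (tclass X s) = tclass X (TGt s)"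
    "tH (free_tba X) (tclass X s) = tclass X (THt s)"
    and "t \<in> tterms X \<Longrightarrow> tmeet (free_tba X) (tclass X s) (tclass X t) = tclass X (TMeet s t)"
    and "t \<in> tterms X \<Longrightarrow> tjoin (free_tba X) (tclass X s) (tclass X t) = tclass X (TJoin s t)"
proof -
  have rep: "trep (tclass X r) \<in> tterms X" if "r \<in> tterms X" for r
    using trep_tclass[OF that] tba_rel_terms by blast
  have ev: "\<And>(A :: 'x tterm set tba) v. is_tba A \<Longrightarrow> v \<in> X \<rightarrow> tcar A \<Longrightarrow> teval A v (trep (tclass X r)) = teval A v r"
    if "r \<in> tterms X" for r
    using tba_rel_sound[OF trep_tclass[OF that]] by auto
  show "tneg (free_tba X) (tclass X s) = tclass X (TNeg s)"
    "tG (free_tba X) (tclass X s) = tclass X (TGt s)"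
    "tH (free_tba X) (tclass X s) = tclass X (THt s)"
    unfolding free_tba_def tclass_def[symmetric] using rep[OF s] s
    by (simp_all add: tclass_eq_iff) (rule tba_relI; simp add: ev[OF s])+
  assume t: "t \<in> tterms X"
  show "tmeet (free_tba X) (tclass X s) (tclass X t) = tclass X (TMeet s t)"
    "tjoin (free_tba X) (tclass X s) (tclass X t) = tclass X (TJoin s t)"
    unfolding free_tba_def tclass_def[symmetric] using rep[OF s] rep[OF t] s t
    by (simp_all add: tclass_eq_iff) (rule tba_relI; simp add: ev[OF s] ev[OF t])+
qed

lemma free_tba_consts: "tzero (free_tba X) = tclass X TZero" "tone (free_tba X) = tclass X TOne"
  by (simp_all add: free_tba_def tclass_def)

text \<open>Each identity of the free algebra reduces, via \<open>wclass_eq_iff\<close>, to the same identity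
  evaluated in an arbitrary algebra of the variety.\<close>

theorem free_whb_is_whb: "is_whb (free_whb (X :: 'x set))"
proof -
  have inst: "\<And>(A :: 'x wterm set whb) v s t r. is_whb A \<Longrightarrow> v \<in> X \<rightarrow> wcar A \<Longrightarrow>
      s \<in> wterms X \<Longrightarrow> t \<in> wterms X \<Longrightarrow> r \<in> wterms X \<Longrightarrow>
      whb_identities A (weval A v s) (weval A v t) (weval A v r)"
    by (rule whb_identitiesI) (auto intro: weval_in_subuniverse[OF whb_subuniverse_carrier])
  note inst' = inst[unfolded whb_identities_def]
  show ?thesis
  proof (rule is_whbI)
    show "wzero (free_whb X) \<in> wcar (free_whb X)" "wone (free_whb X) \<in> wcar (free_whb X)"
      by (simp_all add: free_whb_carrier free_whb_consts)
    fix a b assume "a \<in> wcar (free_whb X)" "b \<in> wcar (free_whb X)"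
    then obtain s t where "s \<in> wterms X" "t \<in> wterms X" "a = wclass X s" "b = wclass X t"
      by (auto simp: free_whb_carrier)
    then show "wmeet (free_whb X) a b \<in> wcar (free_whb X) \<and> wjoin (free_whb X) a b \<in> wcar (free_whb X) \<and>
        wimp (free_whb X) a b \<in> wcar (free_whb X) \<and> wcoimp (free_whb X) a b \<in> wcar (free_whb X)"
      by (simp add: free_whb_carrier free_whb_ops)
  next
    fix p q r assume "p \<in> wcar (free_whb X)" "q \<in> wcar (free_whb X)" "r \<in> wcar (free_whb X)"
    then obtain s t u where stu: "s \<in> wterms X" "t \<in> wterms X" "u \<in> wterms X"
      and pqr: "p = wclass X s" "q = wclass X t" "r = wclass X u"
      by (auto simp: free_whb_carrier)
    show "whb_identities (free_whb X) p q r"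
      unfolding pqr whb_identities_def
      apply (simp only: free_whb_ops free_whb_consts stu wterms_simps simp_thms)
      apply (simp only: wclass_eq_iff stu wterms_simps simp_thms)
      apply (simp only: whb_rel_def mem_Collect_eq case_prod_conv wterms_simps stu simp_thms)
      apply (simp (no_asm))
      apply (intro conjI allI impI; metis inst' stu)
      done
  qed
qed

theorem free_tba_is_tba: "is_tba (free_tba (X :: 'x set))"
proof -
  have inst: "\<And>(A :: 'x tterm set tba) v s t r. is_tba A \<Longrightarrow> v \<in> X \<rightarrow> tcar A \<Longrightarrow>
      s \<in> tterms X \<Longrightarrow> t \<in> tterms X \<Longrightarrow> r \<in> tterms X \<Longrightarrow>
      tba_identities A (teval A v s) (teval A v t) (teval A v r)"
    by (rule tba_identitiesI) (auto intro: teval_in_subuniverse[OF tba_subuniverse_carrier])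
  note inst' = inst[unfolded tba_identities_def]
  show ?thesis
  proof (rule is_tbaI)
    show "tzero (free_tba X) \<in> tcar (free_tba X)" "tone (free_tba X) \<in> tcar (free_tba X)"
      by (simp_all add: free_tba_carrier free_tba_consts)
    fix a assume "a \<in> tcar (free_tba X)"
    then obtain s where "s \<in> tterms X" "a = tclass X s" by (auto simp: free_tba_carrier)
    then show "tneg (free_tba X) a \<in> tcar (free_tba X) \<and> tG (free_tba X) a \<in> tcar (free_tba X) \<and>
        tH (free_tba X) a \<in> tcar (free_tba X)"
      by (simp add: free_tba_carrier free_tba_ops)
  next
    fix a b assume "a \<in> tcar (free_tba X)" "b \<in> tcar (free_tba X)"
    then obtain s t where "s \<in> tterms X" "t \<in> tterms X" "a = tclass X s" "b = tclass X t"
      by (auto simp: free_tba_carrier)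
    then show "tmeet (free_tba X) a b \<in> tcar (free_tba X) \<and> tjoin (free_tba X) a b \<in> tcar (free_tba X)"
      by (simp add: free_tba_carrier free_tba_ops)
  next
    fix p q r assume "p \<in> tcar (free_tba X)" "q \<in> tcar (free_tba X)" "r \<in> tcar (free_tba X)"
    then obtain s t u where stu: "s \<in> tterms X" "t \<in> tterms X" "u \<in> tterms X"
      and pqr: "p = tclass X s" "q = tclass X t" "r = tclass X u"
      by (auto simp: free_tba_carrier)
    show "tba_identities (free_tba X) p q r"
      unfolding pqr tba_identities_def
      apply (simp only: free_tba_ops free_tba_consts stu tterms_simps simp_thms)
      apply (simp only: tclass_eq_iff stu tterms_simps simp_thms)
      apply (simp only: tba_rel_def mem_Collect_eq case_prod_conv tterms_simps stu simp_thms)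
      apply (simp (no_asm))
      apply (intro conjI iffI allI impI; metis inst' stu)
      done
  qed
qed

lemma whb_rel_map:
  fixes X :: "'x set" and Y :: "'y set"
  assumes st: "(s, t) \<in> whb_rel X" and l: "l \<in> X \<rightarrow> Y"
  shows "(map_wterm l s, map_wterm l t) \<in> whb_rel Y"
proof (rule whb_relI)
  show "map_wterm l s \<in> wterms Y" "map_wterm l t \<in> wterms Y"
    using st l whb_rel_terms map_wterm_in_wterms by blast+
  fix A :: "'y wterm set whb" and v assume "is_whb A" "v \<in> Y \<rightarrow> wcar A"
  moreover have "v \<circ> l \<in> X \<rightarrow> wcar A" using \<open>v \<in> Y \<rightarrow> wcar A\<close> l by auto
  ultimately show "weval A v (map_wterm l s) = weval A v (map_wterm l t)"
    unfolding weval_map_wterm using whb_rel_sound[OF st] by blast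
qed

lemma tba_rel_map:
  fixes X :: "'x set" and Y :: "'y set"
  assumes st: "(s, t) \<in> tba_rel X" and l: "l \<in> X \<rightarrow> Y"
  shows "(map_tterm l s, map_tterm l t) \<in> tba_rel Y"
proof (rule tba_relI)
  show "map_tterm l s \<in> tterms Y" "map_tterm l t \<in> tterms Y"
    using st l tba_rel_terms map_tterm_in_tterms by blast+
  fix A :: "'y tterm set tba" and v assume "is_tba A" "v \<in> Y \<rightarrow> tcar A"
  moreover have "v \<circ> l \<in> X \<rightarrow> tcar A" using \<open>v \<in> Y \<rightarrow> tcar A\<close> l by auto
  ultimately show "teval A v (map_tterm l s) = teval A v (map_tterm l t)"
    unfolding teval_map_tterm using tba_rel_sound[OF st] by blast
qed

lemma free_whb_map_wclass:
  assumes l: "l \<in> X \<rightarrow> Y" and t: "t \<in> wterms X"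
  shows "free_whb_map Y l (wclass X t) = wclass Y (map_wterm l t)"
proof -
  have "(map_wterm l t, map_wterm l (wrep (wclass X t))) \<in> whb_rel Y"
    by (rule whb_rel_map[OF wrep_wclass[OF t] l])
  then have "wclass Y (map_wterm l (wrep (wclass X t))) = wclass Y (map_wterm l t)"
    using whb_rel_terms wclass_eq_iff by metis
  then show ?thesis unfolding free_whb_map_def wclass_def by simp
qed

lemma free_tba_map_tclass:
  assumes l: "l \<in> X \<rightarrow> Y" and t: "t \<in> tterms X"
  shows "free_tba_map Y l (tclass X t) = tclass Y (map_tterm l t)"
proof -
  have "(map_tterm l t, map_tterm l (trep (tclass X t))) \<in> tba_rel Y"
    by (rule tba_rel_map[OF trep_tclass[OF t] l])
  then have "tclass Y (map_tterm l (trep (tclass X t))) = tclass Y (map_tterm l t)"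
    using tba_rel_terms tclass_eq_iff by metis
  then show ?thesis unfolding free_tba_map_def tclass_def by simp
qed

section \<open>Extending an embedding \<open>A \<rightarrow> W(B)\<close> to \<open>T(A) \<rightarrow> B\<close>\<close>

lemma list_lift_along_image: "set xs \<subseteq> f ` S \<Longrightarrow> \<exists>xs'. set xs' \<subseteq> S \<and> xs = map f xs'"
proof (induction xs)
  case (Cons x xs)
  then obtain xs' where "set xs' \<subseteq> S" "xs = map f xs'" by auto
  moreover obtain y where "y \<in> S" "x = f y" using Cons.prems by auto
  ultimately show ?case by (intro exI[of _ "y # xs'"]) auto
qed simp

definition T_ext :: "('a, 'c) whb_scheme \<Rightarrow> ('b, 'd) tba_scheme \<Rightarrow> ('a \<Rightarrow> 'b) \<Rightarrow> 'a set set \<Rightarrow> 'b" where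
  "T_ext A B f U = (THE x. x \<in> tcar B \<and> (\<forall>q. prime_filter_on (tcar B) (tmeet B) (tjoin B) (tzero B) (tone B) q \<longrightarrow>
      (x \<in> q \<longleftrightarrow> {a \<in> wcar A. f a \<in> q} \<in> U)))"

locale whb_embedding = W: whb_alg A + T: tba_alg B
  for A :: "('a, 'c) whb_scheme" and B :: "('b, 'd) tba_scheme" +
  fixes f :: "'a \<Rightarrow> 'b"
  assumes f_closed: "\<And>a. a \<in> wcar A \<Longrightarrow> f a \<in> tcar B"
    and f_meet: "\<And>a b. a \<in> wcar A \<Longrightarrow> b \<in> wcar A \<Longrightarrow> f (wmeet A a b) = tmeet B (f a) (f b)"
    and f_join: "\<And>a b. a \<in> wcar A \<Longrightarrow> b \<in> wcar A \<Longrightarrow> f (wjoin A a b) = tjoin B (f a) (f b)"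
    and f_imp: "\<And>a b. a \<in> wcar A \<Longrightarrow> b \<in> wcar A \<Longrightarrow> f (wimp A a b) = tG B (tjoin B (tneg B (f a)) (f b))"
    and f_coimp: "\<And>a b. a \<in> wcar A \<Longrightarrow> b \<in> wcar A \<Longrightarrow> f (wcoimp A a b) = tP B (tmeet B (f a) (tneg B (f b)))"
    and f_zero: "f (wzero A) = tzero B" and f_one: "f (wone A) = tone B"
    and f_inj: "inj_on f (wcar A)"
begin

definition preimage :: "'b set \<Rightarrow> 'a set" where
  "preimage q = {a \<in> wcar A. f a \<in> q}"

lemma prime_filter_preimage: "T.prime_filter q \<Longrightarrow> W.prime_filter (preimage q)"
  unfolding preimage_def
  by (rule prime_filter_on_preimage[OF _ f_closed f_meet f_join f_zero f_one W.bd_lattice_axioms])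

lemma mem_preimage: "a \<in> preimage q \<longleftrightarrow> a \<in> wcar A \<and> f a \<in> q"
  by (simp add: preimage_def)

lemma preimage_in_prime_filters: "T.prime_filter q \<Longrightarrow> preimage q \<in> prime_filters A"
  using prime_filter_preimage W.prime_filters_eq by blast

lemma f_meet_list: "set xs \<subseteq> wcar A \<Longrightarrow> f (W.meet_list xs) = T.meet_list (map f xs)"
  by (induction xs) (simp_all add: f_one f_meet)

lemma f_join_list: "set xs \<subseteq> wcar A \<Longrightarrow> f (W.join_list xs) = T.join_list (map f xs)"
  by (induction xs) (simp_all add: f_zero f_join)

text \<open>Injectivity of \<open>f\<close> is used only here.\<close>

lemma preimage_surj:
  assumes P: "W.prime_filter P"
  obtains q where "T.prime_filter q" "preimage q = P"
proof -
  have PC: "P \<subseteq> wcar A" using W.prime_filterD(1)[OF P] .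
  have no_cover: "\<not> T.le (T.meet_list xs) (T.join_list ys)"
    if xs: "set xs \<subseteq> f ` P" and ys: "set ys \<subseteq> f ` (wcar A - P)" for xs ys
  proof
    assume le: "T.le (T.meet_list xs) (T.join_list ys)"
    obtain xs' where xs': "set xs' \<subseteq> P" "xs = map f xs'"
      using list_lift_along_image[OF xs] by blast
    obtain ys' where ys': "set ys' \<subseteq> wcar A - P" "ys = map f ys'"
      using list_lift_along_image[OF ys] by blast
    have C: "set xs' \<subseteq> wcar A" "set ys' \<subseteq> wcar A" using xs' ys' PC by auto
    define m where "m = W.meet_list xs'"
    define j where "j = W.join_list ys'"
    have mj: "m \<in> wcar A" "j \<in> wcar A" using C by (simp_all add: m_def j_def)
    have "f (wmeet A m j) = f m"
      using le xs'(2) ys'(2) C mj by (simp add: m_def j_def f_meet_list f_join_list f_meet T.le_def)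
    then have "W.le m j" using f_inj mj by (simp add: W.le_def inj_on_eq_iff)
    moreover have "m \<in> P" using W.prime_filter_meet_list[OF P C(1)] xs'(1) unfolding m_def by blast
    ultimately have "j \<in> P" using W.prime_filter_up[OF P] mj by blast
    then show False using W.prime_filter_join_list[OF P C(2)] ys'(1) unfolding j_def by blast
  qed
  obtain q where q: "T.prime_filter q" "f ` P \<subseteq> q" "q \<inter> f ` (wcar A - P) = {}"
    by (rule T.prime_filter_separation_sets[of "f ` (wcar A - P)" "f ` P"]) (use f_closed PC no_cover in auto)
  have "preimage q = P" using q(2,3) PC unfolding preimage_def by blast
  then show thesis using that q(1) by blast
qed

abbreviation clause :: "'a \<times> 'a \<Rightarrow> 'b" where
  "clause \<equiv> \<lambda>(a, b). tjoin B (tneg B (f a)) (f b)"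

lemma clause_closed: "set ps \<subseteq> wcar A \<times> wcar A \<Longrightarrow> set (map clause ps) \<subseteq> tcar B"
  using f_closed by auto

lemma meet_list_clause_mem:
  assumes ps: "set ps \<subseteq> wcar A \<times> wcar A" and q: "T.prime_filter q"
  shows "T.meet_list (map clause ps) \<in> q \<longleftrightarrow> preimage q \<in> cnf A ps"
proof -
  have "T.meet_list (map clause ps) \<in> q \<longleftrightarrow> (\<forall>p\<in>set ps. clause p \<in> q)"
    using T.prime_filter_meet_list[OF q clause_closed[OF ps]] by simp
  also have "\<dots> \<longleftrightarrow> (\<forall>a b. (a, b) \<in> set ps \<longrightarrow> f a \<in> q \<longrightarrow> f b \<in> q)"
  proof -
    have "clause (a, b) \<in> q \<longleftrightarrow> (f a \<in> q \<longrightarrow> f b \<in> q)" if "(a, b) \<in> set ps" for a b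
      using that ps T.prime_filter_join[OF q] T.prime_filter_neg[OF q] f_closed by auto
    then show ?thesis by auto
  qed
  also have "\<dots> \<longleftrightarrow> preimage q \<in> cnf A ps"
    using preimage_in_prime_filters[OF q] ps by (auto simp: cnf_def preimage_def)
  finally show ?thesis .
qed

lemma T_ext_eqI:
  assumes x: "x \<in> tcar B" and mem: "\<And>q. T.prime_filter q \<Longrightarrow> x \<in> q \<longleftrightarrow> preimage q \<in> U"
  shows "T_ext A B f U = x"
  unfolding T_ext_def
proof (rule the_equality)
  show "x \<in> tcar B \<and> (\<forall>q. T.prime_filter q \<longrightarrow> (x \<in> q \<longleftrightarrow> {a \<in> wcar A. f a \<in> q} \<in> U))"
    using x mem by (simp add: preimage_def)
  fix y assume "y \<in> tcar B \<and> (\<forall>q. T.prime_filter q \<longrightarrow> (y \<in> q \<longleftrightarrow> {a \<in> wcar A. f a \<in> q} \<in> U))"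
  then show "y = x" using x mem by (intro T.eq_if_same_prime_filters) (auto simp: preimage_def)
qed

lemma T_ext_cnf:
  assumes ps: "set ps \<subseteq> wcar A \<times> wcar A"
  shows "T_ext A B f (cnf A ps) = T.meet_list (map clause ps)"
  by (rule T_ext_eqI[OF T.meet_list_closed[OF clause_closed[OF ps]] meet_list_clause_mem[OF ps]])

lemma T_ext_closed_mem:
  assumes U: "U \<in> tcar (T_alg A)"
  shows "T_ext A B f U \<in> tcar B" "T.prime_filter q \<Longrightarrow> T_ext A B f U \<in> q \<longleftrightarrow> preimage q \<in> U"
proof -
  obtain ps where ps: "set ps \<subseteq> wcar A \<times> wcar A" "U = cnf A ps" using U W.T_alg_carrier by auto
  show "T_ext A B f U \<in> tcar B" "T.prime_filter q \<Longrightarrow> T_ext A B f U \<in> q \<longleftrightarrow> preimage q \<in> U"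
    using T_ext_cnf[OF ps(1)] meet_list_clause_mem[OF ps(1)] clause_closed[OF ps(1)] ps(2) by simp_all
qed

lemma T_ext_wsigma: "a \<in> wcar A \<Longrightarrow> T_ext A B f (wsigma A a) = f a"
  by (rule T_ext_eqI) (auto simp: f_closed wsigma_def preimage_in_prime_filters mem_preimage)

lemma T_ext_G:
  assumes U: "U \<in> tcar (T_alg A)"
  shows "T_ext A B f (tG (T_alg A) U) = tG B (T_ext A B f U)"
proof -
  obtain ps where ps: "set ps \<subseteq> wcar A \<times> wcar A" "U = cnf A ps" using U W.T_alg_carrier by auto
  have GU: "tG (T_alg A) U = cnf A (map (\<lambda>(a, b). (wone A, wimp A a b)) ps)"
    using W.G_cnf[OF ps(1)] ps(2) by simp
  have GC: "set (map (tG B) (map clause ps)) \<subseteq> tcar B" using clause_closed[OF ps(1)] by auto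
  have e: "tG B (T_ext A B f U) = T.meet_list (map (tG B) (map clause ps))"
    using T_ext_cnf[OF ps(1)] ps(2) T.G_meet_list[OF clause_closed[OF ps(1)]] by simp
  show ?thesis
  proof (rule T_ext_eqI)
    show "tG B (T_ext A B f U) \<in> tcar B" using T_ext_closed_mem(1)[OF U] by simp
    fix q assume q: "T.prime_filter q"
    have "tG B (T_ext A B f U) \<in> q \<longleftrightarrow> (\<forall>a b. (a, b) \<in> set ps \<longrightarrow> tG B (clause (a, b)) \<in> q)"
      unfolding e T.prime_filter_meet_list[OF q GC] by force
    also have "\<dots> \<longleftrightarrow> (\<forall>a b. (a, b) \<in> set ps \<longrightarrow> wimp A a b \<in> preimage q)"
      using ps(1) f_imp by (fastforce simp: mem_preimage)
    also have "\<dots> \<longleftrightarrow> preimage q \<in> tG (T_alg A) U"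
      unfolding GU by (rule W.mem_cnf_imp_iff[OF prime_filter_preimage[OF q], symmetric])
    finally show "tG B (T_ext A B f U) \<in> q \<longleftrightarrow> preimage q \<in> tG (T_alg A) U" .
  qed
qed

lemma T_ext_H:
  assumes U: "U \<in> tcar (T_alg A)"
  shows "T_ext A B f (tH (T_alg A) U) = tH B (T_ext A B f U)"
proof -
  obtain ps where ps: "set ps \<subseteq> wcar A \<times> wcar A" "U = cnf A ps" using U W.T_alg_carrier by auto
  have HU: "tH (T_alg A) U = cnf A (map (\<lambda>(a, b). (wcoimp A a b, wzero A)) ps)"
    using W.H_cnf[OF ps(1)] ps(2) by simp
  have HC: "set (map (tH B) (map clause ps)) \<subseteq> tcar B" using clause_closed[OF ps(1)] by auto
  have e: "tH B (T_ext A B f U) = T.meet_list (map (tH B) (map clause ps))"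
    using T_ext_cnf[OF ps(1)] ps(2) T.H_meet_list[OF clause_closed[OF ps(1)]] by simp
  have H_clause: "tH B (clause (a, b)) = tneg B (f (wcoimp A a b))" if "a \<in> wcar A" "b \<in> wcar A" for a b
  proof -
    have "tneg B (tmeet B (f a) (tneg B (f b))) = tjoin B (tneg B (f a)) (f b)"
      using that f_closed by (intro T.eq_if_same_prime_filters) (auto simp: T.prime_filter_simps)
    moreover have "tneg B (tneg B x) = x" if "x \<in> tcar B" for x
      using that by (intro T.eq_if_same_prime_filters) (auto simp: T.prime_filter_simps)
    ultimately show ?thesis using f_coimp[OF that] that f_closed by (simp add: tP_def)
  qed
  show ?thesis
  proof (rule T_ext_eqI)
    show "tH B (T_ext A B f U) \<in> tcar B" using T_ext_closed_mem(1)[OF U] by simp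
    fix q assume q: "T.prime_filter q"
    have "tH B (T_ext A B f U) \<in> q \<longleftrightarrow> (\<forall>a b. (a, b) \<in> set ps \<longrightarrow> tH B (clause (a, b)) \<in> q)"
      unfolding e T.prime_filter_meet_list[OF q HC] by force
    also have "\<dots> \<longleftrightarrow> (\<forall>a b. (a, b) \<in> set ps \<longrightarrow> wcoimp A a b \<notin> preimage q)"
    proof -
      have "tH B (clause (a, b)) \<in> q \<longleftrightarrow> wcoimp A a b \<notin> preimage q" if "(a, b) \<in> set ps" for a b
        using that ps(1) H_clause[of a b] f_closed T.prime_filter_neg[OF q] by (auto simp: mem_preimage)
      then show ?thesis by blast
    qed
    also have "\<dots> \<longleftrightarrow> preimage q \<in> tH (T_alg A) U"
      unfolding HU by (rule W.mem_cnf_coimp_iff[OF prime_filter_preimage[OF q], symmetric])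
    finally show "tH B (T_ext A B f U) \<in> q \<longleftrightarrow> preimage q \<in> tH (T_alg A) U" .
  qed
qed

lemma T_ext_inj: "inj_on (T_ext A B f) (tcar (T_alg A))"
proof (rule inj_onI)
  fix U V assume U: "U \<in> tcar (T_alg A)" and V: "V \<in> tcar (T_alg A)" and eq: "T_ext A B f U = T_ext A B f V"
  have "P \<in> U \<longleftrightarrow> P \<in> V" if "P \<in> prime_filters A" for P
  proof -
    have "W.prime_filter P" using that W.prime_filters_eq by simp
    then obtain q where q: "T.prime_filter q" "preimage q = P" by (rule preimage_surj)
    show ?thesis using T_ext_closed_mem(2)[OF U q(1)] T_ext_closed_mem(2)[OF V q(1)] eq q(2) by simp
  qed
  then show "U = V" using W.T_carrier_subset[OF U] W.T_carrier_subset[OF V] by blast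
qed

theorem T_ext_hom: "tba_hom (T_alg A) B (T_ext A B f)"
proof -
  have closed: "T_ext A B f U \<in> tcar B"
    and mem: "T.prime_filter q \<Longrightarrow> T_ext A B f U \<in> q \<longleftrightarrow> preimage q \<in> U"
    if "U \<in> tcar (T_alg A)" for U q
    using T_ext_closed_mem[OF that] by blast+
  have meet_join: "T_ext A B f (U \<inter> V) = tmeet B (T_ext A B f U) (T_ext A B f V)"
    "T_ext A B f (U \<union> V) = tjoin B (T_ext A B f U) (T_ext A B f V)"
    if "U \<in> tcar (T_alg A)" "V \<in> tcar (T_alg A)" for U V
    by (rule T_ext_eqI; simp add: closed[OF that(1)] closed[OF that(2)] mem[OF that(1)] mem[OF that(2)]
        T.prime_filter_meet T.prime_filter_join)+
  have neg: "T_ext A B f (prime_filters A - U) = tneg B (T_ext A B f U)" if "U \<in> tcar (T_alg A)" for U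
    by (rule T_ext_eqI; simp add: closed[OF that] mem[OF that] T.prime_filter_neg preimage_in_prime_filters)
  have "T_ext A B f {} = tzero B" "T_ext A B f (prime_filters A) = tone B"
    by (rule T_ext_eqI; simp add: T.prime_filterD(2,3) preimage_in_prime_filters)+
  then show ?thesis
    unfolding tba_hom_def using closed meet_join neg T_ext_G T_ext_H
    by (simp add: W.T_alg_simps)
qed

end

section \<open>The isomorphism between \<open>T\<close> of a free WHB-algebra and the free tense algebra\<close>

primrec tterm_of_wterm :: "'x wterm \<Rightarrow> 'x tterm" where
  "tterm_of_wterm (WVar x) = TVar x"
| "tterm_of_wterm (WMeet s t) = TMeet (tterm_of_wterm s) (tterm_of_wterm t)"
| "tterm_of_wterm (WJoin s t) = TJoin (tterm_of_wterm s) (tterm_of_wterm t)"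
| "tterm_of_wterm (WImp s t) = TGt (TJoin (TNeg (tterm_of_wterm s)) (tterm_of_wterm t))"
| "tterm_of_wterm (WCoimp s t) = TNeg (THt (TNeg (TMeet (tterm_of_wterm s) (TNeg (tterm_of_wterm t)))))"
| "tterm_of_wterm WZero = TZero"
| "tterm_of_wterm WOne = TOne"

lemma teval_tterm_of_wterm: "teval B v (tterm_of_wterm s) = weval (whb_of_tba B) v s"
  by (induction s) (simp_all add: whb_of_tba_def tP_def)

lemma tterm_of_wterm_in_tterms: "s \<in> wterms X \<Longrightarrow> tterm_of_wterm s \<in> tterms X"
  by (induction s) simp_all

lemma map_tterm_of_wterm: "map_tterm l (tterm_of_wterm s) = tterm_of_wterm (map_wterm l s)"
  by (induction s) auto

lemma tba_rel_tterm_of_wterm: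
  fixes X :: "'x set"
  assumes st: "(s, t) \<in> whb_rel X"
  shows "(tterm_of_wterm s, tterm_of_wterm t) \<in> tba_rel X"
proof (rule tba_relI)
  show "tterm_of_wterm s \<in> tterms X" "tterm_of_wterm t \<in> tterms X"
    using st whb_rel_terms tterm_of_wterm_in_tterms by blast+
  fix B :: "'x tterm set tba" and v assume B: "is_tba B" and v: "v \<in> X \<rightarrow> tcar B"
  have "is_whb (whb_of_tba B)" using B by (simp add: tba_alg_def tba_alg.whb_of_tba_is_whb)
  moreover have "v \<in> X \<rightarrow> wcar (whb_of_tba B)" using v by (simp add: whb_of_tba_def)
  ultimately have "weval (whb_of_tba B) v s = weval (whb_of_tba B) v t" by (rule whb_rel_sound[OF st])
  then show "teval B v (tterm_of_wterm s) = teval B v (tterm_of_wterm t)"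
    by (simp add: teval_tterm_of_wterm)
qed

lemma (in whb_alg) teval_wsigma:
  assumes v: "v \<in> X \<rightarrow> wcar A" and s: "s \<in> wterms X"
  shows "teval (T_alg A) (wsigma A \<circ> v) (tterm_of_wterm s) = wsigma A (weval A v s)"
  using s
proof (induction s)
  case (WImp s1 s2)
  then show ?case
    using weval_in_subuniverse[OF whb_subuniverse_carrier[OF is_whb] v] by (simp add: wsigma_imp)
next
  case (WCoimp s1 s2)
  then show ?case
    using weval_in_subuniverse[OF whb_subuniverse_carrier[OF is_whb] v] by (simp add: wsigma_coimp tP_def)
qed (use weval_in_subuniverse[OF whb_subuniverse_carrier[OF is_whb] v] in
    \<open>simp_all add: wsigma_meet wsigma_join wsigma_zero wsigma_one T_alg_simps\<close>)

text \<open>Conversely, \<open>T(A)\<close> detects WHB-identities through the embedding \<open>wsigma A\<close>.\<close>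

lemma whb_rel_if_tba_rel:
  fixes X :: "'x set"
  assumes st: "s \<in> wterms X" "t \<in> wterms X" and r: "(tterm_of_wterm s, tterm_of_wterm t) \<in> tba_rel X"
  shows "(s, t) \<in> whb_rel X"
proof (rule whb_relI[OF st])
  fix A :: "'x wterm set whb" and v assume A: "is_whb A" and v: "v \<in> X \<rightarrow> wcar A"
  interpret whb_alg A using A by (simp add: whb_alg_def)
  have "wsigma A \<circ> v \<in> X \<rightarrow> tcar (T_alg A)" using v wsigma_in_T by (simp add: Pi_iff)
  then have "teval (T_alg A) (wsigma A \<circ> v) (tterm_of_wterm s) = teval (T_alg A) (wsigma A \<circ> v) (tterm_of_wterm t)"
    by (rule tba_rel_sound[OF r T_alg_is_tba])
  then have "wsigma A (weval A v s) = wsigma A (weval A v t)" using teval_wsigma[OF v] st by simp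
  then show "weval A v s = weval A v t"
    using wsigma_inj weval_in_subuniverse[OF whb_subuniverse_carrier[OF A] v] st by blast
qed

definition free_embedding :: "'x set \<Rightarrow> 'x wterm set \<Rightarrow> 'x tterm set" where
  "free_embedding X a = tclass X (tterm_of_wterm (wrep a))"

lemma free_embedding_wclass:
  assumes s: "s \<in> wterms X"
  shows "free_embedding X (wclass X s) = tclass X (tterm_of_wterm s)"
proof -
  have "(tterm_of_wterm s, tterm_of_wterm (wrep (wclass X s))) \<in> tba_rel X"
    by (rule tba_rel_tterm_of_wterm[OF wrep_wclass[OF s]])
  then show ?thesis
    unfolding free_embedding_def using tclass_eq_iff tba_rel_terms by metis
qed

theorem whb_embedding_free: "whb_embedding (free_whb X) (free_tba X) (free_embedding X)"
proof -
  interpret W: whb_alg "free_whb X" using free_whb_is_whb by (simp add: whb_alg_def)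
  interpret T: tba_alg "free_tba X" using free_tba_is_tba by (simp add: tba_alg_def)
  have classes: "\<And>a. a \<in> wcar (free_whb X) \<Longrightarrow> \<exists>s\<in>wterms X. a = wclass X s"
    by (auto simp: free_whb_carrier)
  note simps = free_embedding_wclass tterm_of_wterm_in_tterms free_whb_ops free_whb_consts
    free_tba_ops free_tba_consts free_tba_carrier tP_def
  show ?thesis
  proof unfold_locales
    fix a b assume "a \<in> wcar (free_whb X)" "b \<in> wcar (free_whb X)"
    then obtain s t where st: "s \<in> wterms X" "t \<in> wterms X" "a = wclass X s" "b = wclass X t"
      using classes by blast
    show "free_embedding X a \<in> tcar (free_tba X)" using st by (simp add: simps)
    show "free_embedding X (wmeet (free_whb X) a b) = tmeet (free_tba X) (free_embedding X a) (free_embedding X b)"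
      "free_embedding X (wjoin (free_whb X) a b) = tjoin (free_tba X) (free_embedding X a) (free_embedding X b)"
      "free_embedding X (wimp (free_whb X) a b) =
        tG (free_tba X) (tjoin (free_tba X) (tneg (free_tba X) (free_embedding X a)) (free_embedding X b))"
      "free_embedding X (wcoimp (free_whb X) a b) =
        tP (free_tba X) (tmeet (free_tba X) (free_embedding X a) (tneg (free_tba X) (free_embedding X b)))"
      using st by (simp_all add: simps)
  next
    show "free_embedding X (wzero (free_whb X)) = tzero (free_tba X)"
      "free_embedding X (wone (free_whb X)) = tone (free_tba X)"
      by (simp_all add: simps)
    show "inj_on (free_embedding X) (wcar (free_whb X))"
    proof (rule inj_onI)
      fix a b assume "a \<in> wcar (free_whb X)" "b \<in> wcar (free_whb X)" and eq: "free_embedding X a = free_embedding X b"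
      then obtain s t where st: "s \<in> wterms X" "t \<in> wterms X" "a = wclass X s" "b = wclass X t"
        using classes by blast
      then have "(tterm_of_wterm s, tterm_of_wterm t) \<in> tba_rel X"
        using eq by (simp add: free_embedding_wclass tclass_eq_iff tterm_of_wterm_in_tterms)
      then show "a = b" using whb_rel_if_tba_rel st wclass_eq_iff by blast
    qed
  qed
qed

lemma tba_subuniverse_hom_image:
  assumes A: "is_tba A" and h: "tba_hom A B h"
  shows "tba_subuniverse B (h ` tcar A)"
proof -
  have cl: "tba_subuniverse A (tcar A)" by (rule tba_subuniverse_carrier[OF A])
  show ?thesis
    unfolding tba_subuniverse_def
  proof (intro conjI ballI)
    show "h ` tcar A \<subseteq> tcar B" using h by (auto simp: tba_hom_def)
    show "tzero B \<in> h ` tcar A" "tone B \<in> h ` tcar A"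
      using h cl by (auto simp: tba_hom_def tba_subuniverse_def intro: image_eqI[of _ h, OF sym])
  next
    fix a assume "a \<in> h ` tcar A"
    then obtain x where x: "x \<in> tcar A" "a = h x" by blast
    then show "tneg B a \<in> h ` tcar A" "tG B a \<in> h ` tcar A" "tH B a \<in> h ` tcar A"
      using h cl by (auto simp: tba_hom_def tba_subuniverse_def intro: image_eqI[of _ h, OF sym])
  next
    fix a b assume "a \<in> h ` tcar A" "b \<in> h ` tcar A"
    then obtain x y where xy: "x \<in> tcar A" "y \<in> tcar A" "a = h x" "b = h y" by blast
    then have "tmeet B a b = h (tmeet A x y)" "tjoin B a b = h (tjoin A x y)"
      using h by (simp_all add: tba_hom_def)
    moreover have "tmeet A x y \<in> tcar A" "tjoin A x y \<in> tcar A"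
      using cl xy by (simp_all add: tba_subuniverse_def)
    ultimately show "tmeet B a b \<in> h ` tcar A" "tjoin B a b \<in> h ` tcar A" by simp_all
  qed
qed

lemma teval_free_tba: "t \<in> tterms X \<Longrightarrow> teval (free_tba X) (\<lambda>x. tclass X (TVar x)) t = tclass X t"
  by (induction t) (simp_all add: free_tba_ops free_tba_consts)

text \<open>Surjectivity: the image of \<open>T_ext\<close> is a subalgebra containing the generators.\<close>

lemma T_ext_free_surj:
  "T_ext (free_whb X) (free_tba X) (free_embedding X) ` tcar (T_alg (free_whb X)) = tcar (free_tba X)"
proof -
  interpret E: whb_embedding "free_whb X" "free_tba X" "free_embedding X" by (rule whb_embedding_free)
  let ?S = "T_ext (free_whb X) (free_tba X) (free_embedding X) ` tcar (T_alg (free_whb X))"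
  have S: "tba_subuniverse (free_tba X) ?S"
    by (rule tba_subuniverse_hom_image[OF E.W.T_alg_is_tba E.T_ext_hom])
  have "tclass X (TVar x) \<in> ?S" if "x \<in> X" for x
  proof -
    have w: "wclass X (WVar x) \<in> wcar (free_whb X)" using that by (simp add: free_whb_carrier)
    have "tclass X (TVar x) = T_ext (free_whb X) (free_tba X) (free_embedding X) (wsigma (free_whb X) (wclass X (WVar x)))"
      using E.T_ext_wsigma[OF w] free_embedding_wclass[of "WVar x"] that by simp
    then show ?thesis by (simp add: E.W.wsigma_in_T[OF w])
  qed
  then have "teval (free_tba X) (\<lambda>x. tclass X (TVar x)) t \<in> ?S" if "t \<in> tterms X" for t
    using teval_in_subuniverse[OF S _ that] by auto
  then have "tcar (free_tba X) \<subseteq> ?S" by (auto simp: free_tba_carrier teval_free_tba)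
  moreover have "?S \<subseteq> tcar (free_tba X)" using S by (simp add: tba_subuniverse_def)
  ultimately show ?thesis by blast
qed

lemma T_map_cnf:
  assumes A1: "is_whb A1" and A2: "is_whb A2"
    and hC: "\<And>a. a \<in> wcar A1 \<Longrightarrow> h a \<in> wcar A2"
    and hm: "\<And>a b. a \<in> wcar A1 \<Longrightarrow> b \<in> wcar A1 \<Longrightarrow> h (wmeet A1 a b) = wmeet A2 (h a) (h b)"
    and hj: "\<And>a b. a \<in> wcar A1 \<Longrightarrow> b \<in> wcar A1 \<Longrightarrow> h (wjoin A1 a b) = wjoin A2 (h a) (h b)"
    and h0: "h (wzero A1) = wzero A2" and h1: "h (wone A1) = wone A2"
    and ps: "set ps \<subseteq> wcar A1 \<times> wcar A1"
  shows "T_map A1 A2 h (cnf A1 ps) = cnf A2 (map (\<lambda>(a, b). (h a, h b)) ps)"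
proof -
  interpret W1: whb_alg A1 using A1 by (simp add: whb_alg_def)
  interpret W2: whb_alg A2 using A2 by (simp add: whb_alg_def)
  have preimage: "{a \<in> wcar A1. h a \<in> Q} \<in> prime_filters A1" if "Q \<in> prime_filters A2" for Q
    using that prime_filter_on_preimage[of "wcar A2" "wmeet A2" "wjoin A2" "wzero A2" "wone A2" Q "wcar A1" h]
      hC hm hj h0 h1 W1.bd_lattice_axioms
    by (simp add: W1.prime_filters_eq W2.prime_filters_eq)
  show ?thesis
  proof (intro set_eqI iffI)
    fix Q assume "Q \<in> T_map A1 A2 h (cnf A1 ps)"
    then show "Q \<in> cnf A2 (map (\<lambda>(a, b). (h a, h b)) ps)" using ps by (auto simp: T_map_def cnf_def)
  next
    fix Q assume Q: "Q \<in> cnf A2 (map (\<lambda>(a, b). (h a, h b)) ps)"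
    then have "\<forall>a b. (a, b) \<in> set ps \<longrightarrow> h a \<in> Q \<longrightarrow> h b \<in> Q" by (force simp: cnf_def)
    then have "{a \<in> wcar A1. h a \<in> Q} \<in> cnf A1 ps" using Q ps preimage by (auto simp: cnf_def)
    then show "Q \<in> T_map A1 A2 h (cnf A1 ps)" using Q by (simp add: T_map_def cnf_def)
  qed
qed

lemma free_whb_map_hom:
  assumes l: "l \<in> X \<rightarrow> Y"
  shows "a \<in> wcar (free_whb X) \<Longrightarrow> free_whb_map Y l a \<in> wcar (free_whb Y)"
    and "a \<in> wcar (free_whb X) \<Longrightarrow> b \<in> wcar (free_whb X) \<Longrightarrow>
      free_whb_map Y l (wmeet (free_whb X) a b) = wmeet (free_whb Y) (free_whb_map Y l a) (free_whb_map Y l b)"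
    and "a \<in> wcar (free_whb X) \<Longrightarrow> b \<in> wcar (free_whb X) \<Longrightarrow>
      free_whb_map Y l (wjoin (free_whb X) a b) = wjoin (free_whb Y) (free_whb_map Y l a) (free_whb_map Y l b)"
    and "free_whb_map Y l (wzero (free_whb X)) = wzero (free_whb Y)"
    and "free_whb_map Y l (wone (free_whb X)) = wone (free_whb Y)"
  by (auto simp: free_whb_carrier free_whb_map_wclass[OF l] free_whb_ops free_whb_consts map_wterm_in_wterms[OF l])

lemma free_tba_map_ops:
  assumes l: "l \<in> X \<rightarrow> Y"
  shows "a \<in> tcar (free_tba X) \<Longrightarrow> b \<in> tcar (free_tba X) \<Longrightarrow>
      free_tba_map Y l (tmeet (free_tba X) a b) = tmeet (free_tba Y) (free_tba_map Y l a) (free_tba_map Y l b)"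
    and "a \<in> tcar (free_tba X) \<Longrightarrow> b \<in> tcar (free_tba X) \<Longrightarrow>
      free_tba_map Y l (tjoin (free_tba X) a b) = tjoin (free_tba Y) (free_tba_map Y l a) (free_tba_map Y l b)"
    and "a \<in> tcar (free_tba X) \<Longrightarrow> free_tba_map Y l (tneg (free_tba X) a) = tneg (free_tba Y) (free_tba_map Y l a)"
    and "free_tba_map Y l (tone (free_tba X)) = tone (free_tba Y)"
  by (auto simp: free_tba_carrier free_tba_map_tclass[OF l] free_tba_ops free_tba_consts map_tterm_in_tterms[OF l])

lemma free_embedding_natural:
  assumes l: "l \<in> X \<rightarrow> Y" and a: "a \<in> wcar (free_whb X)"
  shows "free_tba_map Y l (free_embedding X a) = free_embedding Y (free_whb_map Y l a)"
  using a by (auto simp: free_whb_carrier free_embedding_wclass free_whb_map_wclass[OF l]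
      free_tba_map_tclass[OF l] tterm_of_wterm_in_tterms map_tterm_of_wterm map_wterm_in_wterms[OF l])

theorem T_ext_free_natural:
  fixes X Y :: "'x set" and l :: "'x \<Rightarrow> 'x"
  assumes l: "l \<in> X \<rightarrow> Y" and U: "U \<in> tcar (T_alg (free_whb X))"
  shows "T_ext (free_whb Y) (free_tba Y) (free_embedding Y) (T_map (free_whb X) (free_whb Y) (free_whb_map Y l) U) =
         free_tba_map Y l (T_ext (free_whb X) (free_tba X) (free_embedding X) U)"
proof -
  interpret EX: whb_embedding "free_whb X" "free_tba X" "free_embedding X" by (rule whb_embedding_free)
  interpret EY: whb_embedding "free_whb Y" "free_tba Y" "free_embedding Y" by (rule whb_embedding_free)
  let ?h = "free_whb_map Y l" and ?k = "free_tba_map Y l"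
  obtain ps where ps: "set ps \<subseteq> wcar (free_whb X) \<times> wcar (free_whb X)" "U = cnf (free_whb X) ps"
    using U EX.W.T_alg_carrier by auto
  define ps' where "ps' = map (\<lambda>(a, b). (?h a, ?h b)) ps"
  have ps': "set ps' \<subseteq> wcar (free_whb Y) \<times> wcar (free_whb Y)"
    using ps(1) free_whb_map_hom(1)[OF l] by (auto simp: ps'_def)
  have "T_map (free_whb X) (free_whb Y) ?h U = cnf (free_whb Y) ps'"
    unfolding ps(2) ps'_def
    by (rule T_map_cnf[OF free_whb_is_whb free_whb_is_whb free_whb_map_hom[OF l] ps(1)])
  moreover have "map EY.clause ps' = map ?k (map EX.clause ps)"
    using ps(1) by (auto simp: ps'_def free_tba_map_ops[OF l] EX.f_closed free_embedding_natural[OF l])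
  moreover have "?k (EX.T.meet_list xs) = EY.T.meet_list (map ?k xs)" if "set xs \<subseteq> tcar (free_tba X)" for xs
    using that by (induction xs) (simp_all add: free_tba_map_ops[OF l])
  ultimately show ?thesis
    using EY.T_ext_cnf[OF ps'] EX.T_ext_cnf[OF ps(1)] ps(2) EX.clause_closed[OF ps(1)] by simp
qed

theorem theorem6p10:
  "\<exists>\<eta> :: 'x set \<Rightarrow> 'x wterm set set set \<Rightarrow> 'x tterm set.
     (\<forall>X. tba_iso (T_alg (free_whb X)) (free_tba X) (\<eta> X)) \<and>
     (\<forall>X Y (l :: 'x \<Rightarrow> 'x). l \<in> X \<rightarrow> Y \<longrightarrow>
        (\<forall>U \<in> tcar (T_alg (free_whb X)).
           \<eta> Y (T_map (free_whb X) (free_whb Y) (free_whb_map Y l) U) = free_tba_map Y l (\<eta> X U)))"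
proof (intro exI[of _ "\<lambda>X. T_ext (free_whb X) (free_tba X) (free_embedding X)"] conjI allI impI ballI)
  fix X :: "'x set"
  interpret E: whb_embedding "free_whb X" "free_tba X" "free_embedding X" by (rule whb_embedding_free)
  show "tba_iso (T_alg (free_whb X)) (free_tba X) (T_ext (free_whb X) (free_tba X) (free_embedding X))"
    unfolding tba_iso_def bij_betw_def using E.T_ext_hom E.T_ext_inj T_ext_free_surj by blast
next
  fix X Y :: "'x set" and l :: "'x \<Rightarrow> 'x" and U
  assume "l \<in> X \<rightarrow> Y" "U \<in> tcar (T_alg (free_whb X))"
  then show "T_ext (free_whb Y) (free_tba Y) (free_embedding Y) (T_map (free_whb X) (free_whb Y) (free_whb_map Y l) U) =
      free_tba_map Y l (T_ext (free_whb X) (free_tba X) (free_embedding X) U)"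
    by (rule T_ext_free_natural)
qed

end
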